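(* Let $\rho$ be a density operator on $\mathcal{H}_n\otimes\mathcal{H}_n$ whose range is contained in $\mathcal{K}$ (so $\mathrm{Tr}\rho=1$), and let $\mathcal{E}=\{p_i,U_i\}$ be an ensemble of Gaussian unitaries which is Majorana mixing. Then $$\mathcal{T}_{\mathcal{E}}(\rho)=\frac{\Pi_{\mathcal{K}}}{\dim\mathcal{K}},$$ where $\Pi_{\mathcal{K}}$ is the orthogonal projector onto $\mathcal{K}$.
   Context: $\mathcal{H}_n$ is the Fock space of $n$ fermionic modes with Majorana operators $c_1,\dots,c_{2n}$ ($c_{2j-1}=a_j+a_j^\dagger$, $c_{2j}=-i(a_j-a_j^\dagger)$). For $x\in\{0,1\}^{2n}$ let $c(x)=c_1^{x_1}c_2^{x_2}\cdots c_{2n}^{x_{2n}}$ and $|x|$ its Hamming weight. Let $\Lambda=\sum_{p=1}^{2n}c_p\otimes c_p$ acting on $\mathcal{H}_n\otimes\mathcal{H}_n$ (ordinary tensor product), and $\mathcal{K}=\ker\Lambda$. For $k=0,\dots,2n$ let $T_k=\binom{2n}{k}^{-1}\sum_{y\in\{0,1\}^{2n},|y|=k}c(y)\otimes c(y)$. A Gaussian unitary is a unitary $U$ on $\mathcal{H}_n$ with $Uc_pU^\dagger=\sum_qR_{pq}c_q$ for a real orthogonal $R$. A probability distribution $\mathcal{E}=\{p_i,U_i\}$ over Gaussian unitaries is Majorana mixing if $\sum_ip_i(U_i\otimes U_i)[c(x)\otimes c(x)](U_i^\dagger\otimes U_i^\dagger)=T_{|x|}$ for all $x\in\{0,1\}^{2n}$.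 The channel $\mathcal{T}_{\mathcal{E}}$ is $\mathcal{T}_{\mathcal{E}}(\sigma)=\sum_ip_i(U_i\otimes U_i)\Big[\frac{1}{2^{2n}}\sum_{x\in\{0,1\}^{2n}}(c(x)\otimes c(x))\sigma(c(x)^\dagger\otimes c(x)^\dagger)\Big](U_i^\dagger\otimes U_i^\dagger)$. *)

theory Defs
  imports "Jordan_Normal_Form.Matrix_Kernel" "Jordan_Normal_Form.Schur_Decomposition"
begin

text \<open>The Fock space H_n of
  n fermionic modes is C^(2^n), with orthonormal occupation-number basis |x_0 ... x_(n-1)>
  indexed by i < 2^n, where x_k = bit k of i.  H_n (x) H_n is C^(4^n) and the ordinary
  tensor product of operators is the Kronecker product.\<close>

definition dag :: "complex mat \<Rightarrow> complex mat" where
  "dag A = mat_adjoint A"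

definition kron :: "complex mat \<Rightarrow> complex mat \<Rightarrow> complex mat" where
  "kron A B = mat (dim_row A * dim_row B) (dim_col A * dim_col B)
     (\<lambda>(i, j). A $$ (i div dim_row B, j div dim_col B) * B $$ (i mod dim_row B, j mod dim_col B))"

definition msum :: "nat \<Rightarrow> 'i set \<Rightarrow> ('i \<Rightarrow> complex mat) \<Rightarrow> complex mat" where
  "msum N I f = mat N N (\<lambda>(i, j). \<Sum>k\<in>I. f k $$ (i, j))"

definition occ :: "nat \<Rightarrow> nat \<Rightarrow> bool" where
  "occ i k = odd (i div 2 ^ k)"

text \<open>Annihilation operator a_(k+1) (mode index k is 0-based), with the Jordan-Wigner sign:
  a_(k+1)|x> = (-1)^(x_0+...+x_(k-1)) |x - e_k> if x_k = 1, and 0 otherwise.\<close>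
definition annih :: "nat \<Rightarrow> nat \<Rightarrow> complex mat" where
  "annih n k = mat (2 ^ n) (2 ^ n) (\<lambda>(r, c).
     if occ c k \<and> r = c - 2 ^ k then (- 1) ^ card {l. l < k \<and> occ c l} else 0)"

definition majorana :: "nat \<Rightarrow> nat \<Rightarrow> complex mat" where
  "majorana n p = (let a = annih n ((p - 1) div 2) in
     if odd p then a + dag a else (- \<i>) \<cdot>\<^sub>m (a - dag a))"

text \<open>Binary strings x in {0,1}^(2n) are bool lists of length 2n; x ! (p-1) is x_p.\<close>
definition bitstrings :: "nat \<Rightarrow> bool list set" where
  "bitstrings n = {x. length x = 2 * n}"

definition hw :: "bool list \<Rightarrow> nat" where
  "hw x = length (filter id x)"

definition cmon :: "nat \<Rightarrow> bool list \<Rightarrow> complex mat" where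
  "cmon n x = foldr (\<lambda>p M. (if x ! (p - 1) then majorana n p else 1\<^sub>m (2 ^ n)) * M)
                [1..<2 * n + 1] (1\<^sub>m (2 ^ n))"

definition Lambda :: "nat \<Rightarrow> complex mat" where
  "Lambda n = msum (4 ^ n) {1..2 * n} (\<lambda>p. kron (majorana n p) (majorana n p))"

definition Kspace :: "nat \<Rightarrow> complex vec set" where
  "Kspace n = mat_kernel (Lambda n)"

definition Tk :: "nat \<Rightarrow> nat \<Rightarrow> complex mat" where
  "Tk n k = (1 / of_nat (2 * n choose k)) \<cdot>\<^sub>m
     msum (4 ^ n) {y \<in> bitstrings n. hw y = k} (\<lambda>y. kron (cmon n y) (cmon n y))"

definition unitary_mat :: "nat \<Rightarrow> complex mat \<Rightarrow> bool" where
  "unitary_mat N U \<longleftrightarrow> U \<in> carrier_mat N N \<and> U * dag U = 1\<^sub>m N \<and> dag U * U = 1\<^sub>m N"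

definition gaussian_unitary :: "nat \<Rightarrow> complex mat \<Rightarrow> bool" where
  "gaussian_unitary n U \<longleftrightarrow> unitary_mat (2 ^ n) U \<and>
     (\<exists>R :: nat \<Rightarrow> nat \<Rightarrow> real.
        (\<forall>p\<in>{1..2 * n}. \<forall>p'\<in>{1..2 * n}.
           (\<Sum>q\<in>{1..2 * n}. R p q * R p' q) = (if p = p' then 1 else 0)) \<and>
        (\<forall>p\<in>{1..2 * n}. U * majorana n p * dag U =
           msum (2 ^ n) {1..2 * n} (\<lambda>q. complex_of_real (R p q) \<cdot>\<^sub>m majorana n q)))"

definition gaussian_ensemble :: "nat \<Rightarrow> 'i set \<Rightarrow> ('i \<Rightarrow> real) \<Rightarrow> ('i \<Rightarrow> complex mat) \<Rightarrow> bool" where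
  "gaussian_ensemble n I pr U \<longleftrightarrow> finite I \<and> (\<forall>i\<in>I. 0 \<le> pr i) \<and> (\<Sum>i\<in>I. pr i) = 1 \<and>
     (\<forall>i\<in>I. gaussian_unitary n (U i))"

definition majorana_mixing :: "nat \<Rightarrow> 'i set \<Rightarrow> ('i \<Rightarrow> real) \<Rightarrow> ('i \<Rightarrow> complex mat) \<Rightarrow> bool" where
  "majorana_mixing n I pr U \<longleftrightarrow>
     (\<forall>x\<in>bitstrings n.
        msum (4 ^ n) I (\<lambda>i. complex_of_real (pr i) \<cdot>\<^sub>m
          (kron (U i) (U i) * kron (cmon n x) (cmon n x) * dag (kron (U i) (U i))))
        = Tk n (hw x))"

definition channel :: "nat \<Rightarrow> 'i set \<Rightarrow> ('i \<Rightarrow> real) \<Rightarrow> ('i \<Rightarrow> complex mat) \<Rightarrow> complex mat \<Rightarrow> complex mat" where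
  "channel n I pr U \<sigma> =
     msum (4 ^ n) I (\<lambda>i. complex_of_real (pr i) \<cdot>\<^sub>m
       (kron (U i) (U i) *
        ((1 / 2 ^ (2 * n)) \<cdot>\<^sub>m msum (4 ^ n) (bitstrings n)
           (\<lambda>x. kron (cmon n x) (cmon n x) * \<sigma> * dag (kron (cmon n x) (cmon n x))))
        * dag (kron (U i) (U i))))"

definition mtrace :: "complex mat \<Rightarrow> complex" where
  "mtrace A = (\<Sum>i<dim_row A. A $$ (i, i))"

definition density_op :: "nat \<Rightarrow> complex mat \<Rightarrow> bool" where
  "density_op N \<rho> \<longleftrightarrow> \<rho> \<in> carrier_mat N N \<and> dag \<rho> = \<rho> \<and>
     (\<forall>v\<in>carrier_vec N. 0 \<le> Re (conjugate v \<bullet> (\<rho> *\<^sub>v v))) \<and> mtrace \<rho> = 1"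

definition is_orth_proj :: "nat \<Rightarrow> complex mat \<Rightarrow> complex vec set \<Rightarrow> bool" where
  "is_orth_proj N P S \<longleftrightarrow> P \<in> carrier_mat N N \<and> dag P = P \<and> P * P = P \<and>
     (\<lambda>v. P *\<^sub>v v) ` carrier_vec N = S"

definition orth_proj :: "nat \<Rightarrow> complex vec set \<Rightarrow> complex mat" where
  "orth_proj N S = (THE P. is_orth_proj N P S)"

end

theory Submission
  imports Defs
begin

text \<open>The 2n operators L_p = c_p \<otimes> c_p are commuting Hermitian involutions, so C^(4^n) splits
  into their joint eigenprojections P_A, A \<in> {0,1}^(2n), where L_p acts on P_A by +1 iff A_p.
  Each P_A has trace one, \<Lambda> P_A = (2|A| - 2n) P_A, and c(x) \<otimes> c(x) acts on P_A by the character
  \<chi>_A(x), the product of the signs of L_p over the p with x_p.  Hence \<Pi> = \<Sum>_{|A|=n} P_A is the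
  projector onto K and dim K is the number of balanced A.  Orthogonality of the characters turns
  the average over x into the pinching X \<mapsto> \<Sum>_A P_A X P_A, which maps any \<rho> supported on K to
  \<Sum>_{|A|=n} tr(P_A \<rho>) P_A.  Expanding P_A in the c(x) \<otimes> c(x) and using Majorana mixing, the
  averaged conjugate of P_A depends only on the weight sums of \<chi>_A, i.e. on the polynomial
  (1+t)^|A| (1-t)^(2n-|A|); so it is one matrix M for all balanced A, and the channel maps \<rho> to
  (tr \<rho>) M.  Applied to \<Pi> itself, which is invariant because Gaussian unitaries preserve \<Lambda>,
  this gives \<Pi> = dim K \<cdot> M.\<close>

lemma dag_dims[simp]: "dim_row (dag A) = dim_col A" "dim_col (dag A) = dim_row A"
  unfolding dag_def mat_adjoint_def by auto

lemma dag_index[simp]: "i < dim_col A \<Longrightarrow> j < dim_row A \<Longrightarrow> dag A $$ (i,j) = cnj (A $$ (j,i))"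
  unfolding dag_def mat_adjoint_def by (auto simp: mat_of_rows_index)

lemma dag_carrier[simp]: "A \<in> carrier_mat n m \<Longrightarrow> dag A \<in> carrier_mat m n"
  by auto

lemma dag_dag[simp]: "dag (dag A) = A"
  by (rule eq_matI, auto)

lemma dag_mult: "A \<in> carrier_mat n m \<Longrightarrow> B \<in> carrier_mat m k \<Longrightarrow> dag (A * B) = dag B * dag A"
  by (rule eq_matI, auto simp: scalar_prod_def sum_distrib_left mult.commute intro!: sum.cong)

lemma dag_one[simp]: "dag (1\<^sub>m n) = 1\<^sub>m n"
  by (rule eq_matI, auto)

lemma dag_zero[simp]: "dag (0\<^sub>m n n) = 0\<^sub>m n n"
  by (rule eq_matI, auto)

lemma dag_smult: "dag (c \<cdot>\<^sub>m A) = cnj c \<cdot>\<^sub>m dag A"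
  by (rule eq_matI, auto)

lemma dag_add: "A \<in> carrier_mat n m \<Longrightarrow> B \<in> carrier_mat n m \<Longrightarrow> dag (A + B) = dag A + dag B"
  by (rule eq_matI, auto)

lemma smult_one_mat[simp]: "(1::'a::monoid_mult) \<cdot>\<^sub>m A = A"
  by (rule eq_matI, auto)

lemma smult_smult: "a \<cdot>\<^sub>m (b \<cdot>\<^sub>m A) = (a * b :: 'a :: semigroup_mult) \<cdot>\<^sub>m A"
  by (rule eq_matI, auto simp: mult.assoc)

lemma zero_smult_mat[simp]: "(0::complex) \<cdot>\<^sub>m A = 0\<^sub>m (dim_row A) (dim_col A)"
  by (rule eq_matI) auto

lemma msum_dims[simp]: "dim_row (msum N I f) = N" "dim_col (msum N I f) = N"
  unfolding msum_def by auto

lemma msum_carrier[simp]: "msum N I f \<in> carrier_mat N N"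
  unfolding carrier_mat_def by auto

lemma msum_index[simp]: "i < N \<Longrightarrow> j < N \<Longrightarrow> msum N I f $$ (i,j) = (\<Sum>k\<in>I. f k $$ (i,j))"
  unfolding msum_def by auto

lemma msum_cong: "(\<And>k. k \<in> I \<Longrightarrow> f k = g k) \<Longrightarrow> msum N I f = msum N I g"
  unfolding msum_def by (auto intro!: sum.cong)

lemma msum_mult_left: assumes "A \<in> carrier_mat N N" "\<And>k. k \<in> I \<Longrightarrow> f k \<in> carrier_mat N N"
  shows "A * msum N I f = msum N I (\<lambda>k. A * f k)"
proof (rule eq_matI)
  fix i j assume "i < dim_row (msum N I (\<lambda>k. A * f k))" "j < dim_col (msum N I (\<lambda>k. A * f k))"
  then have ij: "i < N" "j < N" by auto
  have "(A * msum N I f) $$ (i,j) = (\<Sum>l<N. A $$ (i,l) * (\<Sum>k\<in>I. f k $$ (l,j)))"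
    using assms ij by (auto simp: scalar_prod_def lessThan_atLeast0 intro!: sum.cong)
  also have "\<dots> = (\<Sum>k\<in>I. \<Sum>l<N. A $$ (i,l) * f k $$ (l,j))"
    by (simp add: sum_distrib_left sum.swap[of _ I])
  also have "\<dots> = msum N I (\<lambda>k. A * f k) $$ (i,j)"
  proof -
    have "(A * f k) $$ (i,j) = (\<Sum>l<N. A $$ (i,l) * f k $$ (l,j))" if "k \<in> I" for k
      using assms(1) assms(2)[OF that] ij by (auto simp: scalar_prod_def lessThan_atLeast0 intro!: sum.cong)
    then show ?thesis using ij by simp
  qed
  finally show "(A * msum N I f) $$ (i,j) = msum N I (\<lambda>k. A * f k) $$ (i,j)" .
qed (use assms in auto)

lemma msum_mult_right: assumes "A \<in> carrier_mat N N" "\<And>k. k \<in> I \<Longrightarrow> f k \<in> carrier_mat N N"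
  shows "msum N I f * A = msum N I (\<lambda>k. f k * A)"
proof (rule eq_matI)
  fix i j assume "i < dim_row (msum N I (\<lambda>k. f k * A))" "j < dim_col (msum N I (\<lambda>k. f k * A))"
  then have ij: "i < N" "j < N" by auto
  have "(msum N I f * A) $$ (i,j) = (\<Sum>l<N. (\<Sum>k\<in>I. f k $$ (i,l)) * A $$ (l,j))"
    using assms ij by (auto simp: scalar_prod_def lessThan_atLeast0 intro!: sum.cong)
  also have "\<dots> = (\<Sum>k\<in>I. \<Sum>l<N. f k $$ (i,l) * A $$ (l,j))"
    by (simp add: sum_distrib_right sum.swap[of _ I])
  also have "\<dots> = msum N I (\<lambda>k. f k * A) $$ (i,j)"
  proof -
    have "(f k * A) $$ (i,j) = (\<Sum>l<N. f k $$ (i,l) * A $$ (l,j))" if "k \<in> I" for k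
      using assms(1) assms(2)[OF that] ij by (auto simp: scalar_prod_def lessThan_atLeast0 intro!: sum.cong)
    then show ?thesis using ij by simp
  qed
  finally show "(msum N I f * A) $$ (i,j) = msum N I (\<lambda>k. f k * A) $$ (i,j)" .
qed (use assms in auto)

lemma msum_smult: assumes "\<And>k. k \<in> I \<Longrightarrow> f k \<in> carrier_mat N N"
  shows "c \<cdot>\<^sub>m msum N I f = msum N I (\<lambda>k. c \<cdot>\<^sub>m f k)"
proof (rule eq_matI)
  fix i j assume "i < dim_row (msum N I (\<lambda>k. c \<cdot>\<^sub>m f k))" "j < dim_col (msum N I (\<lambda>k. c \<cdot>\<^sub>m f k))"
  then have ij: "i < N" "j < N" by auto
  have "(c \<cdot>\<^sub>m f k) $$ (i,j) = c * f k $$ (i,j)" if "k \<in> I" for k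
    using assms[OF that] ij by auto
  then show "(c \<cdot>\<^sub>m msum N I f) $$ (i, j) = msum N I (\<lambda>k. c \<cdot>\<^sub>m f k) $$ (i, j)"
    using ij by (simp add: sum_distrib_left)
qed auto

lemma msum_smult_const: assumes "A \<in> carrier_mat N N"
  shows "msum N I (\<lambda>k. c k \<cdot>\<^sub>m A) = (\<Sum>k\<in>I. c k) \<cdot>\<^sub>m A"
  by (rule eq_matI, use assms in \<open>auto simp: sum_distrib_right\<close>)

lemma msum_swap: "msum N I (\<lambda>i. msum N J (f i)) = msum N J (\<lambda>j. msum N I (\<lambda>i. f i j))"
  by (rule eq_matI, auto simp: sum.swap[of _ I])

lemma msum_zero: "(\<And>k. k \<in> I \<Longrightarrow> f k = 0\<^sub>m N N) \<Longrightarrow> msum N I f = 0\<^sub>m N N"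
  by (rule eq_matI, auto)

lemma msum_delta: assumes "finite I" "a \<in> I" "f a \<in> carrier_mat N N" "\<And>k. k \<in> I \<Longrightarrow> k \<noteq> a \<Longrightarrow> f k = 0\<^sub>m N N"
  shows "msum N I f = f a"
proof (rule eq_matI)
  fix i j assume ij: "i < dim_row (f a)" "j < dim_col (f a)"
  then have ij': "i < N" "j < N" using assms by auto
  have "(\<Sum>k\<in>I. f k $$ (i,j)) = f a $$ (i,j) + (\<Sum>k\<in>I-{a}. f k $$ (i,j))"
    by (rule sum.remove) (use assms in auto)
  also have "(\<Sum>k\<in>I-{a}. f k $$ (i,j)) = 0"
    by (rule sum.neutral) (use assms ij' in auto)
  finally have "(\<Sum>k\<in>I. f k $$ (i,j)) = f a $$ (i,j)" by simp
  then show "msum N I f $$ (i,j) = f a $$ (i,j)" using ij' by simp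
qed (use assms in auto)

lemma msum_subset: assumes "J \<subseteq> I" "finite I" "\<And>k. k \<in> I - J \<Longrightarrow> f k = 0\<^sub>m N N"
  shows "msum N I f = msum N J f"
proof (rule eq_matI)
  fix i j assume "i < dim_row (msum N J f)" "j < dim_col (msum N J f)"
  then have ij: "i < N" "j < N" by auto
  have "(\<Sum>k\<in>I. f k $$ (i,j)) = (\<Sum>k\<in>J. f k $$ (i,j))"
    by (rule sum.mono_neutral_right) (use assms ij in auto)
  then show "msum N I f $$ (i,j) = msum N J f $$ (i,j)" using ij by simp
qed auto

lemma msum_dag: assumes "\<And>k. k \<in> I \<Longrightarrow> f k \<in> carrier_mat N N"
  shows "dag (msum N I f) = msum N I (\<lambda>k. dag (f k))"
proof (rule eq_matI)
  fix i j assume "i < dim_row (msum N I (\<lambda>k. dag (f k)))" "j < dim_col (msum N I (\<lambda>k. dag (f k)))"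
  then have ij: "i < N" "j < N" by auto
  have "dag (f k) $$ (i,j) = cnj (f k $$ (j,i))" if "k \<in> I" for k
    using assms[OF that] ij by auto
  then show "dag (msum N I f) $$ (i, j) = msum N I (\<lambda>k. dag (f k)) $$ (i, j)" using ij by simp
qed auto

lemma msum_partition: assumes "finite I" "\<And>x. x \<in> I \<Longrightarrow> h x \<in> K" "finite K"
  shows "msum N I f = msum N K (\<lambda>k. msum N {x\<in>I. h x = k} f)"
proof (rule eq_matI)
  fix i j assume "i < dim_row (msum N K (\<lambda>k. msum N {x\<in>I. h x = k} f))" "j < dim_col (msum N K (\<lambda>k. msum N {x\<in>I. h x = k} f))"
  then have ij: "i < N" "j < N" by auto
  have "(\<Sum>x\<in>I. f x $$ (i,j)) = (\<Sum>k\<in>K. \<Sum>x\<in>{x\<in>I. h x = k}. f x $$ (i,j))"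
    by (rule sum.group[symmetric]) (use assms in auto)
  then show "msum N I f $$ (i,j) = msum N K (\<lambda>k. msum N {x\<in>I. h x = k} f) $$ (i,j)"
    using ij by simp
qed auto

lemma msum_msum_delta: assumes I: "finite I" and M: "\<And>a b. a \<in> I \<Longrightarrow> b \<in> I \<Longrightarrow> M a b \<in> carrier_mat N N"
  shows "msum N I (\<lambda>a. msum N I (\<lambda>b. (if a = b then c else 0) \<cdot>\<^sub>m M a b)) = msum N I (\<lambda>a. c \<cdot>\<^sub>m M a a)"
proof (rule msum_cong)
  fix a assume a: "a \<in> I"
  have "msum N I (\<lambda>b. (if a = b then c else 0) \<cdot>\<^sub>m M a b) = (if a = a then c else 0) \<cdot>\<^sub>m M a a"
  proof (rule msum_delta)
    fix b assume "b \<in> I" "b \<noteq> a"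
    then show "(if a = b then c else 0) \<cdot>\<^sub>m M a b = 0\<^sub>m N N" using M[OF a, of b] by auto
  qed (use I a M in auto)
  then show "msum N I (\<lambda>b. (if a = b then c else 0) \<cdot>\<^sub>m M a b) = c \<cdot>\<^sub>m M a a" by simp
qed

lemma msum_collect_outer:
  assumes K: "\<And>q q'. q \<in> J \<Longrightarrow> q' \<in> J' \<Longrightarrow> K q q' \<in> carrier_mat N N"
  shows "msum N I (\<lambda>p. msum N J (\<lambda>q. msum N J' (\<lambda>q'. c p q q' \<cdot>\<^sub>m K q q')))
    = msum N J (\<lambda>q. msum N J' (\<lambda>q'. (\<Sum>p\<in>I. c p q q') \<cdot>\<^sub>m K q q'))"
proof -
  have "msum N I (\<lambda>p. msum N J (\<lambda>q. msum N J' (\<lambda>q'. c p q q' \<cdot>\<^sub>m K q q')))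
      = msum N J (\<lambda>q. msum N I (\<lambda>p. msum N J' (\<lambda>q'. c p q q' \<cdot>\<^sub>m K q q')))"
    by (rule msum_swap)
  also have "\<dots> = msum N J (\<lambda>q. msum N J' (\<lambda>q'. msum N I (\<lambda>p. c p q q' \<cdot>\<^sub>m K q q')))"
    by (rule msum_cong, rule msum_swap)
  also have "\<dots> = msum N J (\<lambda>q. msum N J' (\<lambda>q'. (\<Sum>p\<in>I. c p q q') \<cdot>\<^sub>m K q q'))"
    by (rule msum_cong, rule msum_cong, rule msum_smult_const[OF K])
  finally show ?thesis .
qed

lemma msum_conj: assumes W: "W \<in> carrier_mat N N" and f: "\<And>k. k \<in> I \<Longrightarrow> f k \<in> carrier_mat N N"
  shows "W * msum N I f * dag W = msum N I (\<lambda>k. W * f k * dag W)"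
proof -
  have "W * msum N I f * dag W = msum N I (\<lambda>k. W * f k) * dag W"
    by (subst msum_mult_left[OF W f]) auto
  also have "\<dots> = msum N I (\<lambda>k. W * f k * dag W)"
    by (rule msum_mult_right) (use W f in auto)
  finally show ?thesis .
qed

lemma mtrace_mult_comm: assumes "A \<in> carrier_mat n m" "B \<in> carrier_mat m n"
  shows "mtrace (A * B) = mtrace (B * A)"
proof -
  have "mtrace (A * B) = (\<Sum>i<n. \<Sum>l<m. A $$ (i,l) * B $$ (l,i))"
    using assms by (auto simp: mtrace_def scalar_prod_def lessThan_atLeast0 intro!: sum.cong)
  also have "\<dots> = (\<Sum>l<m. \<Sum>i<n. B $$ (l,i) * A $$ (i,l))"
    by (subst sum.swap) (simp add: mult.commute)
  also have "\<dots> = mtrace (B * A)"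
    using assms by (auto simp: mtrace_def scalar_prod_def lessThan_atLeast0 intro!: sum.cong)
  finally show ?thesis .
qed

lemma mtrace_msum: assumes "\<And>k. k \<in> I \<Longrightarrow> f k \<in> carrier_mat N N"
  shows "mtrace (msum N I f) = (\<Sum>k\<in>I. mtrace (f k))"
proof -
  have "mtrace (f k) = (\<Sum>i<N. f k $$ (i,i))" if "k \<in> I" for k
    using assms[OF that] by (auto simp: mtrace_def)
  then show ?thesis by (auto simp: mtrace_def sum.swap[of _ I] intro!: sum.cong)
qed

lemma mtrace_smult: "A \<in> carrier_mat n n \<Longrightarrow> mtrace (c \<cdot>\<^sub>m A) = c * mtrace A"
  by (auto simp: mtrace_def sum_distrib_left intro!: sum.cong)

lemma mtrace_one: "mtrace (1\<^sub>m n) = of_nat n"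
  by (auto simp: mtrace_def)

lemma mtrace_zero: "mtrace (0\<^sub>m n n) = 0"
  by (auto simp: mtrace_def)

lemma dim_mult_smult: assumes "dim_col A = dim_row B" shows "A * (k \<cdot>\<^sub>m B) = (k::complex) \<cdot>\<^sub>m (A * B)"
proof -
  have c: "A \<in> carrier_mat (dim_row A) (dim_col A)" "B \<in> carrier_mat (dim_col A) (dim_col B)"
    using assms unfolding carrier_mat_def by auto
  show ?thesis by (rule mult_smult_distrib[OF c])
qed

lemma dim_smult_mult: assumes "dim_col A = dim_row B" shows "(k \<cdot>\<^sub>m A) * B = (k::complex) \<cdot>\<^sub>m (A * B)"
proof -
  have c: "A \<in> carrier_mat (dim_row A) (dim_col A)" "B \<in> carrier_mat (dim_col A) (dim_col B)"
    using assms unfolding carrier_mat_def by auto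
  show ?thesis by (rule mult_smult_assoc_mat[OF c])
qed

lemma dim_mult_add: assumes "dim_col A = dim_row B" "dim_row B = dim_row C" "dim_col B = dim_col C"
  shows "A * (B + C) = A * B + A * (C :: complex mat)"
proof -
  have c: "A \<in> carrier_mat (dim_row A) (dim_col A)" "B \<in> carrier_mat (dim_col A) (dim_col B)" "C \<in> carrier_mat (dim_col A) (dim_col B)"
    using assms unfolding carrier_mat_def by auto
  show ?thesis by (rule mult_add_distrib_mat[OF c])
qed

lemma dim_add_mult: assumes "dim_row A = dim_row B" "dim_col A = dim_col B" "dim_col A = dim_row C"
  shows "(A + B) * C = A * C + B * (C :: complex mat)"
proof -
  have c: "A \<in> carrier_mat (dim_row A) (dim_col A)" "B \<in> carrier_mat (dim_row A) (dim_col A)" "C \<in> carrier_mat (dim_col A) (dim_col C)"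
    using assms unfolding carrier_mat_def by auto
  show ?thesis by (rule add_mult_distrib_mat[OF c])
qed

lemma dim_mult_assoc: assumes "dim_col A = dim_row B" "dim_col B = dim_row C" shows "A * B * C = A * (B * (C :: complex mat))"
proof -
  have c: "A \<in> carrier_mat (dim_row A) (dim_col A)" "B \<in> carrier_mat (dim_col A) (dim_col B)" "C \<in> carrier_mat (dim_col B) (dim_col C)"
    using assms unfolding carrier_mat_def by auto
  show ?thesis by (rule assoc_mult_mat[OF c])
qed

lemma dim_smult_add: assumes "dim_row A = dim_row B" "dim_col A = dim_col B" shows "k \<cdot>\<^sub>m (A + B) = (k::complex) \<cdot>\<^sub>m A + k \<cdot>\<^sub>m B"
proof -
  have c: "A \<in> carrier_mat (dim_row A) (dim_col A)" "B \<in> carrier_mat (dim_row A) (dim_col A)"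
    using assms unfolding carrier_mat_def by auto
  show ?thesis by (rule add_smult_distrib_left_mat[OF c])
qed

lemmas mat_dim_simps = dim_mult_smult dim_smult_mult dim_mult_add dim_add_mult dim_mult_assoc dim_smult_add smult_smult

lemma mtrace_eq_0_if_anticommutes_with_involution: assumes "X \<in> carrier_mat N N" "C \<in> carrier_mat N N" "X * X = 1\<^sub>m N"
  "X * C = (-1) \<cdot>\<^sub>m (C * X)"
  shows "mtrace C = 0"
proof -
  have "mtrace C = mtrace ((X * X) * C)" using assms(2,3) by simp
  also have "\<dots> = mtrace (X * (X * C))" by (simp add: assoc_mult_mat[OF assms(1) assms(1) assms(2)])
  also have "\<dots> = mtrace ((X * C) * X)" by (rule mtrace_mult_comm) (use assms in auto)
  also have "\<dots> = mtrace ((-1) \<cdot>\<^sub>m (C * (X * X)))"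
    using assms by (simp add: mult_smult_assoc_mat[OF mult_carrier_mat[OF assms(2) assms(1)] assms(1)] assoc_mult_mat[OF assms(2) assms(1) assms(1)])
  also have "\<dots> = - mtrace C" using assms by (simp add: mtrace_smult[of _ N])
  finally show ?thesis by simp
qed

lemma mult_mat_unit_vec: fixes A :: "complex mat" assumes "A \<in> carrier_mat N N" "j < N"
  shows "A *\<^sub>v unit_vec N j = col A j"
proof (rule eq_vecI)
  fix i assume "i < dim_vec (col A j)"
  then have i: "i < N" using assms by simp
  have "(A *\<^sub>v unit_vec N j) $ i = (\<Sum>k\<in>{0..<N}. A $$ (i,k) * (if k = j then 1 else 0))"
    using assms i by (auto simp: scalar_prod_def intro!: sum.cong)
  also have "\<dots> = A $$ (i,j)" using assms(2) by (simp add: sum.delta if_distrib[of "(*) _"] cong: if_cong)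
  finally show "(A *\<^sub>v unit_vec N j) $ i = col A j $ i" using assms i by simp
qed (use assms in auto)

lemma msum_mult_vec_index: assumes v: "v \<in> carrier_vec N" and i: "i < N"
  and f: "\<And>k. k \<in> I \<Longrightarrow> f k \<in> carrier_mat N N"
  shows "(msum N I f *\<^sub>v v) $ i = (\<Sum>k\<in>I. (f k *\<^sub>v v) $ i)"
proof -
  have "(msum N I f *\<^sub>v v) $ i = (\<Sum>l<N. (\<Sum>k\<in>I. f k $$ (i,l)) * v $ l)"
    using v i by (auto simp: scalar_prod_def lessThan_atLeast0 intro!: sum.cong)
  also have "\<dots> = (\<Sum>k\<in>I. \<Sum>l<N. f k $$ (i,l) * v $ l)"
    by (simp add: sum_distrib_right sum.swap[of _ I])
  also have "\<dots> = (\<Sum>k\<in>I. (f k *\<^sub>v v) $ i)"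
  proof (rule sum.cong[OF refl])
    fix k assume "k \<in> I"
    then show "(\<Sum>l<N. f k $$ (i,l) * v $ l) = (f k *\<^sub>v v) $ i"
      using v i f[of k] by (auto simp: scalar_prod_def lessThan_atLeast0 intro!: sum.cong)
  qed
  finally show ?thesis .
qed

lemma mat_eq_by_mult_vec: fixes A :: "complex mat" assumes "A \<in> carrier_mat N N" "B \<in> carrier_mat N N"
  "\<And>v. v \<in> carrier_vec N \<Longrightarrow> A *\<^sub>v v = B *\<^sub>v v"
  shows "A = B"
proof (rule eq_matI)
  fix i j assume "i < dim_row B" "j < dim_col B"
  then have ij: "i < N" "j < N" using assms by auto
  have "col A j = col B j" using assms(3)[of "unit_vec N j"] mult_mat_unit_vec[OF assms(1) ij(2)] mult_mat_unit_vec[OF assms(2) ij(2)] by simp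
  then have "col A j $ i = col B j $ i" by simp
  then show "A $$ (i,j) = B $$ (i,j)" using ij assms by simp
qed (use assms in auto)

lemma is_orth_proj_unique: assumes P: "is_orth_proj N P S" and Q: "is_orth_proj N Q S" shows "P = Q"
proof -
  have Pc: "P \<in> carrier_mat N N" and Ph: "dag P = P" and Pi: "P * P = P" and Pim: "(\<lambda>v. P *\<^sub>v v) ` carrier_vec N = S"
    using P unfolding is_orth_proj_def by auto
  have Qc: "Q \<in> carrier_mat N N" and Qh: "dag Q = Q" and Qi: "Q * Q = Q" and Qim: "(\<lambda>v. Q *\<^sub>v v) ` carrier_vec N = S"
    using Q unfolding is_orth_proj_def by auto
  have fix1: "X * Y = Y" if Xc: "X \<in> carrier_mat N N" and Yc: "Y \<in> carrier_mat N N" and Xi: "X * X = X"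
    and im: "(\<lambda>v. Y *\<^sub>v v) ` carrier_vec N = (\<lambda>v. X *\<^sub>v v) ` carrier_vec N" for X Y :: "complex mat"
  proof (rule mat_eq_by_mult_vec[of _ N])
    show "X * Y \<in> carrier_mat N N" using Xc Yc by simp
    show "Y \<in> carrier_mat N N" by (rule Yc)
    fix v :: "complex vec" assume v: "v \<in> carrier_vec N"
    have "Y *\<^sub>v v \<in> (\<lambda>v. X *\<^sub>v v) ` carrier_vec N" using im v by blast
    then obtain w where w: "w \<in> carrier_vec N" "Y *\<^sub>v v = X *\<^sub>v w" by auto
    have "(X * Y) *\<^sub>v v = X *\<^sub>v (Y *\<^sub>v v)" using Xc Yc v by simp
    also have "\<dots> = (X * X) *\<^sub>v w" unfolding w(2) using Xc w(1) by simp
    also have "\<dots> = Y *\<^sub>v v" unfolding Xi w(2) ..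
    finally show "(X * Y) *\<^sub>v v = Y *\<^sub>v v" .
  qed
  have QP: "Q * P = P" by (rule fix1[OF Qc Pc Qi]) (simp add: Pim Qim)
  have PQ: "P * Q = Q" by (rule fix1[OF Pc Qc Pi]) (simp add: Pim Qim)
  have "P = dag P" using Ph by simp
  also have "\<dots> = dag (Q * P)" unfolding QP ..
  also have "\<dots> = dag P * dag Q" by (rule dag_mult[OF Qc Pc])
  also have "\<dots> = Q" unfolding Ph Qh PQ ..
  finally show ?thesis .
qed

lemma sum_atLeast1_shift: "(\<Sum>q\<in>{1..m}. f q) = (\<Sum>k<m. f (Suc k))"
proof -
  have "{1..m} = Suc ` {..<m}" by (auto simp: image_iff) (metis Suc_pred' lessThan_iff less_Suc_eq_le not_gr0 not_less_eq_eq)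
  then show ?thesis by (simp add: sum.reindex)
qed

lemma orthogonal_cols:
  fixes R :: "nat \<Rightarrow> nat \<Rightarrow> real"
  assumes rows: "\<forall>p\<in>{1..m}. \<forall>p'\<in>{1..m}. (\<Sum>q\<in>{1..m}. R p q * R p' q) = (if p = p' then 1 else 0)"
  and q: "q \<in> {1..m}" and q': "q' \<in> {1..m}"
  shows "(\<Sum>p\<in>{1..m}. R p q * R p q') = (if q = q' then 1 else 0)"
proof -
  define Rm where "Rm = mat m m (\<lambda>(i,j). R (Suc i) (Suc j))"
  have Rc: "Rm \<in> carrier_mat m m" "transpose_mat Rm \<in> carrier_mat m m" unfolding Rm_def by auto
  have "Rm * transpose_mat Rm = 1\<^sub>m m"
  proof (rule eq_matI)
    fix i i' assume "i < dim_row (1\<^sub>m m)" "i' < dim_col (1\<^sub>m m)"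
    then have ii: "i < m" "i' < m" by auto
    have "(Rm * transpose_mat Rm) $$ (i,i') = (\<Sum>k<m. R (Suc i) (Suc k) * R (Suc i') (Suc k))"
      unfolding Rm_def using ii by (auto simp: scalar_prod_def lessThan_atLeast0 intro!: sum.cong)
    also have "\<dots> = (\<Sum>q\<in>{1..m}. R (Suc i) q * R (Suc i') q)" by (rule sum_atLeast1_shift[symmetric])
    also have "\<dots> = (if i = i' then 1 else 0)" using rows ii by auto
    finally show "(Rm * transpose_mat Rm) $$ (i,i') = 1\<^sub>m m $$ (i,i')" using ii by simp
  qed (auto simp: Rm_def)
  then have TR: "transpose_mat Rm * Rm = 1\<^sub>m m" by (rule mat_mult_left_right_inverse[OF Rc])
  obtain j j' where j: "q = Suc j" "q' = Suc j'" "j < m" "j' < m" using q q'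
    by (metis Suc_le_eq Suc_pred' atLeastAtMost_iff not_gr0 not_less_eq_eq One_nat_def)
  have "(transpose_mat Rm * Rm) $$ (j,j') = (\<Sum>k<m. R (Suc k) (Suc j) * R (Suc k) (Suc j'))"
    unfolding Rm_def using j by (auto simp: scalar_prod_def lessThan_atLeast0 intro!: sum.cong)
  also have "\<dots> = (\<Sum>p\<in>{1..m}. R p q * R p q')" unfolding j by (rule sum_atLeast1_shift[symmetric])
  finally show ?thesis using TR j by auto
qed

lemma sum_lessThan_add_split: "(\<Sum>k<m+b. g k) = (\<Sum>k<m. g k) + (\<Sum>v<b. g (m+v::nat))"
  by (induction b) (auto simp: add.assoc)

lemma sum_lessThan_mult_split: "(\<Sum>k<a*b. g k) = (\<Sum>u<a. \<Sum>v<b. g (u*b+v::nat))"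
proof (induction a)
  case (Suc a)
  have "(\<Sum>k<Suc a * b. g k) = (\<Sum>k<a*b + b. g k)" by (simp add: add.commute)
  also have "\<dots> = (\<Sum>k<a*b. g k) + (\<Sum>v<b. g (a*b+v))" by (rule sum_lessThan_add_split)
  finally show ?case using Suc by simp
qed simp

lemma sum_lessThan_mult_div_mod: assumes "0 < b"
  shows "(\<Sum>k<a*b. g (k div b) (k mod (b::nat))) = (\<Sum>u<a. \<Sum>v<b. g u v)"
  unfolding sum_lessThan_mult_split using assms by (auto intro!: sum.cong)

lemma kron_dims[simp]: "dim_row (kron A B) = dim_row A * dim_row B" "dim_col (kron A B) = dim_col A * dim_col B"
  unfolding kron_def by auto

lemma kron_carrier[simp]: "A \<in> carrier_mat a a' \<Longrightarrow> B \<in> carrier_mat b b' \<Longrightarrow> kron A B \<in> carrier_mat (a*b) (a'*b')"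
  by auto

lemma kron_index[simp]: "i < dim_row A * dim_row B \<Longrightarrow> j < dim_col A * dim_col B \<Longrightarrow>
  kron A B $$ (i,j) = A $$ (i div dim_row B, j div dim_col B) * B $$ (i mod dim_row B, j mod dim_col B)"
  unfolding kron_def by auto

lemma div_less_of_less_mult: "i < a * (b::nat) \<Longrightarrow> i div b < a"
  by (simp add: less_mult_imp_div_less)

lemma mod_less_of_less_mult: "i < a * (b::nat) \<Longrightarrow> i mod b < b"
  by (cases "b = 0") auto

lemma kron_mult: assumes A: "A \<in> carrier_mat a a" and C: "C \<in> carrier_mat a a"
  and B: "B \<in> carrier_mat b b" and D: "D \<in> carrier_mat b b"
  shows "kron A B * kron C D = kron (A * C) (B * D)"
proof (rule eq_matI)
  fix i j assume "i < dim_row (kron (A * C) (B * D))" "j < dim_col (kron (A * C) (B * D))"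
  then have ij: "i < a * b" "j < a * b" using A B C D by auto
  then have b0: "0 < b" by (cases b) auto
  have "(kron A B * kron C D) $$ (i,j) = (\<Sum>k<a*b. (A $$ (i div b, k div b) * B $$ (i mod b, k mod b)) *
      (C $$ (k div b, j div b) * D $$ (k mod b, j mod b)))"
    using A B C D ij by (auto simp: scalar_prod_def lessThan_atLeast0 intro!: sum.cong)
  also have "\<dots> = (\<Sum>u<a. \<Sum>v<b. (A $$ (i div b, u) * B $$ (i mod b, v)) *
      (C $$ (u, j div b) * D $$ (v, j mod b)))"
    by (rule sum_lessThan_mult_div_mod[OF b0, where g = "\<lambda>u v. (A $$ (i div b, u) * B $$ (i mod b, v)) *
      (C $$ (u, j div b) * D $$ (v, j mod b))"])
  also have "\<dots> = (\<Sum>u<a. A $$ (i div b, u) * C $$ (u, j div b)) * (\<Sum>v<b. B $$ (i mod b, v) * D $$ (v, j mod b))"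
    by (simp add: sum_product mult_ac)
  also have "\<dots> = kron (A * C) (B * D) $$ (i,j)"
    using A B C D ij div_less_of_less_mult[OF ij(1)] div_less_of_less_mult[OF ij(2)] mod_less_of_less_mult[OF ij(1)] mod_less_of_less_mult[OF ij(2)]
    by (auto simp: scalar_prod_def lessThan_atLeast0 intro!: sum.cong)
  finally show "(kron A B * kron C D) $$ (i,j) = kron (A * C) (B * D) $$ (i,j)" .
qed (use A B C D in auto)

lemma kron_one: "kron (1\<^sub>m a) (1\<^sub>m b) = 1\<^sub>m (a*b)"
proof (rule eq_matI)
  fix i j assume "i < dim_row (1\<^sub>m (a * b))" "j < dim_col (1\<^sub>m (a * b))"
  then have ij: "i < a*b" "j < a*b" by auto
  have "(i div b = j div b \<and> i mod b = j mod b) = (i = j)"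
    by (metis div_mult_mod_eq)
  then show "kron (1\<^sub>m a) (1\<^sub>m b) $$ (i, j) = 1\<^sub>m (a * b) $$ (i, j)"
    using ij div_less_of_less_mult[OF ij(1)] div_less_of_less_mult[OF ij(2)] mod_less_of_less_mult[OF ij(1)] mod_less_of_less_mult[OF ij(2)]
    by auto
qed auto

lemma dag_kron: "dag (kron A B) = kron (dag A) (dag B)"
proof (rule eq_matI)
  fix i j assume ij: "i < dim_row (kron (dag A) (dag B))" "j < dim_col (kron (dag A) (dag B))"
  then have ij': "i < dim_col A * dim_col B" "j < dim_row A * dim_row B" by auto
  show "dag (kron A B) $$ (i, j) = kron (dag A) (dag B) $$ (i, j)"
    using ij' div_less_of_less_mult[OF ij'(1)] div_less_of_less_mult[OF ij'(2)] mod_less_of_less_mult[OF ij'(1)] mod_less_of_less_mult[OF ij'(2)]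
    by auto
qed auto

lemma kron_smult_left: "kron (c \<cdot>\<^sub>m A) B = c \<cdot>\<^sub>m kron A B"
proof (rule eq_matI)
  fix i j assume ij: "i < dim_row (c \<cdot>\<^sub>m kron A B)" "j < dim_col (c \<cdot>\<^sub>m kron A B)"
  then have ij': "i < dim_row A * dim_row B" "j < dim_col A * dim_col B" by auto
  show "kron (c \<cdot>\<^sub>m A) B $$ (i, j) = (c \<cdot>\<^sub>m kron A B) $$ (i, j)"
    using ij' div_less_of_less_mult[OF ij'(1)] div_less_of_less_mult[OF ij'(2)] by auto
qed auto

lemma kron_smult_right: "kron A (c \<cdot>\<^sub>m B) = c \<cdot>\<^sub>m kron A B"
proof (rule eq_matI)
  fix i j assume ij: "i < dim_row (c \<cdot>\<^sub>m kron A B)" "j < dim_col (c \<cdot>\<^sub>m kron A B)"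
  then have ij': "i < dim_row A * dim_row B" "j < dim_col A * dim_col B" by auto
  show "kron A (c \<cdot>\<^sub>m B) $$ (i, j) = (c \<cdot>\<^sub>m kron A B) $$ (i, j)"
    using ij' mod_less_of_less_mult[OF ij'(1)] mod_less_of_less_mult[OF ij'(2)] by auto
qed auto

lemma kron_msum_left: assumes "\<And>k. k \<in> I \<Longrightarrow> f k \<in> carrier_mat a a" "B \<in> carrier_mat b b"
  shows "kron (msum a I f) B = msum (a*b) I (\<lambda>k. kron (f k) B)"
proof (rule eq_matI)
  fix i j assume "i < dim_row (msum (a*b) I (\<lambda>k. kron (f k) B))" "j < dim_col (msum (a*b) I (\<lambda>k. kron (f k) B))"
  then have ij: "i < a*b" "j < a*b" by auto
  have "kron (f k) B $$ (i,j) = f k $$ (i div b, j div b) * B $$ (i mod b, j mod b)" if "k \<in> I" for k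
    using assms(1)[OF that] assms(2) ij by auto
  then show "kron (msum a I f) B $$ (i, j) = msum (a * b) I (\<lambda>k. kron (f k) B) $$ (i, j)"
    using ij assms(2) div_less_of_less_mult[OF ij(1)] div_less_of_less_mult[OF ij(2)] by (auto simp: sum_distrib_right)
qed (use assms in auto)

lemma kron_msum_right: assumes "\<And>k. k \<in> I \<Longrightarrow> f k \<in> carrier_mat b b" "A \<in> carrier_mat a a"
  shows "kron A (msum b I f) = msum (a*b) I (\<lambda>k. kron A (f k))"
proof (rule eq_matI)
  fix i j assume "i < dim_row (msum (a*b) I (\<lambda>k. kron A (f k)))" "j < dim_col (msum (a*b) I (\<lambda>k. kron A (f k)))"
  then have ij: "i < a*b" "j < a*b" by auto
  have "kron A (f k) $$ (i,j) = A $$ (i div b, j div b) * f k $$ (i mod b, j mod b)" if "k \<in> I" for k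
    using assms(1)[OF that] assms(2) ij by auto
  then show "kron A (msum b I f) $$ (i, j) = msum (a * b) I (\<lambda>k. kron A (f k)) $$ (i, j)"
    using ij assms(2) mod_less_of_less_mult[OF ij(1)] mod_less_of_less_mult[OF ij(2)] by (auto simp: sum_distrib_left)
qed (use assms in auto)

lemma kron_msum_smult:
  assumes F: "\<And>q. q \<in> I \<Longrightarrow> F q \<in> carrier_mat a a" and G: "\<And>q. q \<in> J \<Longrightarrow> G q \<in> carrier_mat b b"
  shows "kron (msum a I (\<lambda>q. c q \<cdot>\<^sub>m F q)) (msum b J (\<lambda>q. d q \<cdot>\<^sub>m G q))
    = msum (a*b) I (\<lambda>q. msum (a*b) J (\<lambda>q'. (c q * d q') \<cdot>\<^sub>m kron (F q) (G q')))"
proof -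
  let ?D = "msum b J (\<lambda>q. d q \<cdot>\<^sub>m G q)"
  have "kron (msum a I (\<lambda>q. c q \<cdot>\<^sub>m F q)) ?D = msum (a*b) I (\<lambda>q. kron (c q \<cdot>\<^sub>m F q) ?D)"
    by (rule kron_msum_left) (use F in auto)
  also have "\<dots> = msum (a*b) I (\<lambda>q. msum (a*b) J (\<lambda>q'. (c q * d q') \<cdot>\<^sub>m kron (F q) (G q')))"
  proof (rule msum_cong)
    fix q assume q: "q \<in> I"
    have "kron (c q \<cdot>\<^sub>m F q) ?D = c q \<cdot>\<^sub>m kron (F q) ?D" by (rule kron_smult_left)
    also have "kron (F q) ?D = msum (a*b) J (\<lambda>q'. kron (F q) (d q' \<cdot>\<^sub>m G q'))"
      by (rule kron_msum_right) (use F[OF q] G in auto)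
    also have "\<dots> = msum (a*b) J (\<lambda>q'. d q' \<cdot>\<^sub>m kron (F q) (G q'))"
      by (rule msum_cong) (rule kron_smult_right)
    also have "c q \<cdot>\<^sub>m \<dots> = msum (a*b) J (\<lambda>q'. (c q * d q') \<cdot>\<^sub>m kron (F q) (G q'))"
      by (subst msum_smult) (use F[OF q] G in \<open>auto simp: smult_smult intro!: msum_cong\<close>)
    finally show "kron (c q \<cdot>\<^sub>m F q) ?D = msum (a*b) J (\<lambda>q'. (c q * d q') \<cdot>\<^sub>m kron (F q) (G q'))" .
  qed
  finally show ?thesis .
qed

lemma mtrace_kron: assumes "A \<in> carrier_mat a a" "B \<in> carrier_mat b b"
  shows "mtrace (kron A B) = mtrace A * mtrace B"
proof (cases "b = 0")
  case True then show ?thesis using assms by (auto simp: mtrace_def)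
next
  case False
  then have b0: "0 < b" by auto
  have "mtrace (kron A B) = (\<Sum>k<a*b. A $$ (k div b, k div b) * B $$ (k mod b, k mod b))"
    using assms by (auto simp: mtrace_def intro!: sum.cong)
  also have "\<dots> = (\<Sum>u<a. \<Sum>v<b. A $$ (u,u) * B $$ (v,v))"
    by (rule sum_lessThan_mult_div_mod[OF b0, where g = "\<lambda>u v. A $$ (u,u) * B $$ (v,v)"])
  also have "\<dots> = mtrace A * mtrace B" using assms by (auto simp: mtrace_def sum_product)
  finally show ?thesis .
qed

lemma four_pow: "(2::nat)^n * 2^n = 4^n"
  by (simp add: power_mult_distrib[symmetric])

lemma kron_conj_kron: assumes U: "U \<in> carrier_mat (2^n) (2^n)" and C: "C \<in> carrier_mat (2^n) (2^n)"
  shows "kron U U * kron C C * dag (kron U U) = kron (U * C * dag U) (U * C * dag U)"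
proof -
  have "kron U U * kron C C = kron (U * C) (U * C)" by (rule kron_mult[OF U C U C])
  then have "kron U U * kron C C * dag (kron U U) = kron (U * C) (U * C) * kron (dag U) (dag U)"
    by (simp add: dag_kron)
  also have "\<dots> = kron (U * C * dag U) (U * C * dag U)"
    by (rule kron_mult) (use U C in auto)
  finally show ?thesis .
qed

lemma kron_unitary_carrier: "unitary_mat (2^n) U \<Longrightarrow> kron U U \<in> carrier_mat (4^n) (4^n)"
  unfolding unitary_mat_def using kron_carrier[of U "2^n" "2^n" U "2^n" "2^n"] four_pow[of n] by simp

lemma kron_unitary: assumes "unitary_mat (2^n) U"
  shows "kron U U * dag (kron U U) = 1\<^sub>m (4^n)" "dag (kron U U) * kron U U = 1\<^sub>m (4^n)"
proof -
  have U: "U \<in> carrier_mat (2^n) (2^n)" "U * dag U = 1\<^sub>m (2^n)" "dag U * U = 1\<^sub>m (2^n)"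
    using assms unfolding unitary_mat_def by auto
  show "kron U U * dag (kron U U) = 1\<^sub>m (4^n)"
    unfolding dag_kron by (subst kron_mult) (use U in \<open>auto simp: kron_one four_pow\<close>)
  show "dag (kron U U) * kron U U = 1\<^sub>m (4^n)"
    unfolding dag_kron by (subst kron_mult) (use U in \<open>auto simp: kron_one four_pow\<close>)
qed

definition mat_prod_list :: "nat \<Rightarrow> (nat \<Rightarrow> complex mat) \<Rightarrow> nat list \<Rightarrow> complex mat" where
  "mat_prod_list N F ps = foldr (\<lambda>p M. F p * M) ps (1\<^sub>m N)"

lemma mat_prod_list_Nil[simp]: "mat_prod_list N F [] = 1\<^sub>m N" unfolding mat_prod_list_def by simp

lemma mat_prod_list_Cons[simp]: "mat_prod_list N F (p # ps) = F p * mat_prod_list N F ps" unfolding mat_prod_list_def by simp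

lemma mat_prod_list_carrier[simp]: "(\<And>p. p \<in> set ps \<Longrightarrow> F p \<in> carrier_mat N N) \<Longrightarrow> mat_prod_list N F ps \<in> carrier_mat N N"
proof (induction ps)
  case (Cons a ps)
  then have "mat_prod_list N F ps \<in> carrier_mat N N" "F a \<in> carrier_mat N N" by auto
  then show ?case by simp
qed simp

lemma mat_prod_list_append: "(\<And>p. p \<in> set (xs @ ys) \<Longrightarrow> F p \<in> carrier_mat N N) \<Longrightarrow>
   mat_prod_list N F (xs @ ys) = mat_prod_list N F xs * mat_prod_list N F ys"
proof (induction xs)
  case Nil
  have "mat_prod_list N F ys \<in> carrier_mat N N" using Nil by (intro mat_prod_list_carrier) auto
  then show ?case by simp
next
  case (Cons a xs)
  have "F a * mat_prod_list N F (xs @ ys) = F a * (mat_prod_list N F xs * mat_prod_list N F ys)" using Cons by auto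
  also have "\<dots> = F a * mat_prod_list N F xs * mat_prod_list N F ys"
    by (rule assoc_mult_mat[symmetric, of _ N N _ N _ N]) (use Cons.prems in auto)
  finally show ?case by simp
qed

lemma mat_prod_list_cong: "(\<And>p. p \<in> set ps \<Longrightarrow> F p = G p) \<Longrightarrow> mat_prod_list N F ps = mat_prod_list N G ps"
  by (induction ps) auto

lemma mat_prod_list_one: "mat_prod_list N (\<lambda>p. 1\<^sub>m N) ps = 1\<^sub>m N"
  by (induction ps) auto

lemma mat_prod_list_smult: "(\<And>p. p \<in> set ps \<Longrightarrow> F p \<in> carrier_mat N N) \<Longrightarrow>
  mat_prod_list N (\<lambda>p. c p \<cdot>\<^sub>m F p) ps = prod_list (map c ps) \<cdot>\<^sub>m mat_prod_list N F ps"
proof (induction ps)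
  case (Cons a ps)
  then have *: "mat_prod_list N F ps \<in> carrier_mat N N" "F a \<in> carrier_mat N N" by auto
  have "mat_prod_list N (\<lambda>p. c p \<cdot>\<^sub>m F p) (a # ps) = (c a \<cdot>\<^sub>m F a) * (prod_list (map c ps) \<cdot>\<^sub>m mat_prod_list N F ps)"
    using Cons by auto
  also have "\<dots> = (c a * prod_list (map c ps)) \<cdot>\<^sub>m (F a * mat_prod_list N F ps)"
    using * by (simp add: mult_smult_assoc_mat[OF *(2) smult_carrier_mat[OF *(1)]] mult_smult_distrib[OF *(2) *(1)] smult_smult)
  finally show ?case by simp
qed simp

lemma mat_prod_list_commute: assumes "X \<in> carrier_mat N N" "\<And>p. p \<in> set ps \<Longrightarrow> F p \<in> carrier_mat N N"
  "\<And>p. p \<in> set ps \<Longrightarrow> X * F p = F p * X"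
  shows "X * mat_prod_list N F ps = mat_prod_list N F ps * X"
  using assms(2,3)
proof (induction ps)
  case (Cons a ps)
  then have *: "mat_prod_list N F ps \<in> carrier_mat N N" "F a \<in> carrier_mat N N" by auto
  have "X * (F a * mat_prod_list N F ps) = (X * F a) * mat_prod_list N F ps" using * assms(1) by simp
  also have "\<dots> = (F a * X) * mat_prod_list N F ps" using Cons by simp
  also have "\<dots> = F a * (X * mat_prod_list N F ps)" using * assms(1) by (simp add: assoc_mult_mat[OF *(2) assms(1) *(1)])
  also have "\<dots> = F a * (mat_prod_list N F ps * X)" using Cons by simp
  also have "\<dots> = (F a * mat_prod_list N F ps) * X" using * assms(1) by simp
  finally show ?case by simp
qed (use assms in simp)

lemma mat_prod_list_rev: assumes "\<And>p. p \<in> set ps \<Longrightarrow> F p \<in> carrier_mat N N"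
  "\<And>p q. p \<in> set ps \<Longrightarrow> q \<in> set ps \<Longrightarrow> F p * F q = F q * F p"
  shows "mat_prod_list N F (rev ps) = mat_prod_list N F ps"
  using assms
proof (induction ps)
  case (Cons a ps)
  then have *: "mat_prod_list N F ps \<in> carrier_mat N N" "F a \<in> carrier_mat N N" by auto
  have "mat_prod_list N F (rev (a # ps)) = mat_prod_list N F (rev ps @ [a])" by simp
  also have "\<dots> = mat_prod_list N F (rev ps) * mat_prod_list N F [a]"
    by (rule mat_prod_list_append) (use Cons.prems in auto)
  also have "\<dots> = mat_prod_list N F ps * F a" using Cons * by (simp add: right_mult_one_mat[OF *(2)])
  also have "\<dots> = F a * mat_prod_list N F ps"
    by (rule mat_prod_list_commute[symmetric]) (use Cons.prems in auto)
  finally show ?case by simp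
qed simp

lemma dag_mat_prod_list: "(\<And>p. p \<in> set ps \<Longrightarrow> F p \<in> carrier_mat N N) \<Longrightarrow>
   dag (mat_prod_list N F ps) = mat_prod_list N (\<lambda>p. dag (F p)) (rev ps)"
proof (induction ps)
  case (Cons a ps)
  then have *: "mat_prod_list N F ps \<in> carrier_mat N N" "F a \<in> carrier_mat N N" by auto
  have "dag (mat_prod_list N F (a # ps)) = dag (mat_prod_list N F ps) * dag (F a)"
    using * by (simp add: dag_mult)
  also have "\<dots> = mat_prod_list N (\<lambda>p. dag (F p)) (rev ps) * mat_prod_list N (\<lambda>p. dag (F p)) [a]"
    using Cons * by (simp add: right_mult_one_mat[of "dag (F a)" N N])
  also have "\<dots> = mat_prod_list N (\<lambda>p. dag (F p)) (rev ps @ [a])"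
    by (rule mat_prod_list_append[symmetric]) (use Cons.prems in auto)
  also have "\<dots> = mat_prod_list N (\<lambda>p. dag (F p)) (rev (a # ps))" by simp
  finally show ?case .
qed simp

lemma mat_prod_list_hermitian: assumes "\<And>p. p \<in> set ps \<Longrightarrow> F p \<in> carrier_mat N N"
  "\<And>p q. p \<in> set ps \<Longrightarrow> q \<in> set ps \<Longrightarrow> F p * F q = F q * F p"
  "\<And>p. p \<in> set ps \<Longrightarrow> dag (F p) = F p"
  shows "dag (mat_prod_list N F ps) = mat_prod_list N F ps"
proof -
  have "dag (mat_prod_list N F ps) = mat_prod_list N (\<lambda>p. dag (F p)) (rev ps)" by (rule dag_mat_prod_list) (use assms in auto)
  also have "\<dots> = mat_prod_list N F (rev ps)" by (rule mat_prod_list_cong) (use assms in auto)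
  also have "\<dots> = mat_prod_list N F ps" by (rule mat_prod_list_rev) (use assms in auto)
  finally show ?thesis .
qed

lemma mat_prod_list_eigen: assumes "P \<in> carrier_mat N N" "\<And>p. p \<in> set ps \<Longrightarrow> F p \<in> carrier_mat N N"
  "\<And>p. p \<in> set ps \<Longrightarrow> F p * P = c p \<cdot>\<^sub>m P"
  shows "mat_prod_list N F ps * P = prod_list (map c ps) \<cdot>\<^sub>m P"
  using assms(2,3)
proof (induction ps)
  case (Cons a ps)
  then have *: "mat_prod_list N F ps \<in> carrier_mat N N" "F a \<in> carrier_mat N N" by auto
  have "mat_prod_list N F (a # ps) * P = F a * (mat_prod_list N F ps * P)" using * assms(1) by simp
  also have "\<dots> = F a * (prod_list (map c ps) \<cdot>\<^sub>m P)" using Cons by simp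
  also have "\<dots> = prod_list (map c ps) \<cdot>\<^sub>m (F a * P)" using * assms(1) by (simp add: mult_smult_distrib)
  also have "\<dots> = prod_list (map c ps) \<cdot>\<^sub>m (c a \<cdot>\<^sub>m P)" using Cons by simp
  finally show ?case by (simp add: smult_smult mult.commute)
qed (use assms in simp)

lemma mat_prod_list_eigen_factor: assumes "X \<in> carrier_mat N N" "\<And>p. p \<in> set ps \<Longrightarrow> F p \<in> carrier_mat N N"
  "\<And>p. p \<in> set ps \<Longrightarrow> X * F p = F p * X" "p0 \<in> set ps" "X * F p0 = c \<cdot>\<^sub>m F p0"
  shows "X * mat_prod_list N F ps = c \<cdot>\<^sub>m mat_prod_list N F ps"
  using assms(2-4)
proof (induction ps)
  case (Cons a ps)
  then have *: "mat_prod_list N F ps \<in> carrier_mat N N" "F a \<in> carrier_mat N N" by auto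
  show ?case
  proof (cases "a = p0")
    case True
    have "X * mat_prod_list N F (a # ps) = (X * F a) * mat_prod_list N F ps" using * assms(1) by simp
    also have "\<dots> = c \<cdot>\<^sub>m (F a * mat_prod_list N F ps)" using True assms(5) * by (simp add: mult_smult_assoc_mat)
    finally show ?thesis by simp
  next
    case False
    then have "p0 \<in> set ps" using Cons by auto
    then have IH: "X * mat_prod_list N F ps = c \<cdot>\<^sub>m mat_prod_list N F ps" using Cons by auto
    have "X * mat_prod_list N F (a # ps) = (X * F a) * mat_prod_list N F ps" using * assms(1) by simp
    also have "\<dots> = (F a * X) * mat_prod_list N F ps" using Cons by simp
    also have "\<dots> = F a * (X * mat_prod_list N F ps)" using * assms(1) by (simp add: assoc_mult_mat[OF *(2) assms(1) *(1)])
    also have "\<dots> = c \<cdot>\<^sub>m (F a * mat_prod_list N F ps)" using IH * by (simp add: mult_smult_distrib)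
    finally show ?thesis by simp
  qed
qed simp

lemma mat_prod_list_anticommute: assumes "X \<in> carrier_mat N N" "\<And>p. p \<in> set ps \<Longrightarrow> F p \<in> carrier_mat N N"
  "\<And>p. p \<in> set ps \<Longrightarrow> X * F p = s p \<cdot>\<^sub>m (F p * X)"
  shows "X * mat_prod_list N F ps = prod_list (map s ps) \<cdot>\<^sub>m (mat_prod_list N F ps * X)"
  using assms(2,3)
proof (induction ps)
  case (Cons a ps)
  then have *: "mat_prod_list N F ps \<in> carrier_mat N N" "F a \<in> carrier_mat N N" by auto
  have "X * (F a * mat_prod_list N F ps) = (X * F a) * mat_prod_list N F ps" using * assms(1) by simp
  also have "\<dots> = (s a \<cdot>\<^sub>m (F a * X)) * mat_prod_list N F ps" using Cons by simp
  also have "\<dots> = s a \<cdot>\<^sub>m (F a * (X * mat_prod_list N F ps))"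
    using * assms(1) by (simp add: mult_smult_assoc_mat[OF mult_carrier_mat[OF *(2) assms(1)] *(1)] assoc_mult_mat[OF *(2) assms(1) *(1)])
  also have "\<dots> = s a \<cdot>\<^sub>m (F a * (prod_list (map s ps) \<cdot>\<^sub>m (mat_prod_list N F ps * X)))" using Cons by simp
  also have "\<dots> = (s a * prod_list (map s ps)) \<cdot>\<^sub>m ((F a * mat_prod_list N F ps) * X)"
    using * assms(1) by (simp add: mult_smult_distrib[OF *(2) mult_carrier_mat[OF *(1) assms(1)]] smult_smult assoc_mult_mat[OF *(2) *(1) assms(1)])
  finally show ?case by simp
qed (use assms in simp)

lemma kron_mat_prod_list: assumes "\<And>p. p \<in> set ps \<Longrightarrow> F p \<in> carrier_mat a a" "\<And>p. p \<in> set ps \<Longrightarrow> G p \<in> carrier_mat b b"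
  shows "kron (mat_prod_list a F ps) (mat_prod_list b G ps) = mat_prod_list (a*b) (\<lambda>p. kron (F p) (G p)) ps"
  using assms
proof (induction ps)
  case Nil then show ?case by (simp add: kron_one)
next
  case (Cons p ps)
  then have c: "F p \<in> carrier_mat a a" "G p \<in> carrier_mat b b" "mat_prod_list a F ps \<in> carrier_mat a a" "mat_prod_list b G ps \<in> carrier_mat b b"
    by auto
  have "kron (F p * mat_prod_list a F ps) (G p * mat_prod_list b G ps) = kron (F p) (G p) * kron (mat_prod_list a F ps) (mat_prod_list b G ps)"
    by (rule kron_mult[symmetric, OF c(1,3,2,4)])
  then show ?case using Cons by simp
qed

lemma prod_list_upt_eq_prod: "prod_list (map f [1..<m+1]) = (\<Prod>p\<in>{1..m}. f p)"
proof -
  have eq: "set [1..<m+1] = {1..m}" by auto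
  show ?thesis unfolding eq[symmetric] by (rule prod.distinct_set_conv_list[symmetric]) simp
qed

lemma prod_if_const_power: "finite A \<Longrightarrow> (\<Prod>p\<in>A. if P p then (a::'a::comm_monoid_mult) else 1) = a ^ card {p\<in>A. P p}"
  by (simp add: prod.inter_filter[symmetric])

definition bool_lists :: "nat \<Rightarrow> bool list set" where "bool_lists m = {x. length x = m}"

lemma finite_bool_lists[simp]: "finite (bool_lists m)"
proof -
  have "bool_lists m = {xs. set xs \<subseteq> (UNIV::bool set) \<and> length xs = m}" unfolding bool_lists_def by auto
  then show ?thesis using finite_lists_length_eq[of "UNIV::bool set" m] by simp
qed

lemma bool_lists_Suc: "bool_lists (Suc m) = (\<lambda>(y,b). y @ [b]) ` (bool_lists m \<times> UNIV)"
proof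
  show "bool_lists (Suc m) \<subseteq> (\<lambda>(y,b). y @ [b]) ` (bool_lists m \<times> UNIV)"
  proof
    fix x assume "x \<in> bool_lists (Suc m)"
    then have "length x = Suc m" unfolding bool_lists_def by auto
    then have "x = butlast x @ [last x]" "butlast x \<in> bool_lists m"
      by (auto simp: bool_lists_def intro!: append_butlast_last_id[symmetric])
    then show "x \<in> (\<lambda>(y,b). y @ [b]) ` (bool_lists m \<times> UNIV)" by (auto intro!: image_eqI[of _ _ "(butlast x, last x)"])
  qed
qed (auto simp: bool_lists_def)

lemma inj_on_snoc: "inj_on (\<lambda>(y,b). y @ [b]) A"
  by (auto simp: inj_on_def)

lemma sum_bool_lists_Suc: "(\<Sum>x\<in>bool_lists (Suc m). f x) = (\<Sum>y\<in>bool_lists m. f (y @ [False]) + f (y @ [True]))"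
proof -
  have "(\<Sum>x\<in>bool_lists (Suc m). f x) = (\<Sum>(y,b)\<in>bool_lists m \<times> UNIV. f (y @ [b]))"
    unfolding bool_lists_Suc by (subst sum.reindex[OF inj_on_snoc]) (simp add: case_prod_unfold)
  also have "\<dots> = (\<Sum>y\<in>bool_lists m. \<Sum>b\<in>UNIV. f (y @ [b]))"
    by (rule sum.cartesian_product[symmetric])
  also have "\<dots> = (\<Sum>y\<in>bool_lists m. f (y @ [False]) + f (y @ [True]))"
    by (simp add: UNIV_bool add.commute)
  finally show ?thesis .
qed

lemma msum_bool_lists_Suc: "msum N (bool_lists (Suc m)) f = msum N (bool_lists m) (\<lambda>y. msum N UNIV (\<lambda>b. f (y @ [b])))"
  by (rule eq_matI) (auto simp: sum_bool_lists_Suc UNIV_bool add.commute)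

lemma msum_UNIV_bool: "f False \<in> carrier_mat N N \<Longrightarrow> f True \<in> carrier_mat N N \<Longrightarrow> msum N UNIV f = f False + f True"
  by (rule eq_matI) (auto simp: UNIV_bool add.commute)

lemma sum_bool_lists_prod:
  "(\<Sum>x\<in>bool_lists m. \<Prod>p\<in>{1..m}. (if x ! (p - 1) then b p else a p)) = (\<Prod>p\<in>{1..m}. (a p + b p :: 'a :: comm_semiring_1))"
proof (induction m)
  case 0 then show ?case by (simp add: bool_lists_def)
next
  case (Suc m)
  have cg: "(\<Prod>p\<in>{1..m}. (if (y @ [c]) ! (p - 1) then b p else a p)) = (\<Prod>p\<in>{1..m}. (if y ! (p - 1) then b p else a p))"
    if "y \<in> bool_lists m" for y c
    by (rule prod.cong) (use that in \<open>auto simp: bool_lists_def nth_append\<close>)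
  have last: "(y @ [c]) ! (Suc m - 1) = c" if "y \<in> bool_lists m" for y c
    using that by (auto simp: bool_lists_def nth_append)
  have "(\<Sum>x\<in>bool_lists (Suc m). \<Prod>p\<in>{1..Suc m}. (if x ! (p - 1) then b p else a p))
     = (\<Sum>y\<in>bool_lists m. (\<Prod>p\<in>{1..m}. (if y ! (p - 1) then b p else a p)) * (a (Suc m) + b (Suc m)))"
    unfolding sum_bool_lists_Suc
  proof (rule sum.cong[OF refl])
    fix y assume y: "y \<in> bool_lists m"
    have step: "(\<Prod>p\<in>{1..Suc m}. (if (y @ [c]) ! (p - 1) then b p else a p)) =
       (\<Prod>p\<in>{1..m}. (if y ! (p - 1) then b p else a p)) * (if c then b (Suc m) else a (Suc m))" for c
    proof -
      have "(\<Prod>p\<in>{1..Suc m}. (if (y @ [c]) ! (p - 1) then b p else a p)) =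
       (\<Prod>p\<in>{1..m}. (if (y @ [c]) ! (p - 1) then b p else a p)) * (if (y @ [c]) ! (Suc m - 1) then b (Suc m) else a (Suc m))"
        by (rule prod.cl_ivl_Suc[THEN trans]) simp
      then show ?thesis unfolding cg[OF y] last[OF y] .
    qed
    show "(\<Prod>p\<in>{1..Suc m}. (if (y @ [False]) ! (p - 1) then b p else a p)) + (\<Prod>p\<in>{1..Suc m}. (if (y @ [True]) ! (p - 1) then b p else a p))
      = (\<Prod>p\<in>{1..m}. (if y ! (p - 1) then b p else a p)) * (a (Suc m) + b (Suc m))"
      unfolding step by (simp add: algebra_simps)
  qed
  also have "\<dots> = (\<Sum>y\<in>bool_lists m. (\<Prod>p\<in>{1..m}. (if y ! (p - 1) then b p else a p))) * (a (Suc m) + b (Suc m))"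
    by (rule sum_distrib_right[symmetric])
  also have "\<dots> = (\<Prod>p\<in>{1..m}. (a p + b p)) * (a (Suc m) + b (Suc m))"
    using Suc.IH by simp
  also have "\<dots> = (\<Prod>p\<in>{1..Suc m}. (a p + b p))"
    by (simp add: prod.cl_ivl_Suc)
  finally show ?case .
qed

lemma upt_Suc_snoc: "[1..<Suc m + 1] = [1..<m+1] @ [Suc m]" by simp

lemma mat_prod_list_snoc_choice:
  assumes F: "\<And>p. p \<in> {1..Suc m} \<Longrightarrow> F0 p \<in> carrier_mat N N" "\<And>p. p \<in> {1..Suc m} \<Longrightarrow> F1 p \<in> carrier_mat N N"
    and y: "y \<in> bool_lists m"
  shows "mat_prod_list N (\<lambda>p. if (y @ [b]) ! (p - 1) then F1 p else F0 p) [1..<Suc m+1]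
    = mat_prod_list N (\<lambda>p. if y ! (p - 1) then F1 p else F0 p) [1..<m+1] * (if b then F1 (Suc m) else F0 (Suc m))"
proof -
  let ?H = "\<lambda>p. if (y @ [b]) ! (p - 1) then F1 p else F0 p"
  have "mat_prod_list N ?H [1..<Suc m+1] = mat_prod_list N ?H [1..<m+1] * mat_prod_list N ?H [Suc m]"
    unfolding upt_Suc_snoc by (rule mat_prod_list_append) (use F in auto)
  also have "mat_prod_list N ?H [1..<m+1] = mat_prod_list N (\<lambda>p. if y ! (p - 1) then F1 p else F0 p) [1..<m+1]"
    by (rule mat_prod_list_cong) (use y in \<open>auto simp: bool_lists_def nth_append\<close>)
  also have "mat_prod_list N ?H [Suc m] = (if b then F1 (Suc m) else F0 (Suc m))"
    using y F(1)[of "Suc m"] F(2)[of "Suc m"] by (auto simp: bool_lists_def nth_append)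
  finally show ?thesis .
qed

lemma mat_prod_list_add_expand:
  assumes "\<And>p. p \<in> {1..m} \<Longrightarrow> F0 p \<in> carrier_mat N N" "\<And>p. p \<in> {1..m} \<Longrightarrow> F1 p \<in> carrier_mat N N"
  shows "mat_prod_list N (\<lambda>p. F0 p + F1 p) [1..<m+1]
    = msum N (bool_lists m) (\<lambda>x. mat_prod_list N (\<lambda>p. if x ! (p - 1) then F1 p else F0 p) [1..<m+1])"
  using assms
proof (induction m)
  case 0 then show ?case by (auto simp: bool_lists_def intro!: msum_delta[symmetric])
next
  case (Suc m)
  let ?G = "\<lambda>x. mat_prod_list N (\<lambda>p. if x ! (p - 1) then F1 p else F0 p) [1..<m+1]"
  have c0: "F0 (Suc m) \<in> carrier_mat N N" "F1 (Suc m) \<in> carrier_mat N N" using Suc.prems by auto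
  have cG: "?G x \<in> carrier_mat N N" for x by (rule mat_prod_list_carrier) (use Suc.prems in auto)
  have IH: "mat_prod_list N (\<lambda>p. F0 p + F1 p) [1..<m+1] = msum N (bool_lists m) ?G"
    by (rule Suc.IH) (use Suc.prems in auto)
  have "mat_prod_list N (\<lambda>p. F0 p + F1 p) [1..<Suc m+1]
      = mat_prod_list N (\<lambda>p. F0 p + F1 p) [1..<m+1] * mat_prod_list N (\<lambda>p. F0 p + F1 p) [Suc m]"
    unfolding upt_Suc_snoc by (rule mat_prod_list_append) (use Suc.prems in auto)
  also have "\<dots> = msum N (bool_lists m) ?G * (F0 (Suc m) + F1 (Suc m))"
    using IH c0 by simp
  also have "\<dots> = msum N (bool_lists m) (\<lambda>y. ?G y * (F0 (Suc m) + F1 (Suc m)))"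
    by (rule msum_mult_right) (use c0 cG in auto)
  also have "\<dots> = msum N (bool_lists m) (\<lambda>y. ?G y * F0 (Suc m) + ?G y * F1 (Suc m))"
    by (rule msum_cong, rule mult_add_distrib_mat[OF cG c0])
  also have "\<dots> = msum N (bool_lists (Suc m)) (\<lambda>x. mat_prod_list N (\<lambda>p. if x ! (p - 1) then F1 p else F0 p) [1..<Suc m+1])"
    unfolding msum_bool_lists_Suc
  proof (rule msum_cong)
    fix y assume y: "y \<in> bool_lists m"
    have "?G y * F0 (Suc m) + ?G y * F1 (Suc m) = msum N UNIV (\<lambda>b. ?G y * (if b then F1 (Suc m) else F0 (Suc m)))"
      using cG[of y] c0 by (subst msum_UNIV_bool) auto
    then show "?G y * F0 (Suc m) + ?G y * F1 (Suc m)
        = msum N UNIV (\<lambda>b. mat_prod_list N (\<lambda>p. if (y @ [b]) ! (p - 1) then F1 p else F0 p) [1..<Suc m+1])"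
      using mat_prod_list_snoc_choice[where ?F0.0 = F0 and ?F1.0 = F1 and y = y, OF Suc.prems y] by simp
  qed
  finally show ?case .
qed

section \<open>Rank-one projections\<close>

lemma double_sum_norm_sq_eq_0: fixes f :: "nat \<Rightarrow> nat \<Rightarrow> complex"
  assumes "(\<Sum>r<N. \<Sum>c<N. f r c * cnj (f r c)) = 0" "r < N" "c < N"
  shows "f r c = 0"
proof -
  have e: "f r c * cnj (f r c) = of_real ((cmod (f r c))^2)" for r c
    by (rule complex_norm_square[symmetric])
  have "(\<Sum>r<N. \<Sum>c<N. f r c * cnj (f r c)) = of_real (\<Sum>r<N. \<Sum>c<N. (cmod (f r c))^2)"
    unfolding e by simp
  then have z: "(\<Sum>r<N. \<Sum>c<N. (cmod (f r c))^2) = 0" using assms(1) by (metis of_real_eq_0_iff)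
  have "(\<Sum>c<N. (cmod (f r c))^2) = 0"
    using z assms(2) by (subst (asm) sum_nonneg_eq_0_iff) (auto intro: sum_nonneg)
  then have "(cmod (f r c))^2 = 0"
    using assms(3) by (subst (asm) sum_nonneg_eq_0_iff) auto
  then show ?thesis by simp
qed

locale herm_idempotent =
  fixes N :: nat and P :: "complex mat"
  assumes carr: "P \<in> carrier_mat N N" and herm: "dag P = P" and idem: "P * P = P"
begin

lemma carrier_dims[simp]: "dim_row P = N" "dim_col P = N" using carr by auto

lemma index_herm: "r < N \<Longrightarrow> c < N \<Longrightarrow> P $$ (c,r) = cnj (P $$ (r,c))"
proof -
  assume rc: "r < N" "c < N"
  have "P $$ (c,r) = dag P $$ (c,r)" using herm by simp
  also have "\<dots> = cnj (P $$ (r,c))" using rc by simp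
  finally show ?thesis .
qed

lemma index_idem: "r < N \<Longrightarrow> c < N \<Longrightarrow> (\<Sum>k<N. P $$ (r,k) * P $$ (k,c)) = P $$ (r,c)"
proof -
  assume rc: "r < N" "c < N"
  have "(P * P) $$ (r,c) = (\<Sum>k<N. P $$ (r,k) * P $$ (k,c))"
    using rc by (auto simp: scalar_prod_def lessThan_atLeast0 intro!: sum.cong)
  then show ?thesis using idem by simp
qed

lemma cnj_col_inner: "c < N \<Longrightarrow> j < N \<Longrightarrow> (\<Sum>r<N. cnj (P $$ (r,c)) * P $$ (r,j)) = P $$ (c,j)"
proof -
  assume cj: "c < N" "j < N"
  have "(\<Sum>r<N. cnj (P $$ (r,c)) * P $$ (r,j)) = (\<Sum>r<N. P $$ (c,r) * P $$ (r,j))"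
    using index_herm[OF _ cj(1)] by (intro sum.cong) auto
  also have "\<dots> = P $$ (c,j)" using cj by (rule index_idem)
  finally show ?thesis .
qed

lemma cnj_diag: "j < N \<Longrightarrow> cnj (P $$ (j,j)) = P $$ (j,j)"
  using index_herm[of j j] by simp

lemma sum_index_cnj_index: "(\<Sum>r<N. \<Sum>c<N. P $$ (r,c) * cnj (P $$ (r,c))) = mtrace P"
proof -
  have "(\<Sum>r<N. \<Sum>c<N. P $$ (r,c) * cnj (P $$ (r,c))) = (\<Sum>c<N. \<Sum>r<N. cnj (P $$ (r,c)) * P $$ (r,c))"
    by (subst sum.swap) (simp add: mult.commute)
  also have "\<dots> = (\<Sum>c<N. P $$ (c,c))" by (intro sum.cong) (auto simp: cnj_col_inner)
  finally show ?thesis unfolding mtrace_def by simp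
qed

lemma sum_index_cnj_rank_one:
  assumes j: "j < N" and a: "P $$ (j,j) \<noteq> 0"
  shows "(\<Sum>r<N. \<Sum>c<N. P $$ (r,c) * cnj (P $$ (r,j) * cnj (P $$ (c,j)) / P $$ (j,j))) = 1"
proof -
  let ?a = "P $$ (j,j)"
  have "(\<Sum>r<N. \<Sum>c<N. P $$ (r,c) * cnj (P $$ (r,j) * cnj (P $$ (c,j)) / ?a))
      = (\<Sum>r<N. \<Sum>c<N. cnj (P $$ (r,j)) * P $$ (r,c) * P $$ (c,j) / ?a)"
    using cnj_diag[OF j] by (intro sum.cong refl) (simp add: mult_ac)
  also have "\<dots> = (\<Sum>c<N. \<Sum>r<N. cnj (P $$ (r,j)) * P $$ (r,c) * P $$ (c,j) / ?a)"
    by (rule sum.swap)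
  also have "\<dots> = (\<Sum>c<N. (\<Sum>r<N. cnj (P $$ (r,j)) * P $$ (r,c)) * P $$ (c,j) / ?a)"
    by (intro sum.cong refl) (simp add: sum_distrib_right sum_divide_distrib)
  also have "\<dots> = (\<Sum>c<N. P $$ (j,c) * P $$ (c,j) / ?a)"
    using j by (intro sum.cong) (auto simp: cnj_col_inner)
  also have "\<dots> = (\<Sum>c<N. P $$ (j,c) * P $$ (c,j)) / ?a"
    by (simp add: sum_divide_distrib)
  also have "\<dots> = 1" using index_idem[OF j j] a by simp
  finally show ?thesis .
qed

lemma sum_rank_one_cnj_rank_one:
  assumes j: "j < N" and a: "P $$ (j,j) \<noteq> 0"
  shows "(\<Sum>r<N. \<Sum>c<N. P $$ (r,j) * cnj (P $$ (c,j)) / P $$ (j,j) * cnj (P $$ (r,j) * cnj (P $$ (c,j)) / P $$ (j,j))) = 1"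
proof -
  let ?a = "P $$ (j,j)"
  have aa: "?a = (\<Sum>r<N. P $$ (r,j) * cnj (P $$ (r,j)))"
    using cnj_col_inner[OF j j] by (simp add: mult.commute)
  have "(\<Sum>r<N. \<Sum>c<N. P $$ (r,j) * cnj (P $$ (c,j)) / ?a * cnj (P $$ (r,j) * cnj (P $$ (c,j)) / ?a))
      = (\<Sum>r<N. P $$ (r,j) * cnj (P $$ (r,j))) * (\<Sum>c<N. P $$ (c,j) * cnj (P $$ (c,j))) / (?a * ?a)"
    using cnj_diag[OF j] by (simp add: sum_product sum_divide_distrib mult_ac)
  then show ?thesis using a unfolding aa[symmetric] by simp
qed

lemma rank_one_defect:
  assumes j: "j < N" and a: "P $$ (j,j) \<noteq> 0"
  defines "Q \<equiv> \<lambda>r c. P $$ (r,j) * cnj (P $$ (c,j)) / P $$ (j,j)"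
  shows "(\<Sum>r<N. \<Sum>c<N. (P $$ (r,c) - Q r c) * cnj (P $$ (r,c) - Q r c)) = mtrace P - 1"
proof -
  have PQ: "(\<Sum>r<N. \<Sum>c<N. P $$ (r,c) * cnj (Q r c)) = 1"
    unfolding Q_def by (rule sum_index_cnj_rank_one[OF j a])
  have QP: "(\<Sum>r<N. \<Sum>c<N. Q r c * cnj (P $$ (r,c))) = cnj (\<Sum>r<N. \<Sum>c<N. P $$ (r,c) * cnj (Q r c))"
    by (simp add: mult.commute)
  have QQ: "(\<Sum>r<N. \<Sum>c<N. Q r c * cnj (Q r c)) = 1"
    unfolding Q_def by (rule sum_rank_one_cnj_rank_one[OF j a])
  have "(\<Sum>r<N. \<Sum>c<N. (P $$ (r,c) - Q r c) * cnj (P $$ (r,c) - Q r c)) =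
      (\<Sum>r<N. \<Sum>c<N. P $$ (r,c) * cnj (P $$ (r,c))) - (\<Sum>r<N. \<Sum>c<N. P $$ (r,c) * cnj (Q r c))
      - (\<Sum>r<N. \<Sum>c<N. Q r c * cnj (P $$ (r,c))) + (\<Sum>r<N. \<Sum>c<N. Q r c * cnj (Q r c))"
    by (simp add: algebra_simps sum.distrib sum_subtractf)
  then show ?thesis using PQ QP QQ sum_index_cnj_index by simp
qed

lemma trace_one_index:
  assumes tr: "mtrace P = 1"
  obtains j where "j < N" "P $$ (j,j) \<noteq> 0"
    "\<And>r c. r < N \<Longrightarrow> c < N \<Longrightarrow> P $$ (r,c) = P $$ (r,j) * cnj (P $$ (c,j)) / P $$ (j,j)"
proof -
  have "\<exists>j<N. P $$ (j,j) \<noteq> 0"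
  proof (rule ccontr)
    assume "\<not> ?thesis"
    then have "mtrace P = 0" unfolding mtrace_def by simp
    then show False using tr by simp
  qed
  then obtain j where j: "j < N" "P $$ (j,j) \<noteq> 0" by blast
  show ?thesis
  proof (rule that[OF j])
    fix r c assume rc: "r < N" "c < N"
    have "(\<Sum>r<N. \<Sum>c<N. (P $$ (r,c) - P $$ (r,j) * cnj (P $$ (c,j)) / P $$ (j,j)) *
        cnj (P $$ (r,c) - P $$ (r,j) * cnj (P $$ (c,j)) / P $$ (j,j))) = 0"
      using rank_one_defect[OF j] tr by simp
    from double_sum_norm_sq_eq_0[OF this rc]
    show "P $$ (r,c) = P $$ (r,j) * cnj (P $$ (c,j)) / P $$ (j,j)" by simp
  qed
qed

end

context herm_idempotent
begin

lemma sandwich_trace_one: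
  assumes tr: "mtrace P = 1" and X: "X \<in> carrier_mat N N"
  shows "P * X * P = mtrace (P * X) \<cdot>\<^sub>m P"
proof -
  obtain j where j: "j < N" "P $$ (j,j) \<noteq> 0"
    and e: "\<And>r c. r < N \<Longrightarrow> c < N \<Longrightarrow> P $$ (r,c) = P $$ (r,j) * cnj (P $$ (c,j)) / P $$ (j,j)"
    using trace_one_index[OF tr] by blast
  define a where "a = P $$ (j,j)"
  define s where "s = (\<Sum>k<N. \<Sum>l<N. cnj (P $$ (k,j)) * X $$ (k,l) * P $$ (l,j))"
  have tr2: "mtrace (P * X) = s / a"
  proof -
    have "mtrace (P * X) = (\<Sum>l<N. \<Sum>k<N. P $$ (l,k) * X $$ (k,l))"
      using X by (auto simp: mtrace_def scalar_prod_def lessThan_atLeast0 intro!: sum.cong)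
    also have "\<dots> = (\<Sum>l<N. \<Sum>k<N. P $$ (l,j) * cnj (P $$ (k,j)) / a * X $$ (k,l))"
      unfolding a_def by (intro sum.cong refl) (simp add: e)
    also have "\<dots> = s / a" unfolding s_def
      by (subst sum.swap) (simp add: sum_divide_distrib mult_ac)
    finally show ?thesis .
  qed
  show ?thesis
  proof (rule eq_matI)
    fix r c assume "r < dim_row (mtrace (P * X) \<cdot>\<^sub>m P)" "c < dim_col (mtrace (P * X) \<cdot>\<^sub>m P)"
    then have rc: "r < N" "c < N" by auto
    have "(P * X * P) $$ (r,c) = (\<Sum>l<N. (\<Sum>k<N. P $$ (r,k) * X $$ (k,l)) * P $$ (l,c))"
      using X rc by (auto simp: scalar_prod_def lessThan_atLeast0 intro!: sum.cong)
    also have "\<dots> = (\<Sum>l<N. (\<Sum>k<N. P $$ (r,j) * cnj (P $$ (k,j)) / a * X $$ (k,l)) * (P $$ (l,j) * cnj (P $$ (c,j)) / a))"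
      unfolding a_def using rc by (intro sum.cong refl) (simp add: e)
    also have "\<dots> = P $$ (r,j) * cnj (P $$ (c,j)) / a * (s / a)"
      unfolding s_def by (subst sum.swap) (simp add: sum_distrib_left sum_distrib_right sum_divide_distrib mult_ac)
    also have "\<dots> = (mtrace (P * X) \<cdot>\<^sub>m P) $$ (r,c)"
      using rc tr2 e[OF rc] unfolding a_def by simp
    finally show "(P * X * P) $$ (r,c) = (mtrace (P * X) \<cdot>\<^sub>m P) $$ (r,c)" .
  qed auto
qed

lemma rank_one_mult_vec:
  assumes j: "j < N"
    and e: "\<And>r c. r < N \<Longrightarrow> c < N \<Longrightarrow> P $$ (r,c) = P $$ (r,j) * cnj (P $$ (c,j)) / P $$ (j,j)"
    and v: "v \<in> carrier_vec N"
  shows "P *\<^sub>v v = ((\<Sum>k<N. cnj (P $$ (k,j)) * v $ k) / P $$ (j,j)) \<cdot>\<^sub>v col P j"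
proof (rule eq_vecI)
  fix r assume "r < dim_vec (((\<Sum>k<N. cnj (P $$ (k,j)) * v $ k) / P $$ (j,j)) \<cdot>\<^sub>v col P j)"
  then have r: "r < N" by simp
  have "(P *\<^sub>v v) $ r = (\<Sum>k<N. P $$ (r,k) * v $ k)"
    using r v by (auto simp: scalar_prod_def lessThan_atLeast0 intro!: sum.cong)
  also have "\<dots> = (\<Sum>k<N. P $$ (r,j) * cnj (P $$ (k,j)) / P $$ (j,j) * v $ k)"
    using r by (intro sum.cong refl) (simp add: e)
  also have "\<dots> = (((\<Sum>k<N. cnj (P $$ (k,j)) * v $ k) / P $$ (j,j)) \<cdot>\<^sub>v col P j) $ r"
    using r j by (simp add: sum_distrib_left sum_divide_distrib mult_ac)
  finally show "(P *\<^sub>v v) $ r = (((\<Sum>k<N. cnj (P $$ (k,j)) * v $ k) / P $$ (j,j)) \<cdot>\<^sub>v col P j) $ r" .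
qed (use v in auto)

lemma trace_one_range_vec:
  assumes tr: "mtrace P = 1"
  obtains u where "u \<in> carrier_vec N" "u \<noteq> 0\<^sub>v N" "P *\<^sub>v u = u"
    "\<And>v. v \<in> carrier_vec N \<Longrightarrow> \<exists>c. P *\<^sub>v v = c \<cdot>\<^sub>v u"
proof -
  obtain j where j: "j < N" "P $$ (j,j) \<noteq> 0"
    and e: "\<And>r c. r < N \<Longrightarrow> c < N \<Longrightarrow> P $$ (r,c) = P $$ (r,j) * cnj (P $$ (c,j)) / P $$ (j,j)"
    using trace_one_index[OF tr] by blast
  have u: "col P j \<in> carrier_vec N" unfolding carrier_vec_def by simp
  have u0: "col P j \<noteq> 0\<^sub>v N"
  proof
    assume "col P j = 0\<^sub>v N"
    then have "col P j $ j = 0" using j by simp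
    then show False using j by simp
  qed
  have Pu: "P *\<^sub>v col P j = col P j"
    using col_mult2[OF carr carr j(1)] idem by simp
  show ?thesis using that[OF u u0 Pu] rank_one_mult_vec[OF j(1) e] by blast
qed

end

locale rank_one_family =
  fixes N :: nat and S :: "'s set" and P :: "'s \<Rightarrow> complex mat" and u :: "'s \<Rightarrow> complex vec"
  assumes finite_family: "finite S"
    and proj_carrier: "\<And>s. s \<in> S \<Longrightarrow> P s \<in> carrier_mat N N"
    and proj_orth: "\<And>s t. s \<in> S \<Longrightarrow> t \<in> S \<Longrightarrow> s \<noteq> t \<Longrightarrow> P s * P t = 0\<^sub>m N N"
    and vec_carrier: "\<And>s. s \<in> S \<Longrightarrow> u s \<in> carrier_vec N"
    and vec_nonzero: "\<And>s. s \<in> S \<Longrightarrow> u s \<noteq> 0\<^sub>v N"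
    and proj_fixes_vec: "\<And>s. s \<in> S \<Longrightarrow> P s *\<^sub>v u s = u s"
    and proj_range: "\<And>s v. s \<in> S \<Longrightarrow> v \<in> carrier_vec N \<Longrightarrow> \<exists>c. P s *\<^sub>v v = c \<cdot>\<^sub>v u s"
begin

lemma proj_mult_vec: assumes s: "s \<in> S" and t: "t \<in> S"
  shows "P s *\<^sub>v u t = (if s = t then u s else 0\<^sub>v N)"
proof (cases "s = t")
  case False
  have "P s *\<^sub>v u t = (P s * P t) *\<^sub>v u t"
    using proj_fixes_vec[OF t] proj_carrier[OF s] proj_carrier[OF t] vec_carrier[OF t]
    by (metis assoc_mult_mat_vec)
  also have "\<dots> = 0\<^sub>v N"
    using proj_orth[OF s t False] vec_carrier[OF t] by (auto intro!: eq_vecI simp: scalar_prod_def)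
  finally show ?thesis using False by simp
qed (use proj_fixes_vec[OF s] in simp)

lemma inj_on_vec: "inj_on u S"
proof (rule inj_onI)
  fix s t assume s: "s \<in> S" and t: "t \<in> S" and st: "u s = u t"
  show "s = t"
  proof (rule ccontr)
    assume "s \<noteq> t"
    then have "u s = 0\<^sub>v N" using proj_mult_vec[OF s t] proj_fixes_vec[OF s] st by simp
    then show False using vec_nonzero[OF s] by simp
  qed
qed

end

locale rank_one_kernel_basis = rank_one_family N S P u + kernel N N M
  for N S P u and M :: "complex mat" +
  assumes vec_kernel: "\<And>s. s \<in> S \<Longrightarrow> u s \<in> mat_kernel M"
    and resolution: "\<And>v. v \<in> mat_kernel M \<Longrightarrow> msum N S P *\<^sub>v v = v"
begin

lemma vecs_kernel: "u ` S \<subseteq> mat_kernel M"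
  using vec_kernel by auto

lemma span_vecs: "span (u ` S) = mat_kernel M"
proof
  show "span (u ` S) \<subseteq> mat_kernel M" using Ker.span_is_subset2[OF vecs_kernel] by simp
  show "mat_kernel M \<subseteq> span (u ` S)"
  proof
    fix v assume vK: "v \<in> mat_kernel M"
    then have v: "v \<in> carrier_vec N" unfolding mat_kernel_def using A by simp
    have "\<forall>s\<in>S. \<exists>c. P s *\<^sub>v v = c \<cdot>\<^sub>v u s" using proj_range v by blast
    then obtain c where c: "\<And>s. s \<in> S \<Longrightarrow> P s *\<^sub>v v = c s \<cdot>\<^sub>v u s"
      using bchoice[of S] by metis
    define a where "a = (\<lambda>w. c (the_inv_into S u w))"
    have dim_lc: "dim_vec (lincomb a (u ` S)) = N"
      using Ker.lincomb_closed[OF vecs_kernel] A unfolding mat_kernel_def by auto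
    have "v = lincomb a (u ` S)"
    proof (rule eq_vecI)
      fix i assume "i < dim_vec (lincomb a (u ` S))"
      then have i: "i < N" using dim_lc by simp
      have "lincomb a (u ` S) $ i = (\<Sum>s\<in>S. a (u s) * u s $ i)"
        using lincomb_index[OF i vecs_kernel] by (simp add: sum.reindex[OF inj_on_vec])
      also have "\<dots> = (\<Sum>s\<in>S. (P s *\<^sub>v v) $ i)"
      proof (rule sum.cong[OF refl])
        fix s assume s: "s \<in> S"
        have "a (u s) = c s" unfolding a_def using the_inv_into_f_f[OF inj_on_vec s] by simp
        then show "a (u s) * u s $ i = (P s *\<^sub>v v) $ i"
          unfolding c[OF s] using vec_carrier[OF s] i by simp
      qed
      also have "\<dots> = (msum N S P *\<^sub>v v) $ i"
        by (rule msum_mult_vec_index[OF v i proj_carrier, symmetric])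
      finally show "v $ i = lincomb a (u ` S) $ i" using resolution[OF vK] by simp
    qed (use v dim_lc in auto)
    then show "v \<in> span (u ` S)" unfolding Ker.span_def using finite_family by blast
  qed
qed

lemma proj_mult_lincomb_index: assumes s: "s \<in> S" and i: "i < N"
  shows "(P s *\<^sub>v lincomb a (u ` S)) $ i = a (u s) * u s $ i"
proof -
  have mult_index: "(P s *\<^sub>v v) $ i = (\<Sum>k<N. P s $$ (i,k) * v $ k)" if "dim_vec v = N" for v
    using i proj_carrier[OF s] that by (auto simp: scalar_prod_def lessThan_atLeast0 intro!: sum.cong)
  have dim_lc: "dim_vec (lincomb a (u ` S)) = N"
    using Ker.lincomb_closed[OF vecs_kernel] A unfolding mat_kernel_def by auto
  have "(P s *\<^sub>v lincomb a (u ` S)) $ i = (\<Sum>k<N. P s $$ (i,k) * (\<Sum>t\<in>S. a (u t) * u t $ k))"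
    unfolding mult_index[OF dim_lc]
    by (intro sum.cong refl) (simp add: lincomb_index[OF _ vecs_kernel] sum.reindex[OF inj_on_vec])
  also have "\<dots> = (\<Sum>t\<in>S. a (u t) * (\<Sum>k<N. P s $$ (i,k) * u t $ k))"
    by (simp add: sum_distrib_left sum.swap[of _ S] mult_ac)
  also have "\<dots> = (\<Sum>t\<in>S. a (u t) * (P s *\<^sub>v u t) $ i)"
    using mult_index vec_carrier by simp
  also have "\<dots> = (\<Sum>t\<in>S. if t = s then a (u s) * u s $ i else 0)"
    by (rule sum.cong[OF refl]) (use i s in \<open>auto simp: proj_mult_vec\<close>)
  also have "\<dots> = a (u s) * u s $ i" using s finite_family by simp
  finally show ?thesis .
qed

lemma lin_indpt_vecs: "lin_indpt (u ` S)"
proof (rule Ker.finite_lin_indpt2)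
  show "finite (u ` S)" using finite_family by simp
  show "u ` S \<subseteq> mat_kernel M" by (rule vecs_kernel)
  fix a assume "a \<in> u ` S \<rightarrow> UNIV" and lc0: "lincomb a (u ` S) = 0\<^sub>v N"
  show "\<forall>w\<in>u ` S. a w = 0"
  proof
    fix w assume "w \<in> u ` S"
    then obtain s where s: "s \<in> S" and w: "w = u s" by auto
    obtain i where i: "i < N" "u s $ i \<noteq> 0"
      using vec_nonzero[OF s] vec_carrier[OF s] by (metis eq_vecI carrier_vecD index_zero_vec)
    have "a (u s) * u s $ i = 0"
      using proj_mult_lincomb_index[OF s i(1), of a] lc0 proj_carrier[OF s] i(1) by simp
    then show "a w = 0" using i(2) w by simp
  qed
qed

lemma kernel_dim_eq_card: "kernel_dim M = card S"
proof -
  have "basis (u ` S)" unfolding Ker.basis_def using lin_indpt_vecs span_vecs vecs_kernel by simp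
  then have "dim = card (u ` S)" using finite_family by (intro Ker.dim_basis) simp_all
  then show ?thesis using card_image[OF inj_on_vec] by simp
qed

end

section \<open>Majorana operators\<close>

lemma occ_bit: "occ i k = bit i k" unfolding occ_def by (simp add: bit_iff_odd)

lemma occ_flip: "occ (flip_bit j c) l = (if l = j then \<not> occ c l else occ c l)"
  unfolding occ_bit by (auto simp: bit_flip_bit_iff)

lemma flip_bit_flip_bit[simp]: "flip_bit j (flip_bit j (c::nat)) = c"
  by (rule bit_eqI) (auto simp: bit_flip_bit_iff)

lemma flip_bit_commute: "flip_bit j (flip_bit k (c::nat)) = flip_bit k (flip_bit j c)"
  by (rule bit_eqI) (auto simp: bit_flip_bit_iff)

lemma flip_bit_eq_if_occ: "flip_bit k (c::nat) = (if occ c k then c - 2^k else c + 2^k)"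
proof (cases "bit c k")
  case True
  have "c = set_bit k (unset_bit k c)" using True by (rule_tac bit_eqI) (auto simp: bit_simps)
  also have "\<dots> = unset_bit k c + 2^k" by (simp add: set_bit_eq bit_simps)
  finally have "c - 2^k = unset_bit k c" by simp
  then show ?thesis using True unfolding occ_bit flip_bit_eq_if by simp
next
  case False
  then show ?thesis unfolding occ_bit flip_bit_eq_if by (simp add: set_bit_eq)
qed

lemma flip_bit_less_power: assumes "(c::nat) < 2^n" "k < n" shows "flip_bit k c < 2^n"
proof -
  have tc: "take_bit n c = c" using assms by (simp add: take_bit_nat_eq_self_iff)
  have "take_bit n (flip_bit k c) = flip_bit k c"
  proof (rule bit_eqI)
    fix m
    have "bit c m \<Longrightarrow> m < n" using tc by (metis bit_take_bit_iff)
    then show "bit (take_bit n (flip_bit k c)) m = bit (flip_bit k c) m"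
      using assms by (auto simp: bit_take_bit_iff bit_flip_bit_iff)
  qed
  then show ?thesis by (simp add: take_bit_nat_eq_self_iff)
qed

definition jw_sign :: "nat \<Rightarrow> nat \<Rightarrow> complex" where
  "jw_sign k c = (- 1) ^ card {l. l < k \<and> occ c l}"

lemma jw_sign_sq[simp]: "jw_sign k c * jw_sign k c = 1"
  unfolding jw_sign_def by (simp add: power_mult_distrib[symmetric])

lemma cnj_jw_sign[simp]: "cnj (jw_sign k c) = jw_sign k c"
  unfolding jw_sign_def by simp

lemma jw_sign_flip_bit: "jw_sign k (flip_bit j c) = (if j < k then - jw_sign k c else jw_sign k c)"
proof -
  let ?S = "{l. l < k \<and> occ c l}"
  let ?T = "{l. l < k \<and> occ (flip_bit j c) l}"
  have fin: "finite ?S" "finite ?T" by auto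
  show ?thesis
  proof (cases "j < k")
    case False
    then have "?T = ?S" by (auto simp: occ_flip)
    then show ?thesis using False unfolding jw_sign_def by simp
  next
    case True
    show ?thesis
    proof (cases "occ c j")
      case True': True
      then have "?S = insert j ?T" "j \<notin> ?T" using True by (auto simp: occ_flip)
      then have "card ?S = Suc (card ?T)" using fin by simp
      then show ?thesis using True unfolding jw_sign_def by simp
    next
      case False': False
      then have "?T = insert j ?S" "j \<notin> ?S" using True by (auto simp: occ_flip)
      then have "card ?T = Suc (card ?S)" using fin by simp
      then show ?thesis using True unfolding jw_sign_def by simp
    qed
  qed
qed

definition monomial_mat :: "nat \<Rightarrow> (nat \<Rightarrow> nat) \<Rightarrow> (nat \<Rightarrow> complex) \<Rightarrow> complex mat" where
  "monomial_mat N f \<phi> = mat N N (\<lambda>(r,c). if r = f c then \<phi> c else 0)"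

lemma monomial_mat_carrier[simp]: "monomial_mat N f \<phi> \<in> carrier_mat N N" unfolding monomial_mat_def by auto

lemma monomial_mat_dims[simp]: "dim_row (monomial_mat N f \<phi>) = N" "dim_col (monomial_mat N f \<phi>) = N" unfolding monomial_mat_def by auto

lemma monomial_mat_index[simp]: "r < N \<Longrightarrow> c < N \<Longrightarrow> monomial_mat N f \<phi> $$ (r,c) = (if r = f c then \<phi> c else 0)"
  unfolding monomial_mat_def by auto

lemma monomial_mat_mult: assumes "\<And>c. c < N \<Longrightarrow> g c < N"
  shows "monomial_mat N f \<phi> * monomial_mat N g \<psi> = monomial_mat N (\<lambda>c. f (g c)) (\<lambda>c. \<phi> (g c) * \<psi> c)"
proof (rule eq_matI)
  fix r c assume "r < dim_row (monomial_mat N (\<lambda>c. f (g c)) (\<lambda>c. \<phi> (g c) * \<psi> c))" "c < dim_col (monomial_mat N (\<lambda>c. f (g c)) (\<lambda>c. \<phi> (g c) * \<psi> c))"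
  then have rc: "r < N" "c < N" by auto
  have "(monomial_mat N f \<phi> * monomial_mat N g \<psi>) $$ (r,c) = (\<Sum>l\<in>{0..<N}. (if r = f l then \<phi> l else 0) * (if l = g c then \<psi> c else 0))"
    using rc by (auto simp: scalar_prod_def intro!: sum.cong)
  also have "\<dots> = (\<Sum>l\<in>{0..<N}. if l = g c then (if r = f (g c) then \<phi> (g c) * \<psi> c else 0) else 0)"
    by (rule sum.cong) auto
  also have "\<dots> = (if r = f (g c) then \<phi> (g c) * \<psi> c else 0)"
    using assms[OF rc(2)] by (subst sum.delta) auto
  finally show "(monomial_mat N f \<phi> * monomial_mat N g \<psi>) $$ (r,c) = monomial_mat N (\<lambda>c. f (g c)) (\<lambda>c. \<phi> (g c) * \<psi> c) $$ (r,c)"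
    using rc by simp
qed auto

lemma monomial_mat_dag: assumes "\<And>c. c < N \<Longrightarrow> f c < N" "\<And>c. f (f c) = c"
  shows "dag (monomial_mat N f \<phi>) = monomial_mat N f (\<lambda>c. cnj (\<phi> (f c)))"
proof (rule eq_matI)
  fix r c assume "r < dim_row (monomial_mat N f (\<lambda>c. cnj (\<phi> (f c))))" "c < dim_col (monomial_mat N f (\<lambda>c. cnj (\<phi> (f c))))"
  then have rc: "r < N" "c < N" by auto
  have "(c = f r) = (r = f c)" using assms(2) by metis
  then show "dag (monomial_mat N f \<phi>) $$ (r,c) = monomial_mat N f (\<lambda>c. cnj (\<phi> (f c))) $$ (r,c)"
    using rc assms(2)[of c] by auto
qed auto

lemma monomial_mat_one: assumes "\<And>c. c < N \<Longrightarrow> f c = c" "\<And>c. c < N \<Longrightarrow> \<phi> c = 1"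
  shows "monomial_mat N f \<phi> = 1\<^sub>m N"
  by (rule eq_matI) (use assms in auto)

lemma monomial_mat_uminus: "(-1) \<cdot>\<^sub>m monomial_mat N f \<phi> = monomial_mat N f (\<lambda>c. - \<phi> c)"
  by (rule eq_matI) auto

lemma monomial_mat_cong: "(\<And>c. c < N \<Longrightarrow> f c = g c) \<Longrightarrow> (\<And>c. c < N \<Longrightarrow> \<phi> c = \<psi> c) \<Longrightarrow> monomial_mat N f \<phi> = monomial_mat N g \<psi>"
  by (rule eq_matI) auto

definition mode :: "nat \<Rightarrow> nat" where "mode p = (p - 1) div 2"

text \<open>c_p flips the occupation of mode (p - 1) div 2; its phase is the Jordan-Wigner sign, times
  -i on an occupied and +i on an empty mode when p is even.\<close>

definition majorana_phase :: "nat \<Rightarrow> nat \<Rightarrow> complex" where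
  "majorana_phase p c = (if odd p then jw_sign (mode p) c else (if occ c (mode p) then - \<i> else \<i>) * jw_sign (mode p) c)"

lemma mode_less: "p \<in> {1..2*n} \<Longrightarrow> mode p < n"
  unfolding mode_def by auto

lemma annih_index: "r < 2^n \<Longrightarrow> c < 2^n \<Longrightarrow> annih n k $$ (r,c) = (if occ c k \<and> r = flip_bit k c then jw_sign k c else 0)"
  unfolding annih_def jw_sign_def by (auto simp: flip_bit_eq_if_occ)

lemma annih_carrier[simp]: "annih n k \<in> carrier_mat (2^n) (2^n)"
  unfolding annih_def by auto

lemma annih_dims[simp]: "dim_row (annih n k) = 2^n" "dim_col (annih n k) = 2^n"
  unfolding annih_def by auto

lemma majorana_monomial_mat: assumes p: "p \<in> {1..2*n}"
  shows "majorana n p = monomial_mat (2^n) (flip_bit (mode p)) (majorana_phase p)"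
proof (rule eq_matI)
  let ?k = "mode p"
  fix r c assume "r < dim_row (monomial_mat (2^n) (flip_bit (mode p)) (majorana_phase p))" "c < dim_col (monomial_mat (2^n) (flip_bit (mode p)) (majorana_phase p))"
  then have rc: "r < 2^n" "c < 2^n" by auto
  have a: "annih n ?k $$ (r,c) = (if occ c ?k \<and> r = flip_bit ?k c then jw_sign ?k c else 0)"
    using rc by (rule annih_index)
  have b: "dag (annih n ?k) $$ (r,c) = (if \<not> occ c ?k \<and> r = flip_bit ?k c then jw_sign ?k c else 0)"
  proof -
    have "dag (annih n ?k) $$ (r,c) = cnj (annih n ?k $$ (c,r))" using rc by simp
    also have "\<dots> = (if occ r ?k \<and> c = flip_bit ?k r then jw_sign ?k r else 0)"
      using rc by (simp add: annih_index)
    also have "\<dots> = (if \<not> occ c ?k \<and> r = flip_bit ?k c then jw_sign ?k c else 0)"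
    proof (cases "r = flip_bit ?k c")
      case True
      then show ?thesis by (auto simp: occ_flip jw_sign_flip_bit)
    next
      case False
      then have "c \<noteq> flip_bit ?k r" by auto
      then show ?thesis using False by auto
    qed
    finally show ?thesis .
  qed
  show "majorana n p $$ (r,c) = monomial_mat (2^n) (flip_bit (mode p)) (majorana_phase p) $$ (r,c)"
    using rc a b unfolding majorana_def Let_def mode_def[symmetric] majorana_phase_def
    by (auto simp: algebra_simps)
qed (auto simp: majorana_def Let_def)

lemma majorana_carrier[simp]: "majorana n p \<in> carrier_mat (2^n) (2^n)"
  unfolding majorana_def Let_def by auto

lemma majorana_dims[simp]: "dim_row (majorana n p) = 2^n" "dim_col (majorana n p) = 2^n"
  using majorana_carrier[of n p] by (auto simp del: majorana_carrier)

lemma majorana_phase_flip_own_mode: "majorana_phase p (flip_bit (mode p) c) = (if odd p then majorana_phase p c else - majorana_phase p c)"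
  unfolding majorana_phase_def by (auto simp: occ_flip jw_sign_flip_bit)

lemma majorana_phase_flip_other_mode: "mode q \<noteq> mode p \<Longrightarrow> majorana_phase p (flip_bit (mode q) c) = (if mode q < mode p then - majorana_phase p c else majorana_phase p c)"
  unfolding majorana_phase_def by (auto simp: occ_flip jw_sign_flip_bit)

lemma majorana_phase_sq: "majorana_phase p (flip_bit (mode p) c) * majorana_phase p c = 1"
proof (cases "odd p")
  case True then show ?thesis by (simp add: majorana_phase_flip_own_mode majorana_phase_def jw_sign_flip_bit)
next
  case False
  have "- ((if occ c (mode p) then - \<i> else \<i>) * (if occ c (mode p) then - \<i> else \<i>)) = (1::complex)"
    by auto
  then show ?thesis using False unfolding majorana_phase_flip_own_mode by (simp add: majorana_phase_def algebra_simps)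
qed

lemma cnj_majorana_phase: "cnj (majorana_phase p (flip_bit (mode p) c)) = majorana_phase p c"
  unfolding majorana_phase_flip_own_mode by (auto simp: majorana_phase_def)

lemma flip_bit_mode_less: "p \<in> {1..2*n} \<Longrightarrow> (c::nat) < 2^n \<Longrightarrow> flip_bit (mode p) c < 2^n"
  by (rule flip_bit_less_power, auto intro: mode_less)

lemma majorana_sq: assumes "p \<in> {1..2*n}" shows "majorana n p * majorana n p = 1\<^sub>m (2^n)"
  unfolding majorana_monomial_mat[OF assms]
  by (subst monomial_mat_mult) (auto intro: flip_bit_mode_less[OF assms] monomial_mat_one simp: majorana_phase_sq)

lemma majorana_hermitian: assumes "p \<in> {1..2*n}" shows "dag (majorana n p) = majorana n p"
  unfolding majorana_monomial_mat[OF assms]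
  by (subst monomial_mat_dag) (auto intro: flip_bit_mode_less[OF assms] simp: cnj_majorana_phase)

lemma majorana_anticommute: assumes p: "p \<in> {1..2*n}" and q: "q \<in> {1..2*n}" and pq: "p \<noteq> q"
  shows "majorana n p * majorana n q = (-1) \<cdot>\<^sub>m (majorana n q * majorana n p)"
proof -
  have key: "majorana_phase p (flip_bit (mode q) c) * majorana_phase q c = - (majorana_phase q (flip_bit (mode p) c) * majorana_phase p c)" for c
  proof (cases "mode p = mode q")
    case True
    then have "odd p \<noteq> odd q" using pq p q unfolding mode_def by simp presburger
    then show ?thesis using True unfolding majorana_phase_flip_own_mode[of p, unfolded True] majorana_phase_flip_own_mode[of q]
      by (cases "odd p") (auto simp: majorana_phase_def True algebra_simps jw_sign_flip_bit occ_flip)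
  next
    case False
    then show ?thesis by (auto simp: majorana_phase_flip_other_mode algebra_simps)
  qed
  show ?thesis
    unfolding majorana_monomial_mat[OF p] majorana_monomial_mat[OF q]
    apply (subst monomial_mat_mult, erule flip_bit_mode_less[OF q])
    apply (subst monomial_mat_mult, erule flip_bit_mode_less[OF p])
    apply (unfold monomial_mat_uminus)
    apply (rule monomial_mat_cong)
    by (auto simp: flip_bit_commute key)
qed

lemma bitstrings_eq_bool_lists: "bitstrings n = bool_lists (2 * n)" unfolding bitstrings_def bool_lists_def by simp

lemma finite_bitstrings[simp]: "finite (bitstrings n)" unfolding bitstrings_eq_bool_lists by simp

lemma hw_eq_card: "length x = m \<Longrightarrow> hw x = card {p\<in>{1..m}. x ! (p - 1)}"
proof -
  assume l: "length x = m"
  have "hw x = card {i. i < m \<and> x ! i}" unfolding hw_def using l by (simp add: length_filter_conv_card)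
  also have "\<dots> = card (Suc ` {i. i < m \<and> x ! i})" by (simp add: card_image)
  also have "Suc ` {i. i < m \<and> x ! i} = {p\<in>{1..m}. x ! (p - 1)}"
  proof (rule Set.set_eqI)
    fix p show "p \<in> Suc ` {i. i < m \<and> x ! i} \<longleftrightarrow> p \<in> {p\<in>{1..m}. x ! (p - 1)}"
      by (cases p) auto
  qed
  finally show ?thesis .
qed

lemma card_true_positions: "A \<in> bitstrings n \<Longrightarrow> card {p\<in>{1..2*n}. A ! (p - 1)} = hw A"
  by (rule hw_eq_card[symmetric]) (auto simp: bitstrings_def)

lemma card_false_positions: assumes "A \<in> bitstrings n"
  shows "card {p\<in>{1..2*n}. \<not> A ! (p - 1)} = 2*n - hw A"
proof -
  have "card {p\<in>{1..2*n}. \<not> A ! (p - 1)} = card ({1..2*n} - {p\<in>{1..2*n}. A ! (p - 1)})"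
    by (rule arg_cong[where f = card]) auto
  also have "\<dots> = card {1..2*n} - card {p\<in>{1..2*n}. A ! (p - 1)}"
    by (rule card_Diff_subset) auto
  also have "\<dots> = 2*n - hw A" using card_true_positions[OF assms] by simp
  finally show ?thesis .
qed

lemma hw_le: "A \<in> bitstrings n \<Longrightarrow> hw A \<le> 2*n"
  unfolding bitstrings_def hw_def by (metis length_filter_le mem_Collect_eq)

lemma cmon_mat_prod_list: "cmon n x = mat_prod_list (2^n) (\<lambda>p. if x ! (p - 1) then majorana n p else 1\<^sub>m (2^n)) [1..<2*n+1]"
  unfolding cmon_def mat_prod_list_def by simp

lemma cmon_carrier[simp]: "cmon n x \<in> carrier_mat (2^n) (2^n)"
  unfolding cmon_mat_prod_list by (rule mat_prod_list_carrier) auto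

text \<open>A Majorana operator c_q anticommutes with c(x) exactly when the number of factors of c(x)
  other than c_q is odd: drop an occupied position if |x| is even, an empty one if |x| is odd.\<close>

lemma obtain_odd_complement_position:
  assumes lx: "length x = m" and m: "even m" and x: "True \<in> set x"
  obtains q where "q \<in> {1..m}" "odd (card {p\<in>{1..m}. x ! (p - 1) \<and> p \<noteq> q})"
proof (cases "even (card {p\<in>{1..m}. x ! (p - 1)})")
  case True
  from x obtain i where i: "i < length x" "x ! i" by (metis in_set_conv_nth)
  have q: "Suc i \<in> {1..m}" using i lx by auto
  have "{p\<in>{1..m}. x ! (p - 1)} = insert (Suc i) {p\<in>{1..m}. x ! (p - 1) \<and> p \<noteq> Suc i}"
    using i q by auto
  then show ?thesis using True that[OF q] by simp
next
  case False
  have "\<exists>i<length x. \<not> x ! i"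
  proof (rule ccontr)
    assume "\<not> ?thesis"
    then have "{p\<in>{1..m}. x ! (p - 1)} = {1..m}" using lx by auto
    then show False using False m by simp
  qed
  then obtain i where i: "i < length x" "\<not> x ! i" by auto
  have q: "Suc i \<in> {1..m}" using i lx by auto
  have "{p\<in>{1..m}. x ! (p - 1) \<and> p \<noteq> Suc i} = {p\<in>{1..m}. x ! (p - 1)}" using i by auto
  then show ?thesis using False that[OF q] by simp
qed

lemma mtrace_cmon_eq_0: assumes x: "x \<in> bitstrings n" "True \<in> set x"
  shows "mtrace (cmon n x) = 0"
proof -
  obtain q where q: "q \<in> {1..2*n}" and parity: "odd (card {p\<in>{1..2*n}. x ! (p - 1) \<and> p \<noteq> q})"
    using obtain_odd_complement_position[of x "2*n"] x unfolding bitstrings_def by auto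
  let ?F = "\<lambda>p. if x ! (p - 1) then majorana n p else 1\<^sub>m (2^n)"
  let ?s = "\<lambda>p. if x ! (p - 1) \<and> p \<noteq> q then (-1::complex) else 1"
  have anti: "majorana n q * ?F p = ?s p \<cdot>\<^sub>m (?F p * majorana n q)" if "p \<in> set [1..<2*n+1]" for p
  proof (cases "x ! (p - 1) \<and> p \<noteq> q")
    case True then show ?thesis using majorana_anticommute[OF q, of p] that by auto
  next
    case False then show ?thesis by (cases "x ! (p-1)") auto
  qed
  have "majorana n q * cmon n x = prod_list (map ?s [1..<2*n+1]) \<cdot>\<^sub>m (cmon n x * majorana n q)"
    unfolding cmon_mat_prod_list by (rule mat_prod_list_anticommute[OF majorana_carrier _ anti]) auto
  also have "prod_list (map ?s [1..<2*n+1]) = (-1) ^ card {p\<in>{1..2*n}. x ! (p - 1) \<and> p \<noteq> q}"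
    unfolding prod_list_upt_eq_prod by (rule prod_if_const_power) simp
  also have "\<dots> = -1" using parity by simp
  finally show ?thesis
    by (intro mtrace_eq_0_if_anticommutes_with_involution[OF majorana_carrier cmon_carrier majorana_sq[OF q]])
qed

lemma cmon_all_False: assumes "x \<in> bitstrings n" "True \<notin> set x" shows "cmon n x = 1\<^sub>m (2^n)"
proof -
  have "cmon n x = mat_prod_list (2^n) (\<lambda>p. 1\<^sub>m (2^n)) [1..<2*n+1]"
    unfolding cmon_mat_prod_list
  proof (rule mat_prod_list_cong)
    fix p assume "p \<in> set [1..<2*n+1]"
    then have "p - 1 < length x" using assms unfolding bitstrings_def by auto
    then have "\<not> x ! (p - 1)" using assms(2) by (metis nth_mem)
    then show "(if x ! (p - 1) then majorana n p else 1\<^sub>m (2 ^ n)) = 1\<^sub>m (2^n)" by simp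
  qed
  also have "\<dots> = 1\<^sub>m (2^n)" by (rule mat_prod_list_one)
  finally show ?thesis .
qed

section \<open>Joint eigenprojections of the operators c_p \<otimes> c_p\<close>

definition Lambda_term :: "nat \<Rightarrow> nat \<Rightarrow> complex mat" where
  "Lambda_term n p = kron (majorana n p) (majorana n p)"

definition cmon_pair :: "nat \<Rightarrow> bool list \<Rightarrow> complex mat" where
  "cmon_pair n x = kron (cmon n x) (cmon n x)"

lemma Lambda_term_carrier[simp]: "Lambda_term n p \<in> carrier_mat (4^n) (4^n)"
  unfolding Lambda_term_def using kron_carrier[OF majorana_carrier majorana_carrier, of n p n p] four_pow[of n] by simp

lemma cmon_pair_carrier[simp]: "cmon_pair n x \<in> carrier_mat (4^n) (4^n)"
  unfolding cmon_pair_def using kron_carrier[OF cmon_carrier cmon_carrier, of n x n x] four_pow[of n] by simp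

lemma Lambda_term_dims[simp]: "dim_row (Lambda_term n p) = 4^n" "dim_col (Lambda_term n p) = 4^n"
  using Lambda_term_carrier[of n p] by (auto simp del: Lambda_term_carrier)

lemma cmon_pair_dims[simp]: "dim_row (cmon_pair n x) = 4^n" "dim_col (cmon_pair n x) = 4^n"
  using cmon_pair_carrier[of n x] by (auto simp del: cmon_pair_carrier)

lemma Lambda_term_herm: "p \<in> {1..2*n} \<Longrightarrow> dag (Lambda_term n p) = Lambda_term n p"
  unfolding Lambda_term_def dag_kron by (simp add: majorana_hermitian)

lemma Lambda_term_sq: "p \<in> {1..2*n} \<Longrightarrow> Lambda_term n p * Lambda_term n p = 1\<^sub>m (4^n)"
  unfolding Lambda_term_def by (simp add: kron_mult[OF majorana_carrier majorana_carrier majorana_carrier majorana_carrier]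
     majorana_sq kron_one four_pow)

lemma Lambda_term_commute: assumes "p \<in> {1..2*n}" "q \<in> {1..2*n}" shows "Lambda_term n p * Lambda_term n q = Lambda_term n q * Lambda_term n p"
proof (cases "p = q")
  case False
  have "Lambda_term n p * Lambda_term n q = kron (majorana n p * majorana n q) (majorana n p * majorana n q)"
    unfolding Lambda_term_def by (rule kron_mult) auto
  also have "\<dots> = kron ((-1) \<cdot>\<^sub>m (majorana n q * majorana n p)) ((-1) \<cdot>\<^sub>m (majorana n q * majorana n p))"
    using majorana_anticommute[OF assms False] by simp
  also have "\<dots> = kron (majorana n q * majorana n p) (majorana n q * majorana n p)"
    by (simp add: kron_smult_left kron_smult_right smult_smult)
  also have "\<dots> = Lambda_term n q * Lambda_term n p"
    unfolding Lambda_term_def by (rule kron_mult[symmetric]) auto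
  finally show ?thesis .
qed simp

lemma cmon_pair_mat_prod_list: assumes "x \<in> bitstrings n"
  shows "cmon_pair n x = mat_prod_list (4^n) (\<lambda>p. if x ! (p - 1) then Lambda_term n p else 1\<^sub>m (4^n)) [1..<2*n+1]"
proof -
  have "cmon_pair n x = mat_prod_list (2^n*2^n) (\<lambda>p. kron (if x ! (p - 1) then majorana n p else 1\<^sub>m (2^n)) (if x ! (p - 1) then majorana n p else 1\<^sub>m (2^n))) [1..<2*n+1]"
    unfolding cmon_pair_def cmon_mat_prod_list by (rule kron_mat_prod_list) auto
  also have "\<dots> = mat_prod_list (4^n) (\<lambda>p. if x ! (p - 1) then Lambda_term n p else 1\<^sub>m (4^n)) [1..<2*n+1]"
    unfolding four_pow by (rule mat_prod_list_cong) (auto simp: Lambda_term_def kron_one four_pow)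
  finally show ?thesis .
qed

lemma cmon_pair_herm: assumes "x \<in> bitstrings n" shows "dag (cmon_pair n x) = cmon_pair n x"
  unfolding cmon_pair_mat_prod_list[OF assms]
  by (rule mat_prod_list_hermitian) (auto simp: Lambda_term_herm Lambda_term_commute)

lemma mtrace_cmon_pair: assumes "x \<in> bitstrings n"
  shows "mtrace (cmon_pair n x) = (if True \<in> set x then 0 else of_nat (4^n))"
proof -
  have "mtrace (cmon_pair n x) = mtrace (cmon n x) * mtrace (cmon n x)"
    unfolding cmon_pair_def by (rule mtrace_kron[OF cmon_carrier cmon_carrier])
  moreover have "(of_nat (2^n) :: complex) * of_nat (2^n) = of_nat (4^n)"
    by (simp only: of_nat_mult[symmetric] four_pow)
  ultimately show ?thesis using mtrace_cmon_eq_0[OF assms] cmon_all_False[OF assms]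
    by (auto simp: mtrace_one)
qed

definition bsign :: "bool \<Rightarrow> complex" where "bsign b = (if b then 1 else -1)"

lemma bsign_sq[simp]: "bsign b * bsign b = 1" unfolding bsign_def by auto

lemma cnj_bsign[simp]: "cnj (bsign b) = bsign b" unfolding bsign_def by auto

definition Lambda_term_proj :: "nat \<Rightarrow> bool \<Rightarrow> nat \<Rightarrow> complex mat" where
  "Lambda_term_proj n b p = (1/2) \<cdot>\<^sub>m (1\<^sub>m (4^n) + bsign b \<cdot>\<^sub>m Lambda_term n p)"

definition joint_proj :: "nat \<Rightarrow> bool list \<Rightarrow> complex mat" where
  "joint_proj n A = mat_prod_list (4^n) (\<lambda>p. Lambda_term_proj n (A ! (p - 1)) p) [1..<2*n+1]"

definition character :: "nat \<Rightarrow> bool list \<Rightarrow> bool list \<Rightarrow> complex" where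
  "character n A x = (\<Prod>p\<in>{1..2*n}. if x ! (p - 1) then bsign (A ! (p - 1)) else 1)"

lemma Lambda_term_proj_carrier[simp]: "Lambda_term_proj n b p \<in> carrier_mat (4^n) (4^n)"
  unfolding Lambda_term_proj_def by auto

lemma Lambda_term_proj_dims[simp]: "dim_row (Lambda_term_proj n b p) = 4^n" "dim_col (Lambda_term_proj n b p) = 4^n"
  using Lambda_term_proj_carrier[of n b p] by (auto simp del: Lambda_term_proj_carrier)

lemma joint_proj_carrier[simp]: "joint_proj n A \<in> carrier_mat (4^n) (4^n)"
  unfolding joint_proj_def by (rule mat_prod_list_carrier) auto

lemma cnj_character[simp]: "cnj (character n A x) = character n A x"
  unfolding character_def by (auto intro!: prod.cong)

lemma Lambda_term_proj_herm: "p \<in> {1..2*n} \<Longrightarrow> dag (Lambda_term_proj n b p) = Lambda_term_proj n b p"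
  unfolding Lambda_term_proj_def by (simp add: dag_smult dag_add[of _ "4^n" "4^n"] Lambda_term_herm)

lemma Lambda_term_commute_Lambda_term_proj: assumes "p \<in> {1..2*n}" "q \<in> {1..2*n}"
  shows "Lambda_term n q * Lambda_term_proj n b p = Lambda_term_proj n b p * Lambda_term n q"
proof -
  have c: "Lambda_term n q \<in> carrier_mat (4^n) (4^n)" "Lambda_term n p \<in> carrier_mat (4^n) (4^n)" by auto
  have "Lambda_term n q * Lambda_term_proj n b p = (1/2) \<cdot>\<^sub>m (Lambda_term n q + bsign b \<cdot>\<^sub>m (Lambda_term n q * Lambda_term n p))"
    unfolding Lambda_term_proj_def using c
    by (simp add: mat_dim_simps)
  also have "\<dots> = (1/2) \<cdot>\<^sub>m (Lambda_term n q + bsign b \<cdot>\<^sub>m (Lambda_term n p * Lambda_term n q))" using Lambda_term_commute[OF assms] by simp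
  also have "\<dots> = Lambda_term_proj n b p * Lambda_term n q"
    unfolding Lambda_term_proj_def using c
    by (simp add: mat_dim_simps)
  finally show ?thesis .
qed

lemma Lambda_term_mult_Lambda_term_proj: assumes "p \<in> {1..2*n}"
  shows "Lambda_term n p * Lambda_term_proj n b p = bsign b \<cdot>\<^sub>m Lambda_term_proj n b p"
proof -
  have c: "Lambda_term n p \<in> carrier_mat (4^n) (4^n)" by auto
  have "Lambda_term n p * Lambda_term_proj n b p = (1/2) \<cdot>\<^sub>m (Lambda_term n p + bsign b \<cdot>\<^sub>m (Lambda_term n p * Lambda_term n p))"
    unfolding Lambda_term_proj_def using c
    by (simp add: mat_dim_simps)
  also have "\<dots> = (1/2) \<cdot>\<^sub>m (Lambda_term n p + bsign b \<cdot>\<^sub>m 1\<^sub>m (4^n))" using Lambda_term_sq[OF assms] by simp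
  also have "\<dots> = bsign b \<cdot>\<^sub>m Lambda_term_proj n b p"
    unfolding Lambda_term_proj_def using c
    by (rule_tac eq_matI) (auto simp: bsign_def algebra_simps)
  finally show ?thesis .
qed

lemma Lambda_term_proj_commute: assumes "p \<in> {1..2*n}" "q \<in> {1..2*n}"
  shows "Lambda_term_proj n a p * Lambda_term_proj n b q = Lambda_term_proj n b q * Lambda_term_proj n a p"
proof -
  have c: "Lambda_term n q \<in> carrier_mat (4^n) (4^n)" "Lambda_term n p \<in> carrier_mat (4^n) (4^n)" by auto
  have "Lambda_term_proj n a p * Lambda_term_proj n b q = (1/2) \<cdot>\<^sub>m (Lambda_term_proj n a p + bsign b \<cdot>\<^sub>m (Lambda_term_proj n a p * Lambda_term n q))"
    unfolding Lambda_term_proj_def[of n b q] using c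
    by (simp add: mat_dim_simps)
  also have "\<dots> = (1/2) \<cdot>\<^sub>m (Lambda_term_proj n a p + bsign b \<cdot>\<^sub>m (Lambda_term n q * Lambda_term_proj n a p))" using Lambda_term_commute_Lambda_term_proj[OF assms] by simp
  also have "\<dots> = Lambda_term_proj n b q * Lambda_term_proj n a p"
    unfolding Lambda_term_proj_def[of n b q] using c
    by (simp add: mat_dim_simps)
  finally show ?thesis .
qed

lemma joint_proj_dims[simp]: "dim_row (joint_proj n A) = 4^n" "dim_col (joint_proj n A) = 4^n"
  using joint_proj_carrier[of n A] by (auto simp del: joint_proj_carrier)

lemma joint_proj_herm: "dag (joint_proj n A) = joint_proj n A"
  unfolding joint_proj_def by (rule mat_prod_list_hermitian) (auto simp: Lambda_term_proj_herm Lambda_term_proj_commute)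

lemma Lambda_term_mult_joint_proj: assumes "p \<in> {1..2*n}"
  shows "Lambda_term n p * joint_proj n A = bsign (A ! (p - 1)) \<cdot>\<^sub>m joint_proj n A"
  unfolding joint_proj_def
proof (rule mat_prod_list_eigen_factor[where ?p0.0 = p])
  show "Lambda_term n p * Lambda_term_proj n (A ! (p - 1)) p = bsign (A ! (p - 1)) \<cdot>\<^sub>m Lambda_term_proj n (A ! (p - 1)) p"
    by (rule Lambda_term_mult_Lambda_term_proj[OF assms])
  fix q assume "q \<in> set [1..<2*n+1]"
  then have "q \<in> {1..2*n}" by auto
  then show "Lambda_term n p * Lambda_term_proj n (A ! (q - 1)) q = Lambda_term_proj n (A ! (q - 1)) q * Lambda_term n p"
    by (rule Lambda_term_commute_Lambda_term_proj[OF _ assms])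
qed (use assms in auto)

lemma cmon_pair_mult_joint_proj: assumes "x \<in> bitstrings n"
  shows "cmon_pair n x * joint_proj n A = character n A x \<cdot>\<^sub>m joint_proj n A"
proof -
  have "cmon_pair n x * joint_proj n A = prod_list (map (\<lambda>p. if x ! (p - 1) then bsign (A ! (p - 1)) else 1) [1..<2*n+1]) \<cdot>\<^sub>m joint_proj n A"
    unfolding cmon_pair_mat_prod_list[OF assms]
  proof (rule mat_prod_list_eigen)
    fix p assume "p \<in> set [1..<2*n+1]"
    then have p: "p \<in> {1..2*n}" by auto
    show "(if x ! (p - 1) then Lambda_term n p else 1\<^sub>m (4 ^ n)) * joint_proj n A = (if x ! (p - 1) then bsign (A ! (p - 1)) else 1) \<cdot>\<^sub>m joint_proj n A"
      using Lambda_term_mult_joint_proj[OF p] by auto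
  qed auto
  then show ?thesis unfolding prod_list_upt_eq_prod character_def .
qed

lemma joint_proj_mult_cmon_pair: assumes "x \<in> bitstrings n"
  shows "joint_proj n A * cmon_pair n x = character n A x \<cdot>\<^sub>m joint_proj n A"
proof -
  have "joint_proj n A * cmon_pair n x = dag (cmon_pair n x * joint_proj n A)"
    by (simp add: dag_mult[OF cmon_pair_carrier joint_proj_carrier] joint_proj_herm cmon_pair_herm[OF assms])
  also have "\<dots> = character n A x \<cdot>\<^sub>m joint_proj n A" unfolding cmon_pair_mult_joint_proj[OF assms] by (simp add: dag_smult joint_proj_herm)
  finally show ?thesis .
qed

lemma Lambda_term_proj_mult_joint_proj: assumes "p \<in> {1..2*n}"
  shows "Lambda_term_proj n a p * joint_proj n B = ((1 + bsign a * bsign (B ! (p - 1))) / 2) \<cdot>\<^sub>m joint_proj n B"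
proof -
  have "Lambda_term_proj n a p * joint_proj n B = (1/2) \<cdot>\<^sub>m (joint_proj n B + bsign a \<cdot>\<^sub>m (Lambda_term n p * joint_proj n B))"
    unfolding Lambda_term_proj_def by (simp add: mat_dim_simps)
  also have "\<dots> = ((1 + bsign a * bsign (B ! (p - 1))) / 2) \<cdot>\<^sub>m joint_proj n B"
    unfolding Lambda_term_mult_joint_proj[OF assms] by (rule eq_matI) (auto simp: algebra_simps)
  finally show ?thesis .
qed

lemma prod_bsign_agreement: assumes A: "A \<in> bitstrings n" and B: "B \<in> bitstrings n"
  shows "(\<Prod>p\<in>{1..2*n}. 1 + bsign (A ! (p - 1)) * bsign (B ! (p - 1))) = (if A = B then 2^(2*n) else 0)"
proof (cases "A = B")
  case True
  have "(\<Prod>p\<in>{1..2*n}. 1 + bsign (A ! (p - 1)) * bsign (B ! (p - 1))) = (\<Prod>p\<in>{1..2*n}. (2::complex))"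
    using True by (intro prod.cong) (auto simp: bsign_def)
  then show ?thesis using True by simp
next
  case False
  have "\<exists>i<2*n. A ! i \<noteq> B ! i"
  proof (rule ccontr)
    assume "\<not> ?thesis"
    then have "A = B" using A B unfolding bitstrings_def by (intro nth_equalityI) auto
    then show False using False by simp
  qed
  then obtain i where i: "i < 2*n" "A ! i \<noteq> B ! i" by blast
  have "Suc i \<in> {1..2*n}" "1 + bsign (A ! (Suc i - 1)) * bsign (B ! (Suc i - 1)) = 0"
    using i by (auto simp: bsign_def)
  then have "\<exists>p\<in>{1..2*n}. 1 + bsign (A ! (p - 1)) * bsign (B ! (p - 1)) = 0" by blast
  then have "(\<Prod>p\<in>{1..2*n}. 1 + bsign (A ! (p - 1)) * bsign (B ! (p - 1))) = 0"
    by (rule prod_zero[rotated]) simp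
  then show ?thesis using False by simp
qed

lemma joint_proj_mult: assumes A: "A \<in> bitstrings n" and B: "B \<in> bitstrings n"
  shows "joint_proj n A * joint_proj n B = (if A = B then joint_proj n A else 0\<^sub>m (4^n) (4^n))"
proof -
  let ?c = "\<lambda>p. (1 + bsign (A ! (p - 1)) * bsign (B ! (p - 1))) / 2"
  have "joint_proj n A * joint_proj n B = prod_list (map ?c [1..<2*n+1]) \<cdot>\<^sub>m joint_proj n B"
    unfolding joint_proj_def[of n A]
  proof (rule mat_prod_list_eigen)
    fix p assume "p \<in> set [1..<2*n+1]"
    then have p: "p \<in> {1..2*n}" by auto
    show "Lambda_term_proj n (A ! (p - 1)) p * joint_proj n B = ?c p \<cdot>\<^sub>m joint_proj n B"
      by (rule Lambda_term_proj_mult_joint_proj[OF p])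
  qed auto
  also have "prod_list (map ?c [1..<2*n+1]) = (if A = B then 1 else 0)"
    unfolding prod_list_upt_eq_prod prod_dividef prod_bsign_agreement[OF A B] by simp
  finally show ?thesis by auto
qed

lemma joint_proj_herm_idempotent: "A \<in> bitstrings n \<Longrightarrow> herm_idempotent (4^n) (joint_proj n A)"
  by unfold_locales (auto simp: joint_proj_herm joint_proj_mult)

lemma Lambda_term_proj_sum: "Lambda_term_proj n False p + Lambda_term_proj n True p = 1\<^sub>m (4^n)"
  unfolding Lambda_term_proj_def by (rule eq_matI) (auto simp: bsign_def field_simps)

lemma joint_proj_sum: "msum (4^n) (bitstrings n) (joint_proj n) = 1\<^sub>m (4^n)"
proof -
  have "mat_prod_list (4^n) (\<lambda>p. Lambda_term_proj n False p + Lambda_term_proj n True p) [1..<2*n+1] = msum (4^n) (bool_lists (2*n)) (\<lambda>x. mat_prod_list (4^n) (\<lambda>p. if x ! (p - 1) then Lambda_term_proj n True p else Lambda_term_proj n False p) [1..<2*n+1])"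
    by (rule mat_prod_list_add_expand) auto
  also have "\<dots> = msum (4^n) (bitstrings n) (joint_proj n)"
    unfolding bitstrings_eq_bool_lists[symmetric] joint_proj_def by (rule msum_cong, rule mat_prod_list_cong) auto
  finally show ?thesis unfolding Lambda_term_proj_sum mat_prod_list_one by simp
qed

lemma Lambda_term_proj_split: "Lambda_term_proj n b p = (1/2) \<cdot>\<^sub>m 1\<^sub>m (4^n) + (bsign b / 2) \<cdot>\<^sub>m Lambda_term n p"
  unfolding Lambda_term_proj_def by (rule eq_matI) auto

lemma joint_proj_expansion: assumes "A \<in> bitstrings n"
  shows "joint_proj n A = msum (4^n) (bitstrings n) (\<lambda>x. (character n A x / 2^(2*n)) \<cdot>\<^sub>m cmon_pair n x)"
proof -
  have "joint_proj n A = mat_prod_list (4^n) (\<lambda>p. (1/2) \<cdot>\<^sub>m 1\<^sub>m (4^n) + (bsign (A ! (p - 1)) / 2) \<cdot>\<^sub>m Lambda_term n p) [1..<2*n+1]"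
    unfolding joint_proj_def Lambda_term_proj_split ..
  also have "\<dots> = msum (4^n) (bool_lists (2*n)) (\<lambda>x. mat_prod_list (4^n) (\<lambda>p. if x ! (p - 1) then (bsign (A ! (p - 1)) / 2) \<cdot>\<^sub>m Lambda_term n p else (1/2) \<cdot>\<^sub>m 1\<^sub>m (4^n)) [1..<2*n+1])"
    by (rule mat_prod_list_add_expand) auto
  also have "\<dots> = msum (4^n) (bitstrings n) (\<lambda>x. (character n A x / 2^(2*n)) \<cdot>\<^sub>m cmon_pair n x)"
    unfolding bitstrings_eq_bool_lists[symmetric]
  proof (rule msum_cong)
    fix x assume x: "x \<in> bitstrings n"
    let ?c = "\<lambda>p. if x ! (p - 1) then bsign (A ! (p - 1)) / 2 else 1/2"
    have "mat_prod_list (4^n) (\<lambda>p. if x ! (p - 1) then (bsign (A ! (p - 1)) / 2) \<cdot>\<^sub>m Lambda_term n p else (1/2) \<cdot>\<^sub>m 1\<^sub>m (4^n)) [1..<2*n+1]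
       = mat_prod_list (4^n) (\<lambda>p. ?c p \<cdot>\<^sub>m (if x ! (p - 1) then Lambda_term n p else 1\<^sub>m (4^n))) [1..<2*n+1]"
      by (rule mat_prod_list_cong) auto
    also have "\<dots> = prod_list (map ?c [1..<2*n+1]) \<cdot>\<^sub>m cmon_pair n x"
      unfolding cmon_pair_mat_prod_list[OF x] by (rule mat_prod_list_smult) auto
    also have "prod_list (map ?c [1..<2*n+1]) = character n A x / 2^(2*n)"
    proof -
      have "prod_list (map ?c [1..<2*n+1]) = (\<Prod>p\<in>{1..2*n}. (if x ! (p - 1) then bsign (A ! (p - 1)) else 1) / 2)"
        unfolding prod_list_upt_eq_prod by (rule prod.cong) auto
      also have "\<dots> = character n A x / 2^(2*n)"
        unfolding character_def prod_dividef by simp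
      finally show ?thesis .
    qed
    finally show "mat_prod_list (4^n) (\<lambda>p. if x ! (p - 1) then (bsign (A ! (p - 1)) / 2) \<cdot>\<^sub>m Lambda_term n p else (1/2) \<cdot>\<^sub>m 1\<^sub>m (4^n)) [1..<2*n+1]
       = (character n A x / 2^(2*n)) \<cdot>\<^sub>m cmon_pair n x" .
  qed
  finally show ?thesis .
qed

lemma mtrace_joint_proj: assumes "A \<in> bitstrings n" shows "mtrace (joint_proj n A) = 1"
proof -
  let ?z = "replicate (2*n) False"
  have z: "?z \<in> bitstrings n" unfolding bitstrings_def by simp
  have "mtrace (joint_proj n A) = (\<Sum>x\<in>bitstrings n. mtrace ((character n A x / 2^(2*n)) \<cdot>\<^sub>m cmon_pair n x))"
    unfolding joint_proj_expansion[OF assms] by (rule mtrace_msum) auto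
  also have "\<dots> = (\<Sum>x\<in>bitstrings n. if x = ?z then character n A x / 2^(2*n) * of_nat (4^n) else 0)"
  proof (rule sum.cong[OF refl])
    fix x assume x: "x \<in> bitstrings n"
    have "(True \<in> set x) = (x \<noteq> ?z)"
      using x unfolding bitstrings_def by (auto simp: replicate_length_same[symmetric] in_set_conv_nth)
        (metis (full_types) in_set_conv_nth nth_equalityI length_replicate nth_replicate)
    then show "mtrace ((character n A x / 2^(2*n)) \<cdot>\<^sub>m cmon_pair n x) = (if x = ?z then character n A x / 2^(2*n) * of_nat (4^n) else 0)"
      using mtrace_cmon_pair[OF x] by (auto simp: mtrace_smult[OF cmon_pair_carrier])
  qed
  also have "\<dots> = character n A ?z / 2^(2*n) * of_nat (4^n)"
    using z by (subst sum.delta) (auto simp: bitstrings_eq_bool_lists)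
  also have "character n A ?z = 1" unfolding character_def by (auto intro!: prod.neutral)
  also have "(of_nat (4^n) :: complex) = 2^(2*n)" by (simp add: power_mult)
  finally show ?thesis by simp
qed

lemma character_orthogonality: assumes A: "A \<in> bitstrings n" and B: "B \<in> bitstrings n"
  shows "(\<Sum>x\<in>bitstrings n. character n A x * character n B x) = (if A = B then 2^(2*n) else 0)"
proof -
  have "(\<Sum>x\<in>bitstrings n. character n A x * character n B x) =
     (\<Sum>x\<in>bool_lists (2*n). \<Prod>p\<in>{1..2*n}. if x ! (p - 1) then bsign (A ! (p - 1)) * bsign (B ! (p - 1)) else 1)"
    unfolding bitstrings_eq_bool_lists character_def prod.distrib[symmetric]
    by (intro sum.cong refl prod.cong) auto
  also have "\<dots> = (\<Prod>p\<in>{1..2*n}. 1 + bsign (A ! (p - 1)) * bsign (B ! (p - 1)))"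
    by (rule sum_bool_lists_prod)
  finally show ?thesis unfolding prod_bsign_agreement[OF A B] .
qed

definition Lambda_eigval :: "nat \<Rightarrow> bool list \<Rightarrow> complex" where
  "Lambda_eigval n A = (\<Sum>p\<in>{1..2*n}. bsign (A ! (p - 1)))"

lemma cnj_Lambda_eigval[simp]: "cnj (Lambda_eigval n A) = Lambda_eigval n A"
  unfolding Lambda_eigval_def by (auto intro!: sum.cong)

lemma Lambda_eq_msum_Lambda_term: "Lambda n = msum (4^n) {1..2*n} (Lambda_term n)"
  unfolding Lambda_def Lambda_term_def ..

lemma Lambda_carrier[simp]: "Lambda n \<in> carrier_mat (4^n) (4^n)"
  unfolding Lambda_eq_msum_Lambda_term by simp

lemma Lambda_dims[simp]: "dim_row (Lambda n) = 4^n" "dim_col (Lambda n) = 4^n"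
  unfolding Lambda_eq_msum_Lambda_term by simp_all

lemma Lambda_herm: "dag (Lambda n) = Lambda n"
  unfolding Lambda_eq_msum_Lambda_term by (subst msum_dag) (auto intro!: msum_cong simp: Lambda_term_herm)

lemma Lambda_mult_joint_proj: "Lambda n * joint_proj n A = Lambda_eigval n A \<cdot>\<^sub>m joint_proj n A"
proof -
  have "Lambda n * joint_proj n A = msum (4^n) {1..2*n} (\<lambda>p. Lambda_term n p * joint_proj n A)"
    unfolding Lambda_eq_msum_Lambda_term by (rule msum_mult_right) auto
  also have "\<dots> = msum (4^n) {1..2*n} (\<lambda>p. bsign (A ! (p - 1)) \<cdot>\<^sub>m joint_proj n A)"
    by (rule msum_cong) (simp add: Lambda_term_mult_joint_proj)
  also have "\<dots> = Lambda_eigval n A \<cdot>\<^sub>m joint_proj n A" unfolding Lambda_eigval_def by (rule msum_smult_const) simp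
  finally show ?thesis .
qed

lemma joint_proj_mult_Lambda: "joint_proj n A * Lambda n = Lambda_eigval n A \<cdot>\<^sub>m joint_proj n A"
proof -
  have "joint_proj n A * Lambda n = dag (Lambda n * joint_proj n A)"
    by (simp add: dag_mult[OF Lambda_carrier joint_proj_carrier] joint_proj_herm Lambda_herm)
  also have "\<dots> = Lambda_eigval n A \<cdot>\<^sub>m joint_proj n A" unfolding Lambda_mult_joint_proj by (simp add: dag_smult joint_proj_herm)
  finally show ?thesis .
qed

lemma Lambda_eigval_eq_0_iff: assumes A: "A \<in> bitstrings n" shows "Lambda_eigval n A = 0 \<longleftrightarrow> hw A = n"
proof -
  have "Lambda_eigval n A = (\<Sum>p\<in>{1..2*n} \<inter> {p. A ! (p - 1)}. 1) + (\<Sum>p\<in>{1..2*n} \<inter> - {p. A ! (p - 1)}. -1)"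
    unfolding Lambda_eigval_def bsign_def by (rule sum.If_cases) simp
  also have "{1..2*n} \<inter> {p. A ! (p - 1)} = {p\<in>{1..2*n}. A ! (p - 1)}" by auto
  also have "{1..2*n} \<inter> - {p. A ! (p - 1)} = {p\<in>{1..2*n}. \<not> A ! (p - 1)}" by auto
  finally have "Lambda_eigval n A = of_nat (hw A) - of_nat (2*n - hw A)"
    unfolding card_false_positions[OF A, symmetric] unfolding card_true_positions[OF A, symmetric] by simp
  then show ?thesis using hw_le[OF A] by (auto simp: of_nat_diff)
qed

section \<open>The projector onto the kernel of Lambda\<close>

definition balanced :: "nat \<Rightarrow> bool list set" where "balanced n = {A \<in> bitstrings n. hw A = n}"

definition Kproj :: "nat \<Rightarrow> complex mat" where "Kproj n = msum (4^n) (balanced n) (joint_proj n)"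

lemma finite_balanced[simp]: "finite (balanced n)" unfolding balanced_def by simp

lemma balanced_subset: "balanced n \<subseteq> bitstrings n" unfolding balanced_def by auto

lemma balanced_bitstrings: "A \<in> balanced n \<Longrightarrow> A \<in> bitstrings n" using balanced_subset by auto

lemma Kproj_carrier[simp]: "Kproj n \<in> carrier_mat (4^n) (4^n)" unfolding Kproj_def by simp

lemma Kproj_dims[simp]: "dim_row (Kproj n) = 4^n" "dim_col (Kproj n) = 4^n" unfolding Kproj_def by simp_all

lemma Lambda_eigval_nonzero: "A \<in> bitstrings n \<Longrightarrow> A \<notin> balanced n \<Longrightarrow> Lambda_eigval n A \<noteq> 0"
  unfolding balanced_def using Lambda_eigval_eq_0_iff by auto

lemma Lambda_eigval_balanced: "A \<in> balanced n \<Longrightarrow> Lambda_eigval n A = 0"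
  unfolding balanced_def using Lambda_eigval_eq_0_iff by auto

lemma joint_proj_mult_Lambda_kernel: assumes A: "A \<in> bitstrings n" "A \<notin> balanced n" and Y: "Y \<in> carrier_mat (4^n) (4^n)"
  and LY: "Lambda n * Y = 0\<^sub>m (4^n) (4^n)"
  shows "joint_proj n A * Y = 0\<^sub>m (4^n) (4^n)"
proof -
  have Lambda_eigval: "Lambda_eigval n A \<noteq> 0" by (rule Lambda_eigval_nonzero[OF A])
  have "Lambda_eigval n A \<cdot>\<^sub>m (joint_proj n A * Y) = (joint_proj n A * Lambda n) * Y"
    unfolding joint_proj_mult_Lambda using Y by (simp add: mat_dim_simps)
  also have "\<dots> = joint_proj n A * (Lambda n * Y)" using Y by (simp add: mat_dim_simps)
  also have "\<dots> = 0\<^sub>m (4^n) (4^n)" unfolding LY using Y by simp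
  finally have "Lambda_eigval n A \<cdot>\<^sub>m (joint_proj n A * Y) = 0\<^sub>m (4^n) (4^n)" .
  then have "(1 / Lambda_eigval n A) \<cdot>\<^sub>m (Lambda_eigval n A \<cdot>\<^sub>m (joint_proj n A * Y)) = 0\<^sub>m (4^n) (4^n)" by simp
  then show ?thesis using Lambda_eigval by (simp add: smult_smult)
qed

lemma Kproj_mult_Lambda_kernel: assumes Y: "Y \<in> carrier_mat (4^n) (4^n)" and LY: "Lambda n * Y = 0\<^sub>m (4^n) (4^n)"
  shows "Kproj n * Y = Y"
proof -
  have "Y = msum (4^n) (bitstrings n) (joint_proj n) * Y" unfolding joint_proj_sum using Y by simp
  also have "\<dots> = msum (4^n) (bitstrings n) (\<lambda>A. joint_proj n A * Y)" by (rule msum_mult_right[OF Y]) simp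
  also have "\<dots> = msum (4^n) (balanced n) (\<lambda>A. joint_proj n A * Y)"
    by (rule msum_subset[OF balanced_subset]) (use joint_proj_mult_Lambda_kernel[OF _ _ Y LY] in auto)
  also have "\<dots> = Kproj n * Y" unfolding Kproj_def by (rule msum_mult_right[OF Y, symmetric]) simp
  finally show ?thesis by simp
qed

lemma Lambda_mult_Kproj: "Lambda n * Kproj n = 0\<^sub>m (4^n) (4^n)"
proof -
  have "Lambda n * Kproj n = msum (4^n) (balanced n) (\<lambda>A. Lambda n * joint_proj n A)"
    unfolding Kproj_def by (rule msum_mult_left) auto
  also have "\<dots> = 0\<^sub>m (4^n) (4^n)"
    by (rule msum_zero) (simp add: Lambda_mult_joint_proj Lambda_eigval_balanced)
  finally show ?thesis .
qed

lemma Kproj_herm: "dag (Kproj n) = Kproj n"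
  unfolding Kproj_def by (subst msum_dag) (auto simp: joint_proj_herm)

lemma Kproj_idem: "Kproj n * Kproj n = Kproj n"
  by (rule Kproj_mult_Lambda_kernel[OF Kproj_carrier Lambda_mult_Kproj])

lemma mtrace_Kproj: "mtrace (Kproj n) = of_nat (card (balanced n))"
proof -
  have "mtrace (Kproj n) = (\<Sum>A\<in>balanced n. mtrace (joint_proj n A))" unfolding Kproj_def by (rule mtrace_msum) auto
  also have "\<dots> = (\<Sum>A\<in>balanced n. 1)" by (rule sum.cong) (use balanced_subset mtrace_joint_proj in auto)
  finally show ?thesis by simp
qed

lemma joint_proj_mult_Kproj: assumes A: "A \<in> balanced n" shows "joint_proj n A * Kproj n = joint_proj n A"
proof -
  have "joint_proj n A * Kproj n = msum (4^n) (balanced n) (\<lambda>B. joint_proj n A * joint_proj n B)"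
    unfolding Kproj_def by (rule msum_mult_left) auto
  also have "\<dots> = joint_proj n A * joint_proj n A"
    by (rule msum_delta) (use A balanced_bitstrings in \<open>auto simp: joint_proj_mult\<close>)
  also have "\<dots> = joint_proj n A" using A balanced_bitstrings by (auto simp: joint_proj_mult)
  finally show ?thesis .
qed

lemma Lambda_mult_range_Kspace: assumes X: "X \<in> carrier_mat (4^n) (4^n)"
  and K: "\<forall>v\<in>carrier_vec (4^n). X *\<^sub>v v \<in> Kspace n"
  shows "Lambda n * X = 0\<^sub>m (4^n) (4^n)"
proof (rule eq_matI)
  fix i j assume "i < dim_row (0\<^sub>m (4^n) (4^n) :: complex mat)" "j < dim_col (0\<^sub>m (4^n) (4^n) :: complex mat)"
  then have ij: "i < 4^n" "j < 4^n" by auto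
  have "X *\<^sub>v unit_vec (4^n) j \<in> mat_kernel (Lambda n)" using K unfolding Kspace_def by auto
  then have "Lambda n *\<^sub>v col X j = 0\<^sub>v (4^n)"
    unfolding mult_mat_unit_vec[OF X ij(2)] mat_kernel_def by simp
  moreover have "col (Lambda n * X) j = Lambda n *\<^sub>v col X j"
    by (rule col_mult2[OF Lambda_carrier X ij(2)])
  ultimately have "col (Lambda n * X) j $ i = 0" using ij by simp
  then show "(Lambda n * X) $$ (i,j) = 0\<^sub>m (4^n) (4^n) $$ (i,j)" using ij X by simp
qed (use X in auto)

lemma Kproj_fixes_kernel: assumes v: "v \<in> mat_kernel (Lambda n)"
  shows "Kproj n *\<^sub>v v = v"
proof -
  let ?N = "4^n"
  have vc: "v \<in> carrier_vec ?N" and Lv: "Lambda n *\<^sub>v v = 0\<^sub>v ?N"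
    using v unfolding mat_kernel_def by auto
  define Y where "Y = mat ?N ?N (\<lambda>(i,j). v $ i)"
  have Y: "Y \<in> carrier_mat ?N ?N" unfolding Y_def by simp
  have colY: "col Y j = v" if "j < ?N" for j
    using that vc unfolding Y_def by (intro eq_vecI) auto
  have LY: "Lambda n * Y = 0\<^sub>m ?N ?N"
  proof (rule eq_matI)
    fix i j assume "i < dim_row (0\<^sub>m ?N ?N :: complex mat)" "j < dim_col (0\<^sub>m ?N ?N :: complex mat)"
    then have ij: "i < ?N" "j < ?N" by auto
    have "col (Lambda n * Y) j = Lambda n *\<^sub>v col Y j" by (rule col_mult2[OF Lambda_carrier Y ij(2)])
    then have "col (Lambda n * Y) j = 0\<^sub>v ?N" unfolding colY[OF ij(2)] Lv .
    then have "col (Lambda n * Y) j $ i = 0" using ij by simp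
    then show "(Lambda n * Y) $$ (i,j) = 0\<^sub>m ?N ?N $$ (i,j)" using ij Y by simp
  qed (use Y in auto)
  have PY: "Kproj n * Y = Y" by (rule Kproj_mult_Lambda_kernel[OF Y LY])
  have pos: "0 < (4::nat)^n" by simp
  have "col (Kproj n * Y) 0 = Kproj n *\<^sub>v col Y 0" by (rule col_mult2[OF Kproj_carrier Y pos])
  then show ?thesis unfolding PY colY[OF pos] by simp
qed

lemma Kproj_image: "(\<lambda>v. Kproj n *\<^sub>v v) ` carrier_vec (4^n) = Kspace n"
proof
  show "(\<lambda>v. Kproj n *\<^sub>v v) ` carrier_vec (4^n) \<subseteq> Kspace n"
  proof
    fix w assume "w \<in> (\<lambda>v. Kproj n *\<^sub>v v) ` carrier_vec (4^n)"
    then obtain v where v: "v \<in> carrier_vec (4^n)" and w: "w = Kproj n *\<^sub>v v" by auto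
    have "Lambda n *\<^sub>v w = (Lambda n * Kproj n) *\<^sub>v v" unfolding w by (rule assoc_mult_mat_vec[OF Lambda_carrier Kproj_carrier v, symmetric])
    also have "\<dots> = 0\<^sub>v (4^n)" unfolding Lambda_mult_Kproj using v by (intro eq_vecI) (auto simp: scalar_prod_def)
    moreover have "w \<in> carrier_vec (4^n)" unfolding w using mult_mat_vec_carrier[OF Kproj_carrier v] .
    ultimately show "w \<in> Kspace n" unfolding Kspace_def mat_kernel_def by simp
  qed
  show "Kspace n \<subseteq> (\<lambda>v. Kproj n *\<^sub>v v) ` carrier_vec (4^n)"
  proof
    fix v assume v: "v \<in> Kspace n"
    then have "v \<in> carrier_vec (4^n)" unfolding Kspace_def mat_kernel_def by simp
    moreover have "v = Kproj n *\<^sub>v v" using Kproj_fixes_kernel v unfolding Kspace_def by simp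
    ultimately show "v \<in> (\<lambda>v. Kproj n *\<^sub>v v) ` carrier_vec (4^n)" by blast
  qed
qed

lemma Kproj_is_orth_proj: "is_orth_proj (4^n) (Kproj n) (Kspace n)"
  unfolding is_orth_proj_def using Kproj_herm Kproj_idem Kproj_image by simp

lemma orth_proj_Kspace: "orth_proj (4^n) (Kspace n) = Kproj n"
  unfolding orth_proj_def
proof (rule the_equality)
  show "is_orth_proj (4^n) (Kproj n) (Kspace n)" by (rule Kproj_is_orth_proj)
  fix P assume "is_orth_proj (4^n) P (Kspace n)"
  then show "P = Kproj n" by (rule is_orth_proj_unique[OF _ Kproj_is_orth_proj])
qed

lemma joint_proj_range_vec: assumes A: "A \<in> bitstrings n"
  shows "\<exists>u. u \<in> carrier_vec (4^n) \<and> u \<noteq> 0\<^sub>v (4^n) \<and> joint_proj n A *\<^sub>v u = u \<and>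
    (\<forall>v\<in>carrier_vec (4^n). \<exists>c. joint_proj n A *\<^sub>v v = c \<cdot>\<^sub>v u)"
proof -
  interpret herm_idempotent "4^n" "joint_proj n A" by (rule joint_proj_herm_idempotent[OF A])
  obtain u where "u \<in> carrier_vec (4^n)" "u \<noteq> 0\<^sub>v (4^n)" "joint_proj n A *\<^sub>v u = u"
    "\<And>v. v \<in> carrier_vec (4^n) \<Longrightarrow> \<exists>c. joint_proj n A *\<^sub>v v = c \<cdot>\<^sub>v u"
    using trace_one_range_vec[OF mtrace_joint_proj[OF A]] by blast
  then show ?thesis by blast
qed

lemma Lambda_mult_vec_joint_proj: assumes A: "A \<in> balanced n" and u: "u \<in> carrier_vec (4^n)"
  shows "Lambda n *\<^sub>v (joint_proj n A *\<^sub>v u) = 0\<^sub>v (4^n)"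
proof -
  have "Lambda n *\<^sub>v (joint_proj n A *\<^sub>v u) = (Lambda n * joint_proj n A) *\<^sub>v u"
    by (rule assoc_mult_mat_vec[symmetric, OF Lambda_carrier joint_proj_carrier u])
  also have "\<dots> = 0\<^sub>v (4^n)"
    unfolding Lambda_mult_joint_proj Lambda_eigval_balanced[OF A] using u
    by (auto intro!: eq_vecI simp: scalar_prod_def)
  finally show ?thesis .
qed

lemma kernel_dim_Lambda: "kernel_dim (Lambda n) = card (balanced n)"
proof -
  have "\<forall>A\<in>balanced n. \<exists>u. u \<in> carrier_vec (4^n) \<and> u \<noteq> 0\<^sub>v (4^n) \<and> joint_proj n A *\<^sub>v u = u \<and>
      (\<forall>v\<in>carrier_vec (4^n). \<exists>c. joint_proj n A *\<^sub>v v = c \<cdot>\<^sub>v u)"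
    using joint_proj_range_vec balanced_bitstrings by blast
  then obtain u where u: "\<And>A. A \<in> balanced n \<Longrightarrow> u A \<in> carrier_vec (4^n) \<and> u A \<noteq> 0\<^sub>v (4^n) \<and>
      joint_proj n A *\<^sub>v u A = u A \<and> (\<forall>v\<in>carrier_vec (4^n). \<exists>c. joint_proj n A *\<^sub>v v = c \<cdot>\<^sub>v u A)"
    using bchoice[of "balanced n"] by metis
  have uc: "u A \<in> carrier_vec (4^n)" and u0: "u A \<noteq> 0\<^sub>v (4^n)" and Pu: "joint_proj n A *\<^sub>v u A = u A"
    and range: "\<And>v. v \<in> carrier_vec (4^n) \<Longrightarrow> \<exists>c. joint_proj n A *\<^sub>v v = c \<cdot>\<^sub>v u A"
    if "A \<in> balanced n" for A using u[OF that] by blast+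
  have kernel: "u A \<in> mat_kernel (Lambda n)" if A: "A \<in> balanced n" for A
    using Lambda_mult_vec_joint_proj[OF A uc[OF A]] uc[OF A] unfolding Pu[OF A] mat_kernel_def by simp
  have resolution: "msum (4^n) (balanced n) (joint_proj n) *\<^sub>v v = v" if "v \<in> mat_kernel (Lambda n)" for v
    using Kproj_fixes_kernel[OF that] unfolding Kproj_def .
  interpret rank_one_kernel_basis "4^n" "balanced n" "joint_proj n" u "Lambda n"
    by unfold_locales (simp_all add: joint_proj_mult balanced_bitstrings uc u0 Pu range kernel resolution)
  show ?thesis by (rule kernel_dim_eq_card)
qed

section \<open>The twirl over Majorana monomials\<close>

definition twirl :: "nat \<Rightarrow> complex mat \<Rightarrow> complex mat" where
  "twirl n X = (1 / 2 ^ (2 * n)) \<cdot>\<^sub>m msum (4^n) (bitstrings n) (\<lambda>x. cmon_pair n x * X * dag (cmon_pair n x))"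

lemma cmon_pair_conj_sandwich: assumes x: "x \<in> bitstrings n" and X: "X \<in> carrier_mat (4^n) (4^n)"
  shows "cmon_pair n x * (joint_proj n A * X * joint_proj n B) * dag (cmon_pair n x) = (character n A x * character n B x) \<cdot>\<^sub>m (joint_proj n A * X * joint_proj n B)"
proof -
  have d: "dim_row X = 4^n" "dim_col X = 4^n" using X by auto
  have "cmon_pair n x * (joint_proj n A * X * joint_proj n B) * dag (cmon_pair n x) = (cmon_pair n x * joint_proj n A) * X * (joint_proj n B * cmon_pair n x)"
    unfolding cmon_pair_herm[OF x] using d by (simp add: dim_mult_assoc)
  also have "\<dots> = (character n A x * character n B x) \<cdot>\<^sub>m (joint_proj n A * X * joint_proj n B)"
    unfolding cmon_pair_mult_joint_proj[OF x] joint_proj_mult_cmon_pair[OF x] using d by (simp add: mat_dim_simps mult.commute)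
  finally show ?thesis .
qed

lemma joint_proj_double_resolution: assumes X: "X \<in> carrier_mat (4^n) (4^n)"
  shows "X = msum (4^n) (bitstrings n) (\<lambda>A. msum (4^n) (bitstrings n) (\<lambda>B. joint_proj n A * X * joint_proj n B))"
proof -
  let ?N = "4^n" and ?B = "bitstrings n"
  have "X = msum ?N ?B (joint_proj n) * X * msum ?N ?B (joint_proj n)" unfolding joint_proj_sum using X by simp
  also have "\<dots> = msum ?N ?B (\<lambda>A. joint_proj n A * X) * msum ?N ?B (joint_proj n)"
    by (subst msum_mult_right[OF X]) auto
  also have "\<dots> = msum ?N ?B (\<lambda>A. joint_proj n A * X * msum ?N ?B (joint_proj n))"
    by (rule msum_mult_right) (use X in auto)
  also have "\<dots> = msum ?N ?B (\<lambda>A. msum ?N ?B (\<lambda>B. joint_proj n A * X * joint_proj n B))"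
    by (rule msum_cong, rule msum_mult_left) (use X in auto)
  finally show ?thesis .
qed

lemma cmon_pair_conj_expansion: assumes x: "x \<in> bitstrings n" and X: "X \<in> carrier_mat (4^n) (4^n)"
  shows "cmon_pair n x * X * dag (cmon_pair n x) = msum (4^n) (bitstrings n) (\<lambda>A. msum (4^n) (bitstrings n)
    (\<lambda>B. (character n A x * character n B x) \<cdot>\<^sub>m (joint_proj n A * X * joint_proj n B)))"
proof -
  let ?N = "4^n" and ?B = "bitstrings n" and ?W = "cmon_pair n x"
  let ?M = "\<lambda>A B. joint_proj n A * X * joint_proj n B"
  have cM: "?M A B \<in> carrier_mat ?N ?N" for A B using X by auto
  have "?W * X * dag ?W = ?W * msum ?N ?B (\<lambda>A. msum ?N ?B (?M A)) * dag ?W"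
    using joint_proj_double_resolution[OF X] by simp
  also have "\<dots> = msum ?N ?B (\<lambda>A. ?W * msum ?N ?B (?M A) * dag ?W)"
    by (rule msum_conj) auto
  also have "\<dots> = msum ?N ?B (\<lambda>A. msum ?N ?B (\<lambda>B. ?W * ?M A B * dag ?W))"
    by (rule msum_cong, rule msum_conj) (use cM in auto)
  also have "\<dots> = msum ?N ?B (\<lambda>A. msum ?N ?B (\<lambda>B. (character n A x * character n B x) \<cdot>\<^sub>m ?M A B))"
    by (rule msum_cong, rule msum_cong, rule cmon_pair_conj_sandwich[OF x X])
  finally show ?thesis .
qed

text \<open>Characters of distinct joint eigenprojections are orthogonal, so averaging the conjugations
  by all c(x) \<otimes> c(x) removes the off-diagonal blocks.\<close>

lemma twirl_eq_pinching: assumes X: "X \<in> carrier_mat (4^n) (4^n)"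
  shows "twirl n X = msum (4^n) (bitstrings n) (\<lambda>A. joint_proj n A * X * joint_proj n A)"
proof -
  let ?N = "4^n" and ?B = "bitstrings n"
  let ?M = "\<lambda>A B. joint_proj n A * X * joint_proj n B"
  have cM: "?M A B \<in> carrier_mat ?N ?N" for A B using X by auto
  have "msum ?N ?B (\<lambda>x. cmon_pair n x * X * dag (cmon_pair n x))
      = msum ?N ?B (\<lambda>x. msum ?N ?B (\<lambda>A. msum ?N ?B (\<lambda>B. (character n A x * character n B x) \<cdot>\<^sub>m ?M A B)))"
    by (rule msum_cong) (rule cmon_pair_conj_expansion[OF _ X])
  also have "\<dots> = msum ?N ?B (\<lambda>A. msum ?N ?B (\<lambda>B. (\<Sum>x\<in>?B. character n A x * character n B x) \<cdot>\<^sub>m ?M A B))"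
    by (rule msum_collect_outer[OF cM])
  also have "\<dots> = msum ?N ?B (\<lambda>A. msum ?N ?B (\<lambda>B. (if A = B then 2^(2*n) else 0) \<cdot>\<^sub>m ?M A B))"
    by (rule msum_cong, rule msum_cong) (simp add: character_orthogonality)
  also have "\<dots> = msum ?N ?B (\<lambda>A. 2^(2*n) \<cdot>\<^sub>m ?M A A)"
    by (rule msum_msum_delta) (use cM in auto)
  finally have sum_conj: "msum ?N ?B (\<lambda>x. cmon_pair n x * X * dag (cmon_pair n x))
      = msum ?N ?B (\<lambda>A. 2^(2*n) \<cdot>\<^sub>m ?M A A)" .
  show ?thesis unfolding twirl_def sum_conj
    by (subst msum_smult) (auto simp: smult_smult intro!: msum_cong)
qed

lemma twirl_Lambda_kernel: assumes X: "X \<in> carrier_mat (4^n) (4^n)" and LX: "Lambda n * X = 0\<^sub>m (4^n) (4^n)"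
  shows "twirl n X = msum (4^n) (balanced n) (\<lambda>A. mtrace (joint_proj n A * X) \<cdot>\<^sub>m joint_proj n A)"
proof -
  have "twirl n X = msum (4^n) (bitstrings n) (\<lambda>A. joint_proj n A * X * joint_proj n A)" by (rule twirl_eq_pinching[OF X])
  also have "\<dots> = msum (4^n) (balanced n) (\<lambda>A. joint_proj n A * X * joint_proj n A)"
    by (rule msum_subset[OF balanced_subset]) (use joint_proj_mult_Lambda_kernel[OF _ _ X LX] in auto)
  also have "\<dots> = msum (4^n) (balanced n) (\<lambda>A. mtrace (joint_proj n A * X) \<cdot>\<^sub>m joint_proj n A)"
  proof (rule msum_cong)
    fix A assume "A \<in> balanced n"
    then have A: "A \<in> bitstrings n" using balanced_subset by auto
    interpret herm_idempotent "4^n" "joint_proj n A" by (rule joint_proj_herm_idempotent[OF A])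
    show "joint_proj n A * X * joint_proj n A = mtrace (joint_proj n A * X) \<cdot>\<^sub>m joint_proj n A"
      by (rule sandwich_trace_one[OF mtrace_joint_proj[OF A] X])
  qed
  finally show ?thesis .
qed

lemma sum_balanced_mtrace: assumes X: "X \<in> carrier_mat (4^n) (4^n)" and LX: "Lambda n * X = 0\<^sub>m (4^n) (4^n)"
  shows "(\<Sum>A\<in>balanced n. mtrace (joint_proj n A * X)) = mtrace X"
proof -
  have "(\<Sum>A\<in>balanced n. mtrace (joint_proj n A * X)) = (\<Sum>A\<in>bitstrings n. mtrace (joint_proj n A * X))"
    by (rule sum.mono_neutral_left) (use balanced_subset joint_proj_mult_Lambda_kernel[OF _ _ X LX] in \<open>auto simp: mtrace_zero\<close>)
  also have "\<dots> = mtrace (msum (4^n) (bitstrings n) (\<lambda>A. joint_proj n A * X))"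
    by (rule mtrace_msum[symmetric]) (use X in auto)
  also have "msum (4^n) (bitstrings n) (\<lambda>A. joint_proj n A * X) = X"
    by (subst msum_mult_right[OF X, symmetric]) (use X in \<open>auto simp: joint_proj_sum\<close>)
  finally show ?thesis .
qed

lemma twirl_Kproj: "twirl n (Kproj n) = Kproj n"
proof -
  have "twirl n (Kproj n) = msum (4^n) (balanced n) (\<lambda>A. mtrace (joint_proj n A * Kproj n) \<cdot>\<^sub>m joint_proj n A)"
    by (rule twirl_Lambda_kernel[OF Kproj_carrier Lambda_mult_Kproj])
  also have "\<dots> = msum (4^n) (balanced n) (joint_proj n)"
  proof (rule msum_cong)
    fix A assume A: "A \<in> balanced n"
    show "mtrace (joint_proj n A * Kproj n) \<cdot>\<^sub>m joint_proj n A = joint_proj n A"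
      unfolding joint_proj_mult_Kproj[OF A] mtrace_joint_proj[OF balanced_bitstrings[OF A]] by simp
  qed
  finally show ?thesis unfolding Kproj_def .
qed

section \<open>Averaging over a Majorana-mixing ensemble\<close>

definition ensemble_conj :: "nat \<Rightarrow> 'i set \<Rightarrow> ('i \<Rightarrow> real) \<Rightarrow> ('i \<Rightarrow> complex mat) \<Rightarrow> complex mat \<Rightarrow> complex mat" where
  "ensemble_conj n I pr U Y = msum (4^n) I (\<lambda>i. complex_of_real (pr i) \<cdot>\<^sub>m (kron (U i) (U i) * Y * dag (kron (U i) (U i))))"

lemma channel_eq_ensemble_conj_twirl: "channel n I pr U X = ensemble_conj n I pr U (twirl n X)"
  unfolding channel_def ensemble_conj_def twirl_def cmon_pair_def ..

lemma ensemble_conj_lincomb: assumes V: "\<And>i. i \<in> I \<Longrightarrow> kron (U i) (U i) \<in> carrier_mat (4^n) (4^n)"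
  and M: "\<And>k. k \<in> K \<Longrightarrow> M k \<in> carrier_mat (4^n) (4^n)"
  shows "ensemble_conj n I pr U (msum (4^n) K (\<lambda>k. c k \<cdot>\<^sub>m M k)) = msum (4^n) K (\<lambda>k. c k \<cdot>\<^sub>m ensemble_conj n I pr U (M k))"
proof -
  let ?N = "4^n" and ?V = "\<lambda>i. kron (U i) (U i)"
  have cZ: "?V i * M k * dag (?V i) \<in> carrier_mat ?N ?N" if "i \<in> I" "k \<in> K" for i k
    using V[OF that(1)] M[OF that(2)] by (meson dag_carrier mult_carrier_mat)
  have inner: "?V i * msum ?N K (\<lambda>k. c k \<cdot>\<^sub>m M k) * dag (?V i) = msum ?N K (\<lambda>k. c k \<cdot>\<^sub>m (?V i * M k * dag (?V i)))"
    if i: "i \<in> I" for i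
  proof -
    have "?V i * msum ?N K (\<lambda>k. c k \<cdot>\<^sub>m M k) * dag (?V i) = msum ?N K (\<lambda>k. ?V i * (c k \<cdot>\<^sub>m M k) * dag (?V i))"
      by (rule msum_conj[OF V[OF i]]) (use M in auto)
    also have "\<dots> = msum ?N K (\<lambda>k. c k \<cdot>\<^sub>m (?V i * M k * dag (?V i)))"
    proof (rule msum_cong)
      fix k assume k: "k \<in> K"
      have "dim_row (M k) = ?N" "dim_col (M k) = ?N" "dim_row (?V i) = ?N" "dim_col (?V i) = ?N"
        using M[OF k] V[OF i] by auto
      then show "?V i * (c k \<cdot>\<^sub>m M k) * dag (?V i) = c k \<cdot>\<^sub>m (?V i * M k * dag (?V i))"
        by (simp add: mat_dim_simps)
    qed
    finally show ?thesis .
  qed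
  have "ensemble_conj n I pr U (msum ?N K (\<lambda>k. c k \<cdot>\<^sub>m M k))
      = msum ?N I (\<lambda>i. complex_of_real (pr i) \<cdot>\<^sub>m msum ?N K (\<lambda>k. c k \<cdot>\<^sub>m (?V i * M k * dag (?V i))))"
    unfolding ensemble_conj_def by (rule msum_cong) (simp add: inner)
  also have "\<dots> = msum ?N I (\<lambda>i. msum ?N K (\<lambda>k. c k \<cdot>\<^sub>m (complex_of_real (pr i) \<cdot>\<^sub>m (?V i * M k * dag (?V i)))))"
    by (rule msum_cong, subst msum_smult) (use cZ in \<open>auto simp: smult_smult mult.commute intro!: msum_cong\<close>)
  also have "\<dots> = msum ?N K (\<lambda>k. msum ?N I (\<lambda>i. c k \<cdot>\<^sub>m (complex_of_real (pr i) \<cdot>\<^sub>m (?V i * M k * dag (?V i)))))"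
    by (rule msum_swap)
  also have "\<dots> = msum ?N K (\<lambda>k. c k \<cdot>\<^sub>m ensemble_conj n I pr U (M k))"
    unfolding ensemble_conj_def by (rule msum_cong, subst msum_smult) (use cZ in auto)
  finally show ?thesis .
qed

lemma Tk_carrier[simp]: "Tk n k \<in> carrier_mat (4^n) (4^n)"
  unfolding Tk_def by simp

lemma ensemble_conj_joint_proj: assumes A: "A \<in> bitstrings n"
  and V: "\<And>i. i \<in> I \<Longrightarrow> kron (U i) (U i) \<in> carrier_mat (4^n) (4^n)"
  and mix: "majorana_mixing n I pr U"
  shows "ensemble_conj n I pr U (joint_proj n A) = msum (4^n) {0..2*n} (\<lambda>k. ((\<Sum>x\<in>{x\<in>bitstrings n. hw x = k}. character n A x) / 2^(2*n)) \<cdot>\<^sub>m Tk n k)"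
proof -
  have "ensemble_conj n I pr U (joint_proj n A) = msum (4^n) (bitstrings n) (\<lambda>x. (character n A x / 2^(2*n)) \<cdot>\<^sub>m ensemble_conj n I pr U (cmon_pair n x))"
    unfolding joint_proj_expansion[OF A] by (rule ensemble_conj_lincomb[OF V]) auto
  also have "\<dots> = msum (4^n) (bitstrings n) (\<lambda>x. (character n A x / 2^(2*n)) \<cdot>\<^sub>m Tk n (hw x))"
    using mix unfolding majorana_mixing_def ensemble_conj_def cmon_pair_def by (intro msum_cong) auto
  also have "\<dots> = msum (4^n) {0..2*n} (\<lambda>k. msum (4^n) {x\<in>bitstrings n. hw x = k} (\<lambda>x. (character n A x / 2^(2*n)) \<cdot>\<^sub>m Tk n (hw x)))"
  proof (rule msum_partition)
    fix x assume "x \<in> bitstrings n"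
    then show "hw x \<in> {0..2*n}" using hw_le by simp
  qed auto
  also have "\<dots> = msum (4^n) {0..2*n} (\<lambda>k. ((\<Sum>x\<in>{x\<in>bitstrings n. hw x = k}. character n A x) / 2^(2*n)) \<cdot>\<^sub>m Tk n k)"
  proof (rule msum_cong)
    fix k
    have "msum (4^n) {x\<in>bitstrings n. hw x = k} (\<lambda>x. (character n A x / 2^(2*n)) \<cdot>\<^sub>m Tk n (hw x))
      = msum (4^n) {x\<in>bitstrings n. hw x = k} (\<lambda>x. (character n A x / 2^(2*n)) \<cdot>\<^sub>m Tk n k)"
      by (rule msum_cong) auto
    also have "\<dots> = (\<Sum>x\<in>{x\<in>bitstrings n. hw x = k}. character n A x / 2^(2*n)) \<cdot>\<^sub>m Tk n k"
      by (rule msum_smult_const) simp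
    finally show "msum (4^n) {x\<in>bitstrings n. hw x = k} (\<lambda>x. (character n A x / 2^(2*n)) \<cdot>\<^sub>m Tk n (hw x))
      = ((\<Sum>x\<in>{x\<in>bitstrings n. hw x = k}. character n A x) / 2^(2*n)) \<cdot>\<^sub>m Tk n k"
      by (simp add: sum_divide_distrib)
  qed
  finally show ?thesis .
qed

lemma prod_monom: "finite S \<Longrightarrow> (\<Prod>p\<in>S. monom (f p) (g p)) = monom (\<Prod>p\<in>S. f p) (\<Sum>p\<in>S. g p)"
  by (induction rule: finite_induct) (auto simp: mult_monom)

lemma sum_if_card: "finite S \<Longrightarrow> (\<Sum>p\<in>S. if P p then 1 else 0) = card {p\<in>S. P p}"
  by (simp add: sum.inter_filter[symmetric])

lemma monom_character: assumes x: "x \<in> bitstrings n"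
  shows "monom (character n A x) (hw x) = (\<Prod>p\<in>{1..2*n}. if x ! (p - 1) then monom (bsign (A ! (p - 1))) 1 else 1)"
proof -
  have "(\<Prod>p\<in>{1..2*n}. if x ! (p - 1) then monom (bsign (A ! (p - 1))) 1 else 1) =
    (\<Prod>p\<in>{1..2*n}. monom (if x ! (p - 1) then bsign (A ! (p - 1)) else 1) (if x ! (p - 1) then 1 else 0))"
    by (rule prod.cong) (auto simp: monom_0 one_pCons)
  also have "\<dots> = monom (character n A x) (\<Sum>p\<in>{1..2*n}. if x ! (p - 1) then 1 else 0)"
    unfolding character_def by (rule prod_monom) simp
  also have "(\<Sum>p\<in>{1..2*n}. if x ! (p - 1) then 1 else 0) = hw x"
    by (subst sum_if_card) (use card_true_positions[OF x] in auto)
  finally show ?thesis by simp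
qed

lemma sum_monom_character: assumes A: "A \<in> bitstrings n"
  shows "(\<Sum>x\<in>bitstrings n. monom (character n A x) (hw x)) = [:1,1:] ^ hw A * [:1,-1:] ^ (2*n - hw A)"
proof -
  have "(\<Sum>x\<in>bitstrings n. monom (character n A x) (hw x)) =
     (\<Sum>x\<in>bool_lists (2*n). \<Prod>p\<in>{1..2*n}. if x ! (p - 1) then monom (bsign (A ! (p - 1))) 1 else 1)"
    unfolding bitstrings_eq_bool_lists by (rule sum.cong) (auto simp: monom_character bitstrings_eq_bool_lists)
  also have "\<dots> = (\<Prod>p\<in>{1..2*n}. 1 + monom (bsign (A ! (p - 1))) 1)"
    by (rule sum_bool_lists_prod)
  also have "\<dots> = (\<Prod>p\<in>{1..2*n}. if A ! (p - 1) then [:1,1:] else [:1,-1:])"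
    by (rule prod.cong) (auto simp: bsign_def monom_Suc monom_0 one_pCons)
  also have "\<dots> = (\<Prod>p\<in>{1..2*n} \<inter> {p. A ! (p - 1)}. [:1,1:]) * (\<Prod>p\<in>{1..2*n} \<inter> - {p. A ! (p - 1)}. [:1,-1:])"
    by (rule prod.If_cases) simp
  also have "{1..2*n} \<inter> {p. A ! (p - 1)} = {p\<in>{1..2*n}. A ! (p - 1)}" by auto
  also have "{1..2*n} \<inter> - {p. A ! (p - 1)} = {p\<in>{1..2*n}. \<not> A ! (p - 1)}" by auto
  finally have eq: "(\<Sum>x\<in>bitstrings n. monom (character n A x) (hw x)) =
    (\<Prod>p\<in>{p\<in>{1..2*n}. A ! (p - 1)}. [:1,1:]) * (\<Prod>p\<in>{p\<in>{1..2*n}. \<not> A ! (p - 1)}. [:1,-1:])" .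
  show ?thesis unfolding eq prod_constant card_true_positions[OF A] card_false_positions[OF A] ..
qed

lemma character_weight_sum_eq: assumes A: "A \<in> bitstrings n" and B: "B \<in> bitstrings n" and h: "hw A = hw B"
  shows "(\<Sum>x\<in>{x\<in>bitstrings n. hw x = k}. character n A x) = (\<Sum>x\<in>{x\<in>bitstrings n. hw x = k}. character n B x)"
proof -
  have c: "coeff (\<Sum>x\<in>bitstrings n. monom (character n C x) (hw x)) k = (\<Sum>x\<in>{x\<in>bitstrings n. hw x = k}. character n C x)" for C
    unfolding coeff_sum by (simp add: sum.inter_filter)
  show ?thesis using sum_monom_character[OF A] sum_monom_character[OF B] h c[of A] c[of B] by simp
qed

definition balanced_witness :: "nat \<Rightarrow> bool list" where "balanced_witness n = replicate n True @ replicate n False"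

lemma balanced_witness_balanced: "balanced_witness n \<in> balanced n"
  unfolding balanced_witness_def balanced_def bitstrings_def hw_def by simp

lemma ensemble_conj_joint_proj_eq_of_hw_eq: assumes A: "A \<in> bitstrings n" and B: "B \<in> bitstrings n"
  and hw: "hw A = hw B"
  and V: "\<And>i. i \<in> I \<Longrightarrow> kron (U i) (U i) \<in> carrier_mat (4^n) (4^n)"
  and mix: "majorana_mixing n I pr U"
  shows "ensemble_conj n I pr U (joint_proj n A) = ensemble_conj n I pr U (joint_proj n B)"
proof -
  have "ensemble_conj n I pr U (joint_proj n A) = msum (4^n) {0..2*n}
      (\<lambda>k. ((\<Sum>x\<in>{x\<in>bitstrings n. hw x = k}. character n A x) / 2^(2*n)) \<cdot>\<^sub>m Tk n k)"
    by (rule ensemble_conj_joint_proj[OF A V mix])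
  also have "\<dots> = msum (4^n) {0..2*n}
      (\<lambda>k. ((\<Sum>x\<in>{x\<in>bitstrings n. hw x = k}. character n B x) / 2^(2*n)) \<cdot>\<^sub>m Tk n k)"
    using character_weight_sum_eq[OF A B hw] by simp
  also have "\<dots> = ensemble_conj n I pr U (joint_proj n B)"
    by (rule ensemble_conj_joint_proj[OF B V mix, symmetric])
  finally show ?thesis .
qed

lemma channel_Lambda_kernel: assumes X: "X \<in> carrier_mat (4^n) (4^n)" and LX: "Lambda n * X = 0\<^sub>m (4^n) (4^n)"
  and V: "\<And>i. i \<in> I \<Longrightarrow> kron (U i) (U i) \<in> carrier_mat (4^n) (4^n)"
  and mix: "majorana_mixing n I pr U"
  shows "channel n I pr U X = mtrace X \<cdot>\<^sub>m ensemble_conj n I pr U (joint_proj n (balanced_witness n))"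
proof -
  have "channel n I pr U X = ensemble_conj n I pr U (msum (4^n) (balanced n) (\<lambda>A. mtrace (joint_proj n A * X) \<cdot>\<^sub>m joint_proj n A))"
    unfolding channel_eq_ensemble_conj_twirl twirl_Lambda_kernel[OF X LX] ..
  also have "\<dots> = msum (4^n) (balanced n) (\<lambda>A. mtrace (joint_proj n A * X) \<cdot>\<^sub>m ensemble_conj n I pr U (joint_proj n A))"
    by (rule ensemble_conj_lincomb[OF V]) auto
  also have "\<dots> = msum (4^n) (balanced n) (\<lambda>A. mtrace (joint_proj n A * X) \<cdot>\<^sub>m ensemble_conj n I pr U (joint_proj n (balanced_witness n)))"
  proof (rule msum_cong)
    fix A assume A: "A \<in> balanced n"
    have "ensemble_conj n I pr U (joint_proj n A) = ensemble_conj n I pr U (joint_proj n (balanced_witness n))"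
      using A balanced_witness_balanced[of n] unfolding balanced_def
      by (intro ensemble_conj_joint_proj_eq_of_hw_eq[OF _ _ _ V mix]) auto
    then show "mtrace (joint_proj n A * X) \<cdot>\<^sub>m ensemble_conj n I pr U (joint_proj n A)
        = mtrace (joint_proj n A * X) \<cdot>\<^sub>m ensemble_conj n I pr U (joint_proj n (balanced_witness n))" by simp
  qed
  also have "\<dots> = (\<Sum>A\<in>balanced n. mtrace (joint_proj n A * X)) \<cdot>\<^sub>m ensemble_conj n I pr U (joint_proj n (balanced_witness n))"
    by (rule msum_smult_const) (simp add: ensemble_conj_def)
  finally show ?thesis unfolding sum_balanced_mtrace[OF X LX] .
qed

section \<open>Gaussian unitaries\<close>

lemma gaussian_conj_Lambda_term:
  assumes U: "U \<in> carrier_mat (2^n) (2^n)" and p: "p \<in> {1..2*n}"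
    and conj: "U * majorana n p * dag U = msum (2^n) {1..2*n} (\<lambda>q. complex_of_real (R p q) \<cdot>\<^sub>m majorana n q)"
  shows "kron U U * Lambda_term n p * dag (kron U U) = msum (4^n) {1..2*n} (\<lambda>q. msum (4^n) {1..2*n}
    (\<lambda>q'. complex_of_real (R p q * R p q') \<cdot>\<^sub>m kron (majorana n q) (majorana n q')))"
  using kron_msum_smult[of "{1..2*n}" "majorana n" "2^n" "{1..2*n}" "majorana n" "2^n"
      "\<lambda>q. complex_of_real (R p q)" "\<lambda>q. complex_of_real (R p q)"]
  unfolding Lambda_term_def kron_conj_kron[OF U majorana_carrier] conj four_pow by simp

text \<open>Orthogonality of R makes the rotated Majorana operators satisfy the same sum as the original
  ones: sum_p R_pq R_pq' = delta_qq'.\<close>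

lemma gaussian_conj_Lambda: assumes g: "gaussian_unitary n U"
  shows "kron U U * Lambda n * dag (kron U U) = Lambda n"
proof -
  let ?N = "4^n" and ?V = "kron U U" and ?I = "{1..2*n}"
  have uni: "unitary_mat (2^n) U" using g unfolding gaussian_unitary_def by auto
  then have U: "U \<in> carrier_mat (2^n) (2^n)" unfolding unitary_mat_def by auto
  have V: "?V \<in> carrier_mat ?N ?N" by (rule kron_unitary_carrier[OF uni])
  obtain R :: "nat \<Rightarrow> nat \<Rightarrow> real" where
    rows: "\<forall>p\<in>?I. \<forall>p'\<in>?I. (\<Sum>q\<in>?I. R p q * R p' q) = (if p = p' then 1 else 0)"
    and conj: "\<forall>p\<in>?I. U * majorana n p * dag U = msum (2^n) ?I (\<lambda>q. complex_of_real (R p q) \<cdot>\<^sub>m majorana n q)"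
    using g unfolding gaussian_unitary_def by blast
  let ?K = "\<lambda>q q'. kron (majorana n q) (majorana n q')"
  have cK: "?K q q' \<in> carrier_mat ?N ?N" for q q'
    using kron_carrier[OF majorana_carrier majorana_carrier, of n q n q'] four_pow[of n] by simp
  have "?V * Lambda n * dag ?V = msum ?N ?I (\<lambda>p. ?V * Lambda_term n p * dag ?V)"
    unfolding Lambda_eq_msum_Lambda_term by (rule msum_conj[OF V]) simp
  also have "\<dots> = msum ?N ?I (\<lambda>p. msum ?N ?I (\<lambda>q. msum ?N ?I (\<lambda>q'. complex_of_real (R p q * R p q') \<cdot>\<^sub>m ?K q q')))"
    using conj by (intro msum_cong gaussian_conj_Lambda_term[OF U]) auto
  also have "\<dots> = msum ?N ?I (\<lambda>q. msum ?N ?I (\<lambda>q'. (\<Sum>p\<in>?I. complex_of_real (R p q * R p q')) \<cdot>\<^sub>m ?K q q'))"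
    by (rule msum_collect_outer[OF cK])
  also have "\<dots> = msum ?N ?I (\<lambda>q. msum ?N ?I (\<lambda>q'. (if q = q' then 1 else 0) \<cdot>\<^sub>m ?K q q'))"
  proof (rule msum_cong, rule msum_cong)
    fix q q' assume q: "q \<in> ?I" and q': "q' \<in> ?I"
    have "(\<Sum>p\<in>?I. complex_of_real (R p q * R p q')) = (if q = q' then 1 else 0)"
      unfolding of_real_sum[symmetric] orthogonal_cols[OF rows q q'] by simp
    then show "(\<Sum>p\<in>?I. complex_of_real (R p q * R p q')) \<cdot>\<^sub>m ?K q q' = (if q = q' then 1 else 0) \<cdot>\<^sub>m ?K q q'"
      by simp
  qed
  also have "\<dots> = msum ?N ?I (\<lambda>q. ?K q q)"
    using msum_msum_delta[of ?I ?K ?N 1] cK by simp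
  also have "\<dots> = Lambda n" unfolding Lambda_def ..
  finally show ?thesis .
qed

lemma commute_of_unitary_conj:
  assumes V: "V \<in> carrier_mat N N" and M: "M \<in> carrier_mat N N"
    and unit: "dag V * V = 1\<^sub>m N" and conj: "V * M * dag V = M"
  shows "V * M = M * V" "dag V * M = M * dag V"
proof -
  have dV: "dag V \<in> carrier_mat N N" using V by simp
  have "V * M = V * M * (dag V * V)" unfolding unit using V M by simp
  also have "\<dots> = (V * M * dag V) * V"
    using V M by (simp add: dim_mult_assoc)
  finally show "V * M = M * V" unfolding conj .
  have "dag V * M = dag V * (V * M * dag V)" unfolding conj ..
  also have "\<dots> = (dag V * V) * M * dag V"
    using V M by (simp add: dim_mult_assoc)
  also have "\<dots> = M * dag V" unfolding unit using M dV by simp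
  finally show "dag V * M = M * dag V" .
qed

text \<open>If V and its adjoint both commute with M, then both map ker M into itself, so the projector Q
  onto ker M absorbs V Q and V^dag Q; taking adjoints gives Q V Q = Q V.\<close>

lemma commute_kernel_projector:
  assumes V: "V \<in> carrier_mat N N" and M: "M \<in> carrier_mat N N" and Q: "Q \<in> carrier_mat N N"
    and herm: "dag Q = Q" and kill: "M * Q = 0\<^sub>m N N"
    and absorb: "\<And>Y. Y \<in> carrier_mat N N \<Longrightarrow> M * Y = 0\<^sub>m N N \<Longrightarrow> Q * Y = Y"
    and comm: "V * M = M * V" "dag V * M = M * dag V"
  shows "V * Q = Q * V"
proof -
  have keep: "Q * (W * Q) = W * Q" if W: "W \<in> carrier_mat N N" and WM: "W * M = M * W" for W
  proof (rule absorb)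
    show "W * Q \<in> carrier_mat N N" using W Q by simp
    have "M * (W * Q) = (M * W) * Q" by (rule assoc_mult_mat[symmetric, OF M W Q])
    also have "\<dots> = W * (M * Q)" unfolding WM[symmetric] by (rule assoc_mult_mat[OF W M Q])
    finally show "M * (W * Q) = 0\<^sub>m N N" unfolding kill using W by simp
  qed
  have dV: "dag V \<in> carrier_mat N N" using V by simp
  have adj: "dag (dag V * Q) = Q * V" using dag_mult[OF dV Q] herm by simp
  have "Q * V * Q = dag (dag V * Q) * dag Q" unfolding adj herm ..
  also have "\<dots> = dag (Q * (dag V * Q))" by (rule dag_mult[symmetric, OF Q mult_carrier_mat[OF dV Q]])
  also have "\<dots> = Q * V" unfolding keep[OF dV comm(2)] adj ..
  finally have QVQ: "Q * V * Q = Q * V" .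
  have "V * Q = Q * (V * Q)" using keep[OF V comm(1)] by simp
  also have "\<dots> = Q * V * Q" by (rule assoc_mult_mat[symmetric, OF Q V Q])
  finally show ?thesis unfolding QVQ .
qed

lemma gaussian_kron_commute_Kproj: assumes g: "gaussian_unitary n U"
  shows "kron U U * Kproj n = Kproj n * kron U U"
proof -
  have uni: "unitary_mat (2^n) U" using g unfolding gaussian_unitary_def by auto
  note V = kron_unitary_carrier[OF uni]
  note comm = commute_of_unitary_conj[OF V Lambda_carrier kron_unitary(2)[OF uni] gaussian_conj_Lambda[OF g]]
  show ?thesis
    by (rule commute_kernel_projector[OF V Lambda_carrier Kproj_carrier Kproj_herm Lambda_mult_Kproj
          Kproj_mult_Lambda_kernel comm])
qed

lemma ensemble_kron_carrier: "gaussian_ensemble n I pr U \<Longrightarrow> i \<in> I \<Longrightarrow> kron (U i) (U i) \<in> carrier_mat (4^n) (4^n)"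
  unfolding gaussian_ensemble_def gaussian_unitary_def by (auto intro: kron_unitary_carrier)

lemma ensemble_conj_Kproj: assumes ens: "gaussian_ensemble n I pr U"
  shows "ensemble_conj n I pr U (Kproj n) = Kproj n"
proof -
  have fin: "finite I" and s1: "(\<Sum>i\<in>I. pr i) = 1" and g: "\<And>i. i \<in> I \<Longrightarrow> gaussian_unitary n (U i)"
    using ens unfolding gaussian_ensemble_def by auto
  have "ensemble_conj n I pr U (Kproj n) = msum (4^n) I (\<lambda>i. complex_of_real (pr i) \<cdot>\<^sub>m Kproj n)"
    unfolding ensemble_conj_def
  proof (rule msum_cong)
    fix i assume i: "i \<in> I"
    have uni: "unitary_mat (2^n) (U i)" using g[OF i] unfolding gaussian_unitary_def by auto
    have dV: "dim_row (kron (U i) (U i)) = 4^n" "dim_col (kron (U i) (U i)) = 4^n"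
      using kron_unitary_carrier[OF uni] by auto
    have "kron (U i) (U i) * Kproj n * dag (kron (U i) (U i)) = Kproj n * (kron (U i) (U i) * dag (kron (U i) (U i)))"
      unfolding gaussian_kron_commute_Kproj[OF g[OF i]] using dV by (simp add: dim_mult_assoc)
    also have "\<dots> = Kproj n" unfolding kron_unitary(1)[OF uni] by simp
    finally show "complex_of_real (pr i) \<cdot>\<^sub>m (kron (U i) (U i) * Kproj n * dag (kron (U i) (U i))) = complex_of_real (pr i) \<cdot>\<^sub>m Kproj n"
      by simp
  qed
  also have "\<dots> = (\<Sum>i\<in>I. complex_of_real (pr i)) \<cdot>\<^sub>m Kproj n" by (rule msum_smult_const) simp
  also have "(\<Sum>i\<in>I. complex_of_real (pr i)) = 1" using s1 by (metis of_real_1 of_real_sum)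
  finally show ?thesis by simp
qed

lemma Kproj_eq_ensemble_conj_witness: assumes ens: "gaussian_ensemble n I pr U" and mix: "majorana_mixing n I pr U"
  shows "Kproj n = of_nat (card (balanced n)) \<cdot>\<^sub>m ensemble_conj n I pr U (joint_proj n (balanced_witness n))"
proof -
  have "Kproj n = channel n I pr U (Kproj n)" unfolding channel_eq_ensemble_conj_twirl twirl_Kproj ensemble_conj_Kproj[OF ens] ..
  also have "\<dots> = mtrace (Kproj n) \<cdot>\<^sub>m ensemble_conj n I pr U (joint_proj n (balanced_witness n))"
    by (rule channel_Lambda_kernel[OF Kproj_carrier Lambda_mult_Kproj ensemble_kron_carrier[OF ens] mix])
  finally show ?thesis unfolding mtrace_Kproj .
qed

theorem lemma11:
  fixes n :: nat and \<rho> :: "complex mat"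
    and I :: "'i set" and pr :: "'i \<Rightarrow> real" and U :: "'i \<Rightarrow> complex mat"
  assumes "density_op (4 ^ n) \<rho>"
    and "\<forall>v\<in>carrier_vec (4 ^ n). \<rho> *\<^sub>v v \<in> Kspace n"
    and "gaussian_ensemble n I pr U"
    and "majorana_mixing n I pr U"
  shows "channel n I pr U \<rho> = (1 / of_nat (kernel_dim (Lambda n))) \<cdot>\<^sub>m orth_proj (4 ^ n) (Kspace n)"
proof -
  have \<rho>: "\<rho> \<in> carrier_mat (4^n) (4^n)" and tr: "mtrace \<rho> = 1"
    using assms(1) unfolding density_op_def by auto
  define M where "M = ensemble_conj n I pr U (joint_proj n (balanced_witness n))"
  have "channel n I pr U \<rho> = M"
    using channel_Lambda_kernel[OF \<rho> Lambda_mult_range_Kspace[OF \<rho> assms(2)]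
        ensemble_kron_carrier[OF assms(3)] assms(4)] tr
    unfolding M_def by simp
  moreover have "Kproj n = of_nat (card (balanced n)) \<cdot>\<^sub>m M"
    unfolding M_def by (rule Kproj_eq_ensemble_conj_witness[OF assms(3,4)])
  moreover have "card (balanced n) \<noteq> 0"
    using balanced_witness_balanced[of n] finite_balanced[of n] by (metis card_0_eq empty_iff)
  ultimately show ?thesis unfolding kernel_dim_Lambda orth_proj_Kspace by (simp add: smult_smult)
qed

end
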